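(* Let $\sigma,\tau,\bar\sigma,\bar\tau$ satisfy the Standing Hypothesis. Let $m,n,m',n'$ be positive integers with $m+n=m'+n'$, and let $x,x'$ be non-negative integers with $x,x'\le\min\{m,n,m',n'\}+1$. Then $$K_{m,n}(x)-K_{m',n'}(x)=K_{m,n}(x')-K_{m',n'}(x').$$
   Context: Skew diagrams: for partitions $\mu\subseteq\lambda$, the skew diagram $\lambda/\mu$ is the set of boxes $(i,j)$ with $\mu_i<j\le\lambda_i$; skew diagrams are identified up to deleting empty rows or columns. $s_{\lambda/\mu}=\sum_T x^{c(T)}$ over semistandard Young tableaux of shape $\lambda/\mu$. Overlap notation: for $\alpha=(\alpha_1,\dots,\alpha_L)$ with $\alpha_i\ge1$ and $\beta=(\beta_1,\dots,\beta_{L-1})$ with $0\le\beta_i\le\min\{\alpha_i,\alpha_{i+1}\}$, $(\alpha\,|\,\beta)$ is the skew diagram $\lambda/\mu$ with $L$ nonempty rows, $\lambda_i-\mu_i=\alpha_i$ and $\lambda_{i+1}-\mu_i=\beta_i$; $\{\alpha\,|\,\beta\}$ is its skew Schur function. Commas denote concatenation; $a^j$ is $j$ copies of $a$. Standing Hypothesis: $\sigma=(\sigma_1,\dots,\sigma_s)$, $\tau=(\tau_1,\dots,\tau_t)$ compositions, $s,t\ge0$; $\bar\sigma,\bar\tau$ sequences of non-negative integers of lengths $s,t$; $\bar\sigma_s=1$ if $s>0$; $\bar\tau_1=1$ if $t>0$; $\bar\sigma_i\le\min\{\sigma_i,\sigma_{i+1}\}$ ($1\le i<s$), $\bar\tau_i\le\min\{\tau_i,\tau_{i-1}\}$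 ($1<i\le t$). $\sigma\backslash\sigma_s$ removes the last part of $\sigma$, $\tau\backslash\tau_1$ removes the first part of $\tau$, similarly for $\bar\sigma,\bar\tau$. Definition of $K$: for integers $m,n\ge1$ and $0\le x\le\min\{m,n\}+1$, $$K_{m,n}(x)=\begin{cases}\{\sigma,m,n,\tau\,|\,\bar\sigma,x,\bar\tau\}&x\le m,\ x\le n;\\ -\{\sigma\backslash\sigma_s,m+\sigma_s,n,\tau\,|\,\bar\sigma\backslash\bar\sigma_s,x,\bar\tau\}&x=m+1,\ x\le n;\\ -\{\sigma,m,n+\tau_1,\tau\backslash\tau_1\,|\,\bar\sigma,x,\bar\tau\backslash\bar\tau_1\}&x\le m,\ x=n+1;\\ \{\sigma\backslash\sigma_s,m+\sigma_s,n+\tau_1,\tau\backslash\tau_1\,|\,\bar\sigma\backslash\bar\sigma_s,x,\bar\tau\backslash\bar\tau_1\}&x=m+1,\ x=n+1,\end{cases}$$ where any term containing $\sigma\backslash\sigma_s$ is set to $0$ if $s=0$, and any term containing $\tau\backslash\tau_1$ is set to $0$ if $t=0$. *)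

theory Defs
  imports Main "HOL-Library.Function_Algebras"
begin

(* Monomials x^c in variables x_1, x_2, ... are exponent vectors c :: nat => nat
   (index 0 unused; entries of tableaux are positive). *)
type_synonym fps_sym = "(nat \<Rightarrow> nat) \<Rightarrow> int"

(* Boxes (row, column); columns are integers so that skew shapes can be placed
   up to horizontal translation (the skew Schur function is translation invariant). *)
type_synonym box = "nat \<times> int"

(* Column of the first box of row r in the diagram (alpha | beta), rows numbered
   from 0 top to bottom (English convention).  Overlap beta_i = lambda_{i+1} - mu_i
   forces start_{i+1} = start_i + beta_i - alpha_{i+1}. *)
fun col_start :: "nat list \<Rightarrow> nat list \<Rightarrow> nat \<Rightarrow> int" where
  "col_start \<alpha> \<beta> 0 = 0"
| "col_start \<alpha> \<beta> (Suc i) = col_start \<alpha> \<beta> i + int (\<beta> ! i) - int (\<alpha> ! Suc i)"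

definition overlap_diagram :: "nat list \<Rightarrow> nat list \<Rightarrow> box set" where
  "overlap_diagram \<alpha> \<beta> =
     {(r, c). r < length \<alpha> \<and> col_start \<alpha> \<beta> r \<le> c \<and> c < col_start \<alpha> \<beta> r + int (\<alpha> ! r)}"

definition ssyt :: "box set \<Rightarrow> (box \<Rightarrow> nat) \<Rightarrow> bool" where
  "ssyt D T \<longleftrightarrow>
     (\<forall>b. b \<notin> D \<longrightarrow> T b = 0) \<and>
     (\<forall>b\<in>D. T b \<ge> 1) \<and>
     (\<forall>r c. (r, c) \<in> D \<and> (r, c + 1) \<in> D \<longrightarrow> T (r, c) \<le> T (r, c + 1)) \<and>
     (\<forall>r c. (r, c) \<in> D \<and> (Suc r, c) \<in> D \<longrightarrow> T (r, c) < T (Suc r, c))"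

definition content :: "box set \<Rightarrow> (box \<Rightarrow> nat) \<Rightarrow> nat \<Rightarrow> nat" where
  "content D T = (\<lambda>i. card {b \<in> D. T b = i})"

definition skew_schur :: "box set \<Rightarrow> fps_sym" where
  "skew_schur D = (\<lambda>c. int (card {T. ssyt D T \<and> content D T = c}))"

definition ov :: "nat list \<Rightarrow> nat list \<Rightarrow> fps_sym" where
  "ov \<alpha> \<beta> = skew_schur (overlap_diagram \<alpha> \<beta>)"

definition standing_hyp :: "nat list \<Rightarrow> nat list \<Rightarrow> nat list \<Rightarrow> nat list \<Rightarrow> bool" where
  "standing_hyp \<sigma> \<tau> \<sigma>b \<tau>b \<longleftrightarrow>
     (\<forall>a\<in>set \<sigma>. a \<ge> 1) \<and> (\<forall>a\<in>set \<tau>. a \<ge> 1) \<and>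
     length \<sigma>b = length \<sigma> \<and> length \<tau>b = length \<tau> \<and>
     (\<sigma> \<noteq> [] \<longrightarrow> last \<sigma>b = 1) \<and> (\<tau> \<noteq> [] \<longrightarrow> hd \<tau>b = 1) \<and>
     (\<forall>i. i + 1 < length \<sigma> \<longrightarrow> \<sigma>b ! i \<le> min (\<sigma> ! i) (\<sigma> ! (i + 1))) \<and>
     (\<forall>i. 0 < i \<and> i < length \<tau> \<longrightarrow> \<tau>b ! i \<le> min (\<tau> ! i) (\<tau> ! (i - 1)))"

(* K_{m,n}(x); the terms with sigma\sigma_s (resp. tau\tau_1) are 0 if s = 0 (resp. t = 0) *)
definition K :: "nat list \<Rightarrow> nat list \<Rightarrow> nat list \<Rightarrow> nat list \<Rightarrow> nat \<Rightarrow> nat \<Rightarrow> nat \<Rightarrow> fps_sym" where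
  "K \<sigma> \<tau> \<sigma>b \<tau>b m n x =
    (if x \<le> m \<and> x \<le> n then ov (\<sigma> @ [m, n] @ \<tau>) (\<sigma>b @ [x] @ \<tau>b)
     else if x = m + 1 \<and> x \<le> n then
       (if \<sigma> = [] then 0
        else - ov (butlast \<sigma> @ [m + last \<sigma>, n] @ \<tau>) (butlast \<sigma>b @ [x] @ \<tau>b))
     else if x \<le> m \<and> x = n + 1 then
       (if \<tau> = [] then 0
        else - ov (\<sigma> @ [m, n + hd \<tau>] @ tl \<tau>) (\<sigma>b @ [x] @ tl \<tau>b))
     else if x = m + 1 \<and> x = n + 1 then
       (if \<sigma> = [] \<or> \<tau> = [] then 0
        else ov (butlast \<sigma> @ [m + last \<sigma>, n + hd \<tau>] @ tl \<tau>) (butlast \<sigma>b @ [x] @ tl \<tau>b))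
     else 0)"

end

theory Submission
  imports Defs "HOL-Library.Multiset"
begin

(* Coefficientwise, K_{m,n}(x) is a signed count of tableaux, and the theorem says that
   K_{m,n}(x) - K_{m',n'}(x) does not depend on x.

   Reading a semistandard tableau of shape (alpha | beta) row by row identifies the coefficient of
   x^c in {alpha | beta} with the number of lists of weakly increasing positive rows of lengths
   alpha_i, consecutive rows being column-strict on their beta_i common columns (ov_eq_card_rows).
   In all four cases of K_{m,n}(x) the rows coming from sigma and tau form a "frame" (U,V), and the
   remaining data is a pair of rows (a,b) of lengths (m,n), possibly glued to the adjacent frame rows.
   A bijection exchanging initial segments of a and b (the switch) then yields the key identity
       K_{m,n}(x)(c) = J(m,n) - [x > 0] * F(m+n+1-x, x-1)                        (K_formula)
   where J(m,n) counts frames with a attached below the sigma part and b above the tau part, and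
   F(k,l) counts frames with both parts attached to the first row.  The second term depends on (m,n)
   only through m+n, hence K_{m,n}(x) - K_{m',n'}(x) = J(m,n) - J(m',n') for every admissible x. *)

section \<open>Rows and the row model of skew Schur functions\<close>

definition is_row :: "nat \<Rightarrow> nat list \<Rightarrow> bool" where
  "is_row k w \<longleftrightarrow> length w = k \<and> sorted w \<and> (\<forall>y\<in>set w. 1 \<le> y)"

lemma is_row_len: "is_row k w \<Longrightarrow> length w = k" by (simp add: is_row_def)

lemma is_row_sorted: "is_row k w \<Longrightarrow> sorted w" by (simp add: is_row_def)

lemma is_row_ne: "is_row k w \<Longrightarrow> 1 \<le> k \<Longrightarrow> w \<noteq> []"
  by (auto simp: is_row_def)

lemma is_row_last_nth: assumes "is_row k w" "0 < k" shows "last w = w!(k-1)"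
proof -
  have "w \<noteq> []" using assms by (auto simp: is_row_def)
  then show ?thesis using assms by (simp add: is_row_def last_conv_nth)
qed

lemma is_row_hd_nth: "is_row k w \<Longrightarrow> 0 < k \<Longrightarrow> hd w = w!0"
  by (auto simp: is_row_def intro!: hd_conv_nth)

lemma sorted_app:
  assumes "sorted xs" "sorted ys" "xs \<noteq> [] \<Longrightarrow> ys \<noteq> [] \<Longrightarrow> last xs \<le> hd ys"
  shows "sorted (xs @ ys)"
proof -
  have "\<forall>x\<in>set xs. \<forall>y\<in>set ys. x \<le> y"
  proof (intro ballI)
    fix x y assume x: "x \<in> set xs" and y: "y \<in> set ys"
    then have ne: "xs \<noteq> []" "ys \<noteq> []" by auto
    from x obtain k where k: "k < length xs" "xs!k = x" by (auto simp: in_set_conv_nth)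
    have "xs!k \<le> xs!(length xs - 1)" using k assms(1) by (intro sorted_nth_mono) auto
    then have "x \<le> last xs" using k ne by (simp add: last_conv_nth)
    moreover from y obtain l where l: "l < length ys" "ys!l = y" by (auto simp: in_set_conv_nth)
    have "ys!0 \<le> ys!l" using l assms(2) by (intro sorted_nth_mono) auto
    then have "hd ys \<le> y" using l ne by (simp add: hd_conv_nth)
    ultimately show "x \<le> y" using assms(3)[OF ne] by (meson order.trans)
  qed
  then show ?thesis using assms by (simp add: sorted_append)
qed

lemma last_take_nth: "0 < k \<Longrightarrow> k \<le> length b \<Longrightarrow> last (take k b) = b!(k-1)"
  by (subst last_conv_nth) auto

lemma is_row_append: "is_row (m + k) w \<longleftrightarrow> (\<exists>a u. w = a@u \<and> is_row m a \<and> is_row k u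
    \<and> (a \<noteq> [] \<longrightarrow> u \<noteq> [] \<longrightarrow> last a \<le> hd u))"
proof
  assume h: "is_row (m + k) w"
  define a where "a = take m w"
  define u where "u = drop m w"
  have w: "w = a@u" by (simp add: a_def u_def)
  have lw: "length w = m + k" and sw: "sorted w" and pw: "\<forall>y\<in>set w. 1 \<le> y" using h
      by (auto simp: is_row_def)
  have "is_row m a" using lw sw pw by (auto simp: is_row_def a_def dest: in_set_takeD)
  moreover have "is_row k u" using lw sw pw by (auto simp: is_row_def u_def dest: in_set_dropD)
  moreover have "a \<noteq> [] \<longrightarrow> u \<noteq> [] \<longrightarrow> last a \<le> hd u"
  proof (intro impI)
    assume "a \<noteq> []" "u \<noteq> []"
    then have m0: "0 < m" "m < length w" using lw by (auto simp: a_def u_def)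
    have "last a = w!(m-1)" using m0 by (simp add: a_def last_take_nth)
    moreover have "hd u = w!m" using m0 by (simp add: u_def hd_drop_conv_nth)
    moreover have "w!(m-1) \<le> w!m" using sw m0 by (intro sorted_nth_mono) auto
    ultimately show "last a \<le> hd u" by simp
  qed
  ultimately show "\<exists>a u. w = a@u \<and> is_row m a \<and> is_row k u \<and> (a \<noteq> [] \<longrightarrow> u \<noteq> [] \<longrightarrow> last a \<le> hd u)"
    using w by blast
next
  assume "\<exists>a u. w = a@u \<and> is_row m a \<and> is_row k u \<and> (a \<noteq> [] \<longrightarrow> u \<noteq> [] \<longrightarrow> last a \<le> hd u)"
  then obtain a u where h: "w = a@u" "is_row m a" "is_row k u" "a \<noteq> [] \<longrightarrow> u \<noteq> [] \<longrightarrow> last a \<le> hd u" by blast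
  have "sorted (a@u)" using h by (intro sorted_app) (auto simp: is_row_def)
  then show "is_row (m + k) w" using h by (auto simp: is_row_def)
qed

(* Column strictness between a row a and the row b below it when they share y columns:
   the first y entries of a lie strictly above the last y entries of b. *)
definition linked :: "nat \<Rightarrow> nat list \<Rightarrow> nat list \<Rightarrow> bool" where
  "linked y a b \<longleftrightarrow> (\<forall>j<y. a!j < b!(length b - y + j))"

definition chain_ok :: "('a \<Rightarrow> bool) \<Rightarrow> ('b \<Rightarrow> 'a \<Rightarrow> 'a \<Rightarrow> bool) \<Rightarrow> 'a list \<Rightarrow> 'b list \<Rightarrow> bool" where
  "chain_ok P Q xs bs \<longleftrightarrow>
     (\<forall>r<length xs. P (xs!r)) \<and> (\<forall>r. Suc r < length xs \<longrightarrow> Q (bs!r) (xs!r) (xs!Suc r))"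

definition tab_rows :: "nat list \<Rightarrow> nat list \<Rightarrow> nat list list \<Rightarrow> bool" where
  "tab_rows \<alpha> \<beta> ws \<longleftrightarrow> length ws = length \<alpha> \<and>
     chain_ok (\<lambda>(k,w). is_row k w) (\<lambda>y (k,w) (k',w'). linked y w w') (zip \<alpha> ws) \<beta>"

definition overlaps_ok :: "nat list \<Rightarrow> nat list \<Rightarrow> bool" where
  "overlaps_ok \<alpha> \<beta> \<longleftrightarrow> chain_ok (\<lambda>k. True) (\<lambda>y k k'. y \<le> k \<and> y \<le> k') \<alpha> \<beta>"

lemma tab_rows_iff: "tab_rows \<alpha> \<beta> ws \<longleftrightarrow> length ws = length \<alpha> \<and> (\<forall>r<length \<alpha>. is_row (\<alpha>!r) (ws!r)) \<and>
   (\<forall>r. Suc r < length \<alpha> \<longrightarrow> linked (\<beta>!r) (ws!r) (ws!Suc r))"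
  by (auto simp: tab_rows_def chain_ok_def)

lemma overlaps_ok_nth:
  "overlaps_ok \<alpha> \<beta> \<Longrightarrow> Suc r < length \<alpha> \<Longrightarrow> \<beta>!r \<le> \<alpha>!r \<and> \<beta>!r \<le> \<alpha>!Suc r"
  by (simp add: overlaps_ok_def chain_ok_def)

definition rows_of :: "nat list \<Rightarrow> nat list \<Rightarrow> (box \<Rightarrow> nat) \<Rightarrow> nat list list" where
  "rows_of \<alpha> \<beta> T = map (\<lambda>r. map (\<lambda>k. T (r, col_start \<alpha> \<beta> r + int k)) [0..<\<alpha>!r]) [0..<length \<alpha>]"

definition filling_of :: "nat list \<Rightarrow> nat list \<Rightarrow> nat list list \<Rightarrow> box \<Rightarrow> nat" where
  "filling_of \<alpha> \<beta> ws = (\<lambda>(r,x).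
     if (r,x) \<in> overlap_diagram \<alpha> \<beta> then ws!r!nat (x - col_start \<alpha> \<beta> r) else 0)"

lemma mem_overlap_diagram: "(r,x) \<in> overlap_diagram \<alpha> \<beta> \<longleftrightarrow>
    r < length \<alpha> \<and> col_start \<alpha> \<beta> r \<le> x \<and> x < col_start \<alpha> \<beta> r + int (\<alpha>!r)"
  by (simp add: overlap_diagram_def)

lemma length_rows_of [simp]: "length (rows_of \<alpha> \<beta> T) = length \<alpha>"
  by (simp add: rows_of_def)

lemma length_rows_of_nth [simp]: "r < length \<alpha> \<Longrightarrow> length (rows_of \<alpha> \<beta> T ! r) = \<alpha>!r"
  by (simp add: rows_of_def)

lemma rows_of_nth_nth:
  "r < length \<alpha> \<Longrightarrow> k < \<alpha>!r \<Longrightarrow> rows_of \<alpha> \<beta> T ! r ! k = T (r, col_start \<alpha> \<beta> r + int k)"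
  by (simp add: rows_of_def)

lemma overlap_diagram_column:
  assumes "overlaps_ok \<alpha> \<beta>" "Suc r < length \<alpha>"
  shows "(r,x) \<in> overlap_diagram \<alpha> \<beta> \<and> (Suc r, x) \<in> overlap_diagram \<alpha> \<beta> \<longleftrightarrow>
    col_start \<alpha> \<beta> r \<le> x \<and> x < col_start \<alpha> \<beta> r + int (\<beta>!r)"
  using overlaps_ok_nth[OF assms] assms(2) by (auto simp: mem_overlap_diagram)

lemma count_concat: "count (mset (concat ws)) i = (\<Sum>r<length ws. count (mset (ws!r)) i)"
proof (induction ws)
  case Nil then show ?case by simp
next
  case (Cons w ws) then show ?case by (simp add: sum.lessThan_Suc_shift del: sum.lessThan_Suc)
qed

lemma count_nth: "count (mset w) i = card {k. k < length w \<and> w!k = i}"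
  by (simp add: count_mset count_list_eq_length_filter length_filter_conv_card eq_commute)

lemma content_rows_of:
  "content (overlap_diagram \<alpha> \<beta>) T = count (mset (concat (rows_of \<alpha> \<beta> T)))"
proof
  fix i
  define cs where "cs = col_start \<alpha> \<beta>"
  define f :: "nat \<times> nat \<Rightarrow> box" where "f = (\<lambda>(r,k). (r, cs r + int k))"
  define Sg where "Sg = (SIGMA r:{..<length \<alpha>}. {k. k < \<alpha>!r \<and> T (r, cs r + int k) = i})"
  have "{b \<in> overlap_diagram \<alpha> \<beta>. T b = i} = f ` Sg"
  proof (intro set_eqI iffI)
    fix b assume b: "b \<in> {b \<in> overlap_diagram \<alpha> \<beta>. T b = i}"
    obtain r x where [simp]: "b = (r,x)" by (cases b)
    have "(r, nat (x - cs r)) \<in> Sg" "b = f (r, nat (x - cs r))"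
      using b by (auto simp: Sg_def f_def mem_overlap_diagram cs_def)
    then show "b \<in> f ` Sg" by blast
  qed (auto simp: Sg_def f_def mem_overlap_diagram cs_def)
  moreover have "inj_on f Sg" by (auto simp: f_def inj_on_def)
  ultimately have "card {b \<in> overlap_diagram \<alpha> \<beta>. T b = i} = card Sg" by (simp add: card_image)
  also have "\<dots> = (\<Sum>r<length \<alpha>. card {k. k < \<alpha>!r \<and> T (r, cs r + int k) = i})"
    unfolding Sg_def by (rule card_SigmaI) auto
  also have "\<dots> = (\<Sum>r<length \<alpha>. count (mset (rows_of \<alpha> \<beta> T ! r)) i)"
    by (intro sum.cong refl) (auto simp: count_nth rows_of_nth_nth cs_def intro!: arg_cong[where f=card])
  also have "\<dots> = count (mset (concat (rows_of \<alpha> \<beta> T))) i" by (simp add: count_concat)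
  finally show "content (overlap_diagram \<alpha> \<beta>) T i = count (mset (concat (rows_of \<alpha> \<beta> T))) i"
    by (simp add: content_def)
qed

lemma filling_of_rows_of:
  assumes "ssyt (overlap_diagram \<alpha> \<beta>) T"
  shows "filling_of \<alpha> \<beta> (rows_of \<alpha> \<beta> T) = T"
proof
  fix b :: box
  obtain r x where b: "b = (r,x)" by (cases b)
  show "filling_of \<alpha> \<beta> (rows_of \<alpha> \<beta> T) b = T b"
  proof (cases "(r,x) \<in> overlap_diagram \<alpha> \<beta>")
    case True
    then have "nat (x - col_start \<alpha> \<beta> r) < \<alpha>!r" "r < length \<alpha>" "col_start \<alpha> \<beta> r \<le> x"
      by (auto simp: mem_overlap_diagram)
    then show ?thesis using True b by (simp add: filling_of_def rows_of_nth_nth)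
  next
    case False
    then show ?thesis using assms b by (simp add: filling_of_def ssyt_def)
  qed
qed

lemma rows_of_filling_of:
  assumes "tab_rows \<alpha> \<beta> ws"
  shows "rows_of \<alpha> \<beta> (filling_of \<alpha> \<beta> ws) = ws"
proof (rule nth_equalityI)
  have len: "length ws = length \<alpha>" and rw: "\<And>r. r < length \<alpha> \<Longrightarrow> length (ws!r) = \<alpha>!r"
    using assms by (auto simp: tab_rows_iff is_row_def)
  show "length (rows_of \<alpha> \<beta> (filling_of \<alpha> \<beta> ws)) = length ws" using len by simp
  fix r assume "r < length (rows_of \<alpha> \<beta> (filling_of \<alpha> \<beta> ws))"
  then have r: "r < length \<alpha>" by simp
  show "rows_of \<alpha> \<beta> (filling_of \<alpha> \<beta> ws) ! r = ws ! r"
    by (rule nth_equalityI)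
      (use r rw in \<open>auto simp: rows_of_nth_nth filling_of_def mem_overlap_diagram\<close>)
qed

lemma is_row_rows_of:
  assumes T: "ssyt (overlap_diagram \<alpha> \<beta>) T" and r: "r < length \<alpha>"
  shows "is_row (\<alpha>!r) (rows_of \<alpha> \<beta> T ! r)"
  unfolding is_row_def
proof (intro conjI)
  define cs where "cs = col_start \<alpha> \<beta>"
  define w where "w = rows_of \<alpha> \<beta> T ! r"
  have nth: "k < \<alpha>!r \<Longrightarrow> w ! k = T (r, cs r + int k)" for k
    using r by (simp add: w_def cs_def rows_of_nth_nth)
  have box: "k < \<alpha>!r \<Longrightarrow> (r, cs r + int k) \<in> overlap_diagram \<alpha> \<beta>" for k
    using r by (simp add: cs_def mem_overlap_diagram)
  show "length (rows_of \<alpha> \<beta> T ! r) = \<alpha>!r" using r by simp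
  have "w!k \<le> w!Suc k" if k: "Suc k < \<alpha>!r" for k
  proof -
    have "(r, cs r + int k) \<in> overlap_diagram \<alpha> \<beta>" "(r, cs r + int k + 1) \<in> overlap_diagram \<alpha> \<beta>"
      using box[of k] box[of "Suc k"] k by (simp_all add: ac_simps)
    then have "T (r, cs r + int k) \<le> T (r, cs r + int k + 1)" using T by (simp add: ssyt_def)
    then show ?thesis using nth k by (simp add: ac_simps)
  qed
  then show "sorted (rows_of \<alpha> \<beta> T ! r)" using r by (simp add: sorted_iff_nth_Suc w_def)
  have "1 \<le> w!k" if "k < \<alpha>!r" for k
    using T box[OF that] nth[OF that] by (simp add: ssyt_def)
  then show "\<forall>y\<in>set (rows_of \<alpha> \<beta> T ! r). 1 \<le> y" using r by (auto simp: w_def in_set_conv_nth)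
qed

lemma linked_rows_of:
  assumes ok: "overlaps_ok \<alpha> \<beta>" and T: "ssyt (overlap_diagram \<alpha> \<beta>) T" and r: "Suc r < length \<alpha>"
  shows "linked (\<beta>!r) (rows_of \<alpha> \<beta> T ! r) (rows_of \<alpha> \<beta> T ! Suc r)"
  unfolding linked_def
proof (intro allI impI)
  define cs where "cs = col_start \<alpha> \<beta>"
  define ws where "ws = rows_of \<alpha> \<beta> T"
  have bo: "\<beta>!r \<le> \<alpha>!r" "\<beta>!r \<le> \<alpha>!Suc r" using overlaps_ok_nth[OF ok r] by auto
  fix j assume j: "j < \<beta>!r"
  define k where "k = \<alpha>!Suc r - \<beta>!r + j"
  have k: "k < \<alpha>!Suc r" using j bo by (simp add: k_def)
  have e: "cs (Suc r) + int k = cs r + int j" using bo by (simp add: k_def cs_def)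
  have "(r, cs r + int j) \<in> overlap_diagram \<alpha> \<beta> \<and> (Suc r, cs r + int j) \<in> overlap_diagram \<alpha> \<beta>"
    using overlap_diagram_column[OF ok r] j by (simp add: cs_def)
  then have "T (r, cs r + int j) < T (Suc r, cs (Suc r) + int k)"
    using T e by (simp add: ssyt_def)
  moreover have "ws!r!j = T (r, cs r + int j)" using r j bo by (simp add: ws_def cs_def rows_of_nth_nth)
  moreover have "ws!Suc r!k = T (Suc r, cs (Suc r) + int k)"
    using r k by (simp add: ws_def cs_def rows_of_nth_nth)
  ultimately show "ws!r!j < ws!Suc r!(length (ws!Suc r) - \<beta>!r + j)"
    using r by (simp add: ws_def k_def)
qed

lemma tab_rows_rows_of:
  assumes "overlaps_ok \<alpha> \<beta>" "ssyt (overlap_diagram \<alpha> \<beta>) T"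
  shows "tab_rows \<alpha> \<beta> (rows_of \<alpha> \<beta> T)"
  using assms by (simp add: tab_rows_iff is_row_rows_of linked_rows_of)

lemma ssyt_filling_of:
  assumes ok: "overlaps_ok \<alpha> \<beta>" and W: "tab_rows \<alpha> \<beta> ws"
  shows "ssyt (overlap_diagram \<alpha> \<beta>) (filling_of \<alpha> \<beta> ws)"
proof -
  define D where "D = overlap_diagram \<alpha> \<beta>"
  define cs where "cs = col_start \<alpha> \<beta>"
  define T where "T = filling_of \<alpha> \<beta> ws"
  have memD: "(r,x) \<in> D \<longleftrightarrow> r < length \<alpha> \<and> cs r \<le> x \<and> x < cs r + int (\<alpha>!r)" for r x
    by (simp add: D_def cs_def mem_overlap_diagram)
  have rw: "\<And>r. r < length \<alpha> \<Longrightarrow> is_row (\<alpha>!r) (ws!r)"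
    and lk: "\<And>r. Suc r < length \<alpha> \<Longrightarrow> linked (\<beta>!r) (ws!r) (ws!Suc r)"
    using W by (auto simp: tab_rows_iff)
  have Tin: "T (r,x) = ws!r!nat (x - cs r)" if "(r,x) \<in> D" for r x
    using that by (simp add: T_def D_def cs_def filling_of_def)
  have "ssyt D T"
    unfolding ssyt_def
  proof (intro conjI allI impI ballI)
    fix b assume "b \<notin> D"
    then show "T b = 0" by (cases b) (auto simp: T_def D_def filling_of_def)
  next
    fix b assume b: "b \<in> D"
    obtain r x where bb: "b = (r,x)" by (cases b)
    then have m: "r < length \<alpha>" "cs r \<le> x" "x < cs r + int (\<alpha>!r)" using memD b by auto
    have "nat (x - cs r) < length (ws!r)" using m rw[OF m(1)] by (simp add: is_row_def)
    then have "ws!r!nat (x - cs r) \<in> set (ws!r)" by simp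
    then show "1 \<le> T b" using rw[OF m(1)] Tin b bb by (auto simp: is_row_def)
  next
    fix r x assume h: "(r,x) \<in> D \<and> (r, x+1) \<in> D"
    then have m: "r < length \<alpha>" "cs r \<le> x" "x + 1 < cs r + int (\<alpha>!r)" using memD by auto
    have "ws!r!nat (x - cs r) \<le> ws!r!nat (x + 1 - cs r)"
      using rw[OF m(1)] m by (intro sorted_nth_mono) (auto simp: is_row_def)
    then show "T (r,x) \<le> T (r, x+1)" using Tin h by simp
  next
    fix r x assume h: "(r,x) \<in> D \<and> (Suc r, x) \<in> D"
    then have rL: "Suc r < length \<alpha>" using memD by auto
    have bo: "\<beta>!r \<le> \<alpha>!r" "\<beta>!r \<le> \<alpha>!Suc r" using overlaps_ok_nth[OF ok rL] by auto
    have v: "cs r \<le> x" "x < cs r + int (\<beta>!r)"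
      using overlap_diagram_column[OF ok rL] h by (auto simp: cs_def D_def)
    define j where "j = nat (x - cs r)"
    have j: "j < \<beta>!r" using v by (simp add: j_def)
    have l1: "length (ws!Suc r) = \<alpha>!Suc r" using rw[OF rL] by (simp add: is_row_def)
    have "ws!r!j < ws!Suc r!(length (ws!Suc r) - \<beta>!r + j)" using lk[OF rL] j by (simp add: linked_def)
    moreover have "nat (x - cs (Suc r)) = length (ws!Suc r) - \<beta>!r + j"
      using l1 bo v by (simp add: j_def cs_def)
    ultimately show "T (r,x) < T (Suc r, x)" using Tin h by (simp add: j_def)
  qed
  then show ?thesis by (simp add: D_def T_def)
qed

lemma ov_eq_card_rows:
  assumes "overlaps_ok \<alpha> \<beta>"
  shows "ov \<alpha> \<beta> c = int (card {ws. tab_rows \<alpha> \<beta> ws \<and> count (mset (concat ws)) = c})"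
proof -
  have "bij_betw (rows_of \<alpha> \<beta>) {T. ssyt (overlap_diagram \<alpha> \<beta>) T \<and> content (overlap_diagram \<alpha> \<beta>) T = c}
      {ws. tab_rows \<alpha> \<beta> ws \<and> count (mset (concat ws)) = c}"
    by (rule bij_betw_byWitness[where f'="filling_of \<alpha> \<beta>"])
      (auto simp: filling_of_rows_of rows_of_filling_of tab_rows_rows_of ssyt_filling_of
         content_rows_of assms intro!: image_eqI)
  then show ?thesis by (simp add: ov_def skew_schur_def bij_betw_same_card)
qed

section \<open>Splitting row lists at a junction\<close>

lemma all_less_Suc: "(\<forall>r<Suc n. F r) = (F 0 \<and> (\<forall>r<n. F (Suc r)))"
  by (auto simp: less_Suc_eq_0_disj)

lemma chain_ok_Nil[simp]: "chain_ok P Q [] bs"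
  by (simp add: chain_ok_def)

lemma chain_ok_single[simp]: "chain_ok P Q [x] bs = P x"
  by (simp add: chain_ok_def)

lemma chain_ok_Cons2: "chain_ok P Q (x#x'#xs) (b#bs) = (P x \<and> Q b x x' \<and> chain_ok P Q (x'#xs) bs)"
proof -
  have "(\<forall>r. Suc r < Suc (Suc k) \<longrightarrow> G r) = (G 0 \<and> (\<forall>r. Suc r < Suc k \<longrightarrow> G (Suc r)))"
    for k and G :: "nat \<Rightarrow> bool"
    by (auto simp: less_Suc_eq_0_disj)
  then show ?thesis
    unfolding chain_ok_def by (simp only: length_Cons all_less_Suc nth_Cons_0 nth_Cons_Suc) blast
qed

lemma chain_ok_two: "chain_ok P Q [k1, k2] [y] = (P k1 \<and> Q y k1 k2 \<and> P k2)"
  by (simp add: chain_ok_Cons2)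

lemma chain_ok_append:
  assumes "length bs + 1 = length xs" "ys \<noteq> []"
  shows "chain_ok P Q (xs@ys) (bs@[y]@cs) = (chain_ok P Q xs bs \<and> chain_ok P Q ys cs
      \<and> Q y (last xs) (hd ys))"
  using assms
proof (induction xs arbitrary: bs)
  case Nil then show ?case by simp
next
  case (Cons x xs)
  show ?case
  proof (cases xs)
    case Nil
    then have "bs = []" using Cons.prems by simp
    obtain y0 ys' where ys: "ys = y0 # ys'" using Cons.prems by (cases ys) auto
    show ?thesis using Nil \<open>bs = []\<close> ys by (auto simp: chain_ok_Cons2)
  next
    case (Cons x' xs'')
    obtain b bs' where bs: "bs = b # bs'" using Cons.prems \<open>xs = x'#xs''\<close> by (cases bs) auto
    have IH: "chain_ok P Q (xs@ys) (bs'@[y]@cs)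
        = (chain_ok P Q xs bs' \<and> chain_ok P Q ys cs \<and> Q y (last xs) (hd ys))"
      using Cons.IH[of bs'] Cons.prems bs by simp
    show ?thesis using IH Cons bs by (simp add: chain_ok_Cons2)
  qed
qed

lemma chain_ok_split_prefix:
  assumes "length \<sigma>b = length \<sigma>" "ys \<noteq> []"
  shows "chain_ok P Q (\<sigma> @ ys) (\<sigma>b @ cs) = (chain_ok P Q \<sigma> (butlast \<sigma>b) \<and> chain_ok P Q ys cs
      \<and> (\<sigma> \<noteq> [] \<longrightarrow> Q (last \<sigma>b) (last \<sigma>) (hd ys)))"
proof (cases "\<sigma> = []")
  case True then show ?thesis using assms by simp
next
  case False
  then have ne: "\<sigma>b \<noteq> []" using assms by auto
  have e: "\<sigma>b @ cs = butlast \<sigma>b @ [last \<sigma>b] @ cs" using append_butlast_last_id[OF ne]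
      by (metis append.assoc)
  have l: "length (butlast \<sigma>b) + 1 = length \<sigma>" using assms False by simp
  show ?thesis unfolding e using chain_ok_append[OF l assms(2)] False by simp
qed

lemma chain_ok_split_suffix:
  assumes "length \<tau>b = length \<tau>" "length bs + 1 = length xs"
  shows "chain_ok P Q (xs @ \<tau>) (bs @ \<tau>b) = (chain_ok P Q xs bs \<and> chain_ok P Q \<tau> (tl \<tau>b)
      \<and> (\<tau> \<noteq> [] \<longrightarrow> Q (hd \<tau>b) (last xs) (hd \<tau>)))"
proof (cases "\<tau> = []")
  case True then show ?thesis using assms by (simp add: chain_ok_def)
next
  case False
  then have ne: "\<tau>b \<noteq> []" using assms by auto
  have e: "bs @ \<tau>b = bs @ [hd \<tau>b] @ tl \<tau>b" using ne by simp
  show ?thesis unfolding e using chain_ok_append[OF assms(2) False] False by simp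
qed

lemma overlaps_ok_middle:
  assumes "length bb = length aa" "overlaps_ok aa (butlast bb)"
    "aa \<noteq> [] \<Longrightarrow> last bb \<le> last aa \<and> last bb \<le> k1"
    "length tb = length tt" "overlaps_ok tt (tl tb)" "tt \<noteq> [] \<Longrightarrow> hd tb \<le> k2 \<and> hd tb \<le> hd tt"
    "y \<le> k1" "y \<le> k2"
  shows "overlaps_ok (aa @ [k1, k2] @ tt) (bb @ [y] @ tb)"
proof -
  have mid: "chain_ok (\<lambda>k. True) (\<lambda>y k k'. y \<le> k \<and> y \<le> k') ([k1, k2] @ tt) ([y] @ tb)"
    using chain_ok_split_suffix[OF assms(4), of "[y]" "[k1,k2]"] assms(5-8)
    by (simp add: overlaps_ok_def chain_ok_two)
  show ?thesis
  proof (cases "aa = []")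
    case True
    then show ?thesis using mid assms(1) by (simp add: overlaps_ok_def)
  next
    case False
    then show ?thesis using mid chain_ok_split_prefix[OF assms(1), of "[k1,k2] @ tt"] assms(2,3)
      by (simp add: overlaps_ok_def)
  qed
qed

lemma last_zip_eq: "length xs = length ys \<Longrightarrow> xs \<noteq> [] \<Longrightarrow> last (zip xs ys) = (last xs, last ys)"
  by (induction xs ys rule: list_induct2) (auto simp: zip_eq_Nil_iff)

lemma hd_zip_eq: "length xs = length ys \<Longrightarrow> xs \<noteq> [] \<Longrightarrow> hd (zip xs ys) = (hd xs, hd ys)"
  by (cases xs; cases ys) auto

lemma tab_rows_len: "tab_rows \<alpha> \<beta> ws \<Longrightarrow> length ws = length \<alpha>"
  by (simp add: tab_rows_def)

lemma tab_rows_Nil: "tab_rows [] \<beta> ws = (ws = [])"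
  by (simp add: tab_rows_def)

lemma tab_rows_single: "tab_rows [k] \<beta> ws = (\<exists>w. ws = [w] \<and> is_row k w)"
proof
  assume "tab_rows [k] \<beta> ws"
  then obtain w where "ws = [w]" by (cases ws) (auto simp: tab_rows_def)
  then show "\<exists>w. ws = [w] \<and> is_row k w" using \<open>tab_rows [k] \<beta> ws\<close> by (auto simp: tab_rows_def)
qed (auto simp: tab_rows_def)

lemma tab_rows_split:
  assumes "length \<beta>1 + 1 = length \<alpha>1" "\<alpha>2 \<noteq> []"
  shows "tab_rows (\<alpha>1@\<alpha>2) (\<beta>1@[y]@\<beta>2) ws \<longleftrightarrow>
    (\<exists>W1 W2. ws = W1@W2 \<and> tab_rows \<alpha>1 \<beta>1 W1 \<and> tab_rows \<alpha>2 \<beta>2 W2 \<and> linked y (last W1) (hd W2))"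
proof
  assume h: "tab_rows (\<alpha>1@\<alpha>2) (\<beta>1@[y]@\<beta>2) ws"
  define W1 where "W1 = take (length \<alpha>1) ws"
  define W2 where "W2 = drop (length \<alpha>1) ws"
  have ws: "ws = W1@W2" by (simp add: W1_def W2_def)
  have l: "length ws = length \<alpha>1 + length \<alpha>2" using h by (simp add: tab_rows_def)
  have l1: "length W1 = length \<alpha>1" and l2: "length W2 = length \<alpha>2" using l by (auto simp: W1_def W2_def)
  have ne1: "\<alpha>1 \<noteq> []" using assms by auto
  have z: "zip (\<alpha>1@\<alpha>2) ws = zip \<alpha>1 W1 @ zip \<alpha>2 W2" using ws l1 by simp
  have g: "chain_ok (\<lambda>(k,w). is_row k w) (\<lambda>y (k,w) (k',w'). linked y w w') (zip \<alpha>1 W1 @ zip \<alpha>2 W2)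
      (\<beta>1@[y]@\<beta>2)"
    using h z by (simp add: tab_rows_def)
  have "zip \<alpha>2 W2 \<noteq> []" using l2 assms(2) by (cases \<alpha>2; cases W2) auto
  moreover have "length \<beta>1 + 1 = length (zip \<alpha>1 W1)" using assms l1 by simp
  ultimately have g2: "chain_ok (\<lambda>(k,w). is_row k w) (\<lambda>y (k,w) (k',w'). linked y w w') (zip \<alpha>1 W1) \<beta>1
     \<and> chain_ok (\<lambda>(k,w). is_row k w) (\<lambda>y (k,w) (k',w'). linked y w w') (zip \<alpha>2 W2) \<beta>2
     \<and> (\<lambda>y (k,w) (k',w'). linked y w w') y (last (zip \<alpha>1 W1)) (hd (zip \<alpha>2 W2))"
    using g chain_ok_append[OF \<open>length \<beta>1 + 1 = length (zip \<alpha>1 W1)\<close> \<open>zip \<alpha>2 W2 \<noteq> []\<close>] by simp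
  have "last (zip \<alpha>1 W1) = (last \<alpha>1, last W1)" using l1 ne1 by (simp add: last_zip_eq)
  moreover have "hd (zip \<alpha>2 W2) = (hd \<alpha>2, hd W2)" using l2 assms(2) by (simp add: hd_zip_eq)
  ultimately show "\<exists>W1 W2. ws = W1@W2 \<and> tab_rows \<alpha>1 \<beta>1 W1 \<and> tab_rows \<alpha>2 \<beta>2 W2 \<and> linked y (last W1) (hd W2)"
    using g2 ws l1 l2 by (auto simp: tab_rows_def)
next
  assume "\<exists>W1 W2. ws = W1@W2 \<and> tab_rows \<alpha>1 \<beta>1 W1 \<and> tab_rows \<alpha>2 \<beta>2 W2 \<and> linked y (last W1) (hd W2)"
  then obtain W1 W2 where h: "ws = W1@W2" "tab_rows \<alpha>1 \<beta>1 W1" "tab_rows \<alpha>2 \<beta>2 W2"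
      "linked y (last W1) (hd W2)"
    by blast
  have l1: "length W1 = length \<alpha>1" and l2: "length W2 = length \<alpha>2" using h by (auto simp: tab_rows_def)
  have ne1: "\<alpha>1 \<noteq> []" using assms by auto
  have "zip \<alpha>2 W2 \<noteq> []" using l2 assms(2) by (cases \<alpha>2; cases W2) auto
  moreover have "length \<beta>1 + 1 = length (zip \<alpha>1 W1)" using assms l1 by simp
  moreover have "last (zip \<alpha>1 W1) = (last \<alpha>1, last W1)" using l1 ne1 by (simp add: last_zip_eq)
  moreover have "hd (zip \<alpha>2 W2) = (hd \<alpha>2, hd W2)" using l2 assms(2) by (simp add: hd_zip_eq)
  ultimately have "chain_ok (\<lambda>(k,w). is_row k w) (\<lambda>y (k,w) (k',w'). linked y w w')
      (zip \<alpha>1 W1 @ zip \<alpha>2 W2) (\<beta>1@[y]@\<beta>2)"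
    using chain_ok_append[OF \<open>length \<beta>1 + 1 = length (zip \<alpha>1 W1)\<close> \<open>zip \<alpha>2 W2 \<noteq> []\<close>] h
        by (simp add: tab_rows_def)
  then show "tab_rows (\<alpha>1@\<alpha>2) (\<beta>1@[y]@\<beta>2) ws" using h l1 l2 by (simp add: tab_rows_def)
qed

lemma tab_rows_split_prefix:
  assumes "length \<sigma>b = length \<sigma>" "\<alpha>2 \<noteq> []"
  shows "tab_rows (\<sigma>@\<alpha>2) (\<sigma>b@\<beta>2) ws \<longleftrightarrow>
    (\<exists>U W. ws = U@W \<and> tab_rows \<sigma> (butlast \<sigma>b) U \<and> tab_rows \<alpha>2 \<beta>2 W
        \<and> (U \<noteq> [] \<longrightarrow> linked (last \<sigma>b) (last U) (hd W)))"
proof (cases "\<sigma> = []")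
  case True
  then show ?thesis using assms by (auto simp: tab_rows_Nil)
next
  case False
  then have ne: "\<sigma>b \<noteq> []" using assms by auto
  have sb: "\<sigma>b @ \<beta>2 = butlast \<sigma>b @ [last \<sigma>b] @ \<beta>2"
    using append_butlast_last_id[OF ne] by (metis append.assoc)
  have l: "length (butlast \<sigma>b) + 1 = length \<sigma>" using assms False by simp
  have "tab_rows (\<sigma>@\<alpha>2) (\<sigma>b@\<beta>2) ws = tab_rows (\<sigma>@\<alpha>2) (butlast \<sigma>b@[last \<sigma>b]@\<beta>2) ws"
    by (simp only: sb)
  also have "\<dots> = (\<exists>U W. ws = U@W \<and> tab_rows \<sigma> (butlast \<sigma>b) U \<and> tab_rows \<alpha>2 \<beta>2 W
      \<and> linked (last \<sigma>b) (last U) (hd W))"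
    by (rule tab_rows_split[OF l assms(2)])
  also have "\<dots> = (\<exists>U W. ws = U@W \<and> tab_rows \<sigma> (butlast \<sigma>b) U \<and> tab_rows \<alpha>2 \<beta>2 W
      \<and> (U \<noteq> [] \<longrightarrow> linked (last \<sigma>b) (last U) (hd W)))"
  proof -
    have "\<And>U. tab_rows \<sigma> (butlast \<sigma>b) U \<Longrightarrow> U \<noteq> []" using False by (auto dest: tab_rows_len)
    then show ?thesis by blast
  qed
  finally show ?thesis .
qed

lemma tab_rows_split_suffix:
  assumes "length \<tau>b = length \<tau>" "length \<beta>1 + 1 = length \<alpha>1"
  shows "tab_rows (\<alpha>1@\<tau>) (\<beta>1@\<tau>b) ws \<longleftrightarrow>
    (\<exists>W V. ws = W@V \<and> tab_rows \<alpha>1 \<beta>1 W \<and> tab_rows \<tau> (tl \<tau>b) V \<and> (V \<noteq> [] \<longrightarrow> linked (hd \<tau>b) (last W) (hd V)))"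
proof (cases "\<tau> = []")
  case True
  then show ?thesis using assms by (auto simp: tab_rows_Nil)
next
  case False
  then have ne: "\<tau>b \<noteq> []" using assms by auto
  have tb: "\<beta>1 @ \<tau>b = \<beta>1@[hd \<tau>b]@tl \<tau>b" using ne by simp
  have "tab_rows (\<alpha>1@\<tau>) (\<beta>1@\<tau>b) ws = tab_rows (\<alpha>1@\<tau>) (\<beta>1@[hd \<tau>b]@tl \<tau>b) ws" by (simp only: tb)
  also have "\<dots> = (\<exists>W V. ws = W@V \<and> tab_rows \<alpha>1 \<beta>1 W \<and> tab_rows \<tau> (tl \<tau>b) V
      \<and> linked (hd \<tau>b) (last W) (hd V))"
    by (rule tab_rows_split[OF assms(2) False])
  also have "\<dots> = (\<exists>W V. ws = W@V \<and> tab_rows \<alpha>1 \<beta>1 W \<and> tab_rows \<tau> (tl \<tau>b) V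
      \<and> (V \<noteq> [] \<longrightarrow> linked (hd \<tau>b) (last W) (hd V)))"
  proof -
    have "\<And>V. tab_rows \<tau> (tl \<tau>b) V \<Longrightarrow> V \<noteq> []" using False by (auto dest: tab_rows_len)
    then show ?thesis by blast
  qed
  finally show ?thesis .
qed

lemma tab_rows_two: "tab_rows [k1, k2] [y] W \<longleftrightarrow> (\<exists>a b. W = [a,b] \<and> is_row k1 a \<and> is_row k2 b \<and> linked y a b)"
proof -
  have "tab_rows [k1, k2] [y] W = tab_rows ([k1]@[k2]) ([]@[y]@[]) W" by simp
  also have "\<dots> = (\<exists>W1 W2. W = W1@W2 \<and> tab_rows [k1] [] W1 \<and> tab_rows [k2] [] W2
      \<and> linked y (last W1) (hd W2))"
    by (rule tab_rows_split) auto
  also have "\<dots> = (\<exists>a b. W = [a,b] \<and> is_row k1 a \<and> is_row k2 b \<and> linked y a b)"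
  proof
    assume "\<exists>W1 W2. W = W1@W2 \<and> tab_rows [k1] [] W1 \<and> tab_rows [k2] [] W2 \<and> linked y (last W1) (hd W2)"
    then show "\<exists>a b. W = [a,b] \<and> is_row k1 a \<and> is_row k2 b \<and> linked y a b" by (auto simp: tab_rows_single)
  next
    assume "\<exists>a b. W = [a,b] \<and> is_row k1 a \<and> is_row k2 b \<and> linked y a b"
    then obtain a b where h: "W = [a,b]" "is_row k1 a" "is_row k2 b" "linked y a b" by blast
    then have "W = [a]@[b] \<and> tab_rows [k1] [] [a] \<and> tab_rows [k2] [] [b] \<and> linked y (last [a]) (hd [b])"
      by (simp add: tab_rows_single)
    then show "\<exists>W1 W2. W = W1@W2 \<and> tab_rows [k1] [] W1 \<and> tab_rows [k2] [] W2
        \<and> linked y (last W1) (hd W2)" by blast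
  qed
  finally show ?thesis .
qed

lemma linked_app_right: assumes "y \<le> length u" shows "linked y v (a@u) = linked y v u"
proof -
  have "\<And>j. (a@u)!(length (a@u) - y + j) = u!(length u - y + j)"
  proof -
    fix j
    have "length (a@u) - y + j = length a + (length u - y + j)" using assms by simp
    then show "(a@u)!(length (a@u) - y + j) = u!(length u - y + j)" by (simp only: nth_append_length_plus)
  qed
  then show ?thesis by (simp add: linked_def)
qed

lemma linked_app_left: "y \<le> length v \<Longrightarrow> linked y (v@b) w = linked y v w"
  by (simp add: linked_def nth_append)

lemma all_index_shift: "(\<forall>j<n. P (Suc j) j) = (\<forall>j. 1 \<le> j \<and> j < n+1 \<longrightarrow> P j (j-1))"
proof (intro iffI allI impI)
  fix j assume "\<forall>j<n. P (Suc j) j" "1 \<le> j \<and> j < n+1"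
  then show "P j (j-1)" by (cases j) auto
qed auto

lemma linked_merged_top:
  assumes "length a = m" "u \<noteq> []" "length b = n" "m + 1 \<le> n"
  shows "linked (m+1) (a@u) b = ((\<forall>j<m. a!j < b!(n-m-1+j)) \<and> hd u < last b)"
proof -
  have "linked (m+1) (a@u) b = (\<forall>j<Suc m. (a@u)!j < b!(n - (m+1) + j))" using assms
      by (simp add: linked_def)
  also have "\<dots> = ((\<forall>j<m. (a@u)!j < b!(n - (m+1) + j)) \<and> (a@u)!m < b!(n - (m+1) + m))"
    by (simp add: less_Suc_eq) blast
  also have "\<dots> = ((\<forall>j<m. a!j < b!(n-m-1+j)) \<and> hd u < last b)"
  proof -
    have "b \<noteq> []" using assms by auto
    then show ?thesis using assms by (simp add: nth_append hd_conv_nth last_conv_nth)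
  qed
  finally show ?thesis .
qed

lemma linked_merged_bot:
  assumes "length b = n" "v \<noteq> []" "n + 1 \<le> length a"
  shows "linked (n+1) a (v@b) = (a!0 < last v \<and> (\<forall>j. 1 \<le> j \<and> j < n+1 \<longrightarrow> a!j < b!(j-1)))"
proof -
  have "linked (n+1) a (v@b) = (\<forall>j<Suc n. a!j < (v@b)!(length v - 1 + j))" using assms
      by (simp add: linked_def)
  also have "\<dots> = (a!0 < (v@b)!(length v - 1) \<and> (\<forall>j<n. a!(Suc j) < (v@b)!(length v - 1 + Suc j)))"
    by (simp only: all_less_Suc) simp
  also have "\<dots> = (a!0 < last v \<and> (\<forall>j<n. a!(Suc j) < b!j))"
  proof -
    have e: "(v@b)!(length v - 1 + Suc j) = b!j" for j
    proof -
      have "length v - 1 + Suc j = length v + j" using assms by (cases v) auto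
      then show ?thesis by (simp only: nth_append_length_plus)
    qed
    have "(v@b)!(length v - 1) = last v" using assms by (simp add: nth_append last_conv_nth)
    then show ?thesis using e by simp
  qed
  also have "(\<forall>j<n. a!(Suc j) < b!j) = (\<forall>j. 1 \<le> j \<and> j < n+1 \<longrightarrow> a!j < b!(j-1))"
    using all_index_shift[of n "\<lambda>i k. a!i < b!k"] by simp
  finally show ?thesis .
qed

lemma linked_merged_both:
  assumes la: "length a = m" and lb: "length b = m" and m1: "1 \<le> m" and une: "u \<noteq> []" and vne: "v \<noteq> []"
  shows "linked (m+1) (a@u) (v@b) = (a!0 < last v \<and> (\<forall>j. 1 \<le> j \<and> j < m \<longrightarrow> a!j < b!(j-1)) \<and> hd u < last b)"
proof -
  have l: "length (v@b) = length v + m" using lb by simp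
  have mn: "m + 1 \<le> length v + m" using vne by (cases v) auto
  have "linked (m+1) (a@u) (v@b) = ((\<forall>j<m. a!j < (v@b)!(length v + m - m - 1 + j)) \<and> hd u < last (v@b))"
    by (rule linked_merged_top[OF la une l mn])
  also have "last (v@b) = last b"
  proof -
    have "b \<noteq> []" using lb m1 by auto
    then show ?thesis by simp
  qed
  also have "(\<forall>j<m. a!j < (v@b)!(length v + m - m - 1 + j))
      = (a!0 < last v \<and> (\<forall>j. 1 \<le> j \<and> j < m \<longrightarrow> a!j < b!(j-1)))"
  proof -
    have i0: "(v@b)!(length v + m - m - 1 + 0) = last v" using vne by (simp add: nth_append last_conv_nth)
    have iS: "(v@b)!(length v + m - m - 1 + Suc j) = b!j" for j
    proof -
      have "length v + m - m - 1 + Suc j = length v + j" using vne by (cases v) auto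
      then show ?thesis by (simp only: nth_append_length_plus)
    qed
    obtain m' where m': "m = Suc m'" using m1 by (cases m) auto
    have "(\<forall>j<m. a!j < (v@b)!(length v + m - m - 1 + j)) = (a!0 < (v@b)!(length v + m - m - 1 + 0) \<and>
        (\<forall>j<m'. a!(Suc j) < (v@b)!(length v + m - m - 1 + Suc j)))"
      unfolding m' by (simp only: all_less_Suc)
    also have "\<dots> = (a!0 < last v \<and> (\<forall>j<m'. a!(Suc j) < b!j))" by (simp only: i0 iS)
    also have "(\<forall>j<m'. a!(Suc j) < b!j) = (\<forall>j. 1 \<le> j \<and> j < m \<longrightarrow> a!j < b!(j-1))"
      using all_index_shift[of m' "\<lambda>i k. a!i < b!k"] m' by simp
    finally show ?thesis .
  qed
  finally show ?thesis by simp
qed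

lemma linked_one: "u \<noteq> [] \<Longrightarrow> w \<noteq> [] \<Longrightarrow> linked 1 u w = (hd u < last w)"
  by (simp add: linked_def hd_conv_nth last_conv_nth)

lemma tab_rows_nth: "tab_rows \<alpha> \<beta> ws \<Longrightarrow> r < length \<alpha> \<Longrightarrow> is_row (\<alpha>!r) (ws!r)"
  by (simp add: tab_rows_iff)

lemma tab_rows_last: assumes "tab_rows \<alpha> \<beta> ws" "ws \<noteq> []" shows "is_row (last \<alpha>) (last ws)"
proof -
  have l: "length ws = length \<alpha>" using assms by (simp add: tab_rows_len)
  then have "\<alpha> \<noteq> []" using assms by auto
  then show ?thesis using tab_rows_nth[OF assms(1), of "length \<alpha> - 1"] l assms(2)
    by (simp add: last_conv_nth)
qed

lemma tab_rows_hd: assumes "tab_rows \<alpha> \<beta> ws" "ws \<noteq> []" shows "is_row (hd \<alpha>) (hd ws)"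
proof -
  have l: "length ws = length \<alpha>" using assms by (simp add: tab_rows_len)
  then have "\<alpha> \<noteq> []" using assms by auto
  then show ?thesis using tab_rows_nth[OF assms(1), of 0] l assms(2)
    by (simp add: hd_conv_nth)
qed

lemma tab_rows_row_len: "tab_rows \<alpha> \<beta> U \<Longrightarrow> w \<in> set U \<Longrightarrow> length w \<le> sum_list \<alpha>"
proof -
  assume h: "tab_rows \<alpha> \<beta> U" "w \<in> set U"
  then obtain r where r: "r < length U" "w = U!r" by (auto simp: in_set_conv_nth)
  have l: "length U = length \<alpha>" using h by (simp add: tab_rows_len)
  have "is_row (\<alpha>!r) w" using tab_rows_nth[OF h(1)] r l by simp
  then have "length w = \<alpha>!r" by (simp add: is_row_def)
  also have "\<dots> \<le> sum_list \<alpha>" using r l by (simp add: elem_le_sum_list)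
  finally show ?thesis .
qed

lemma tab_rows_snoc:
  assumes "\<sigma> \<noteq> []" "length \<sigma>b = length \<sigma>"
  shows "tab_rows \<sigma> (butlast \<sigma>b) U \<longleftrightarrow> (\<exists>U1 u. U = U1 @ [u] \<and> tab_rows (butlast \<sigma>) (butlast (butlast \<sigma>b)) U1 \<and>
     is_row (last \<sigma>) u \<and> (U1 \<noteq> [] \<longrightarrow> linked (last (butlast \<sigma>b)) (last U1) u))"
proof -
  have e: "tab_rows \<sigma> (butlast \<sigma>b) U = tab_rows (butlast \<sigma> @ [last \<sigma>]) (butlast \<sigma>b @ []) U"
    using assms by simp
  also have "\<dots> = (\<exists>U1 W. U = U1 @ W \<and> tab_rows (butlast \<sigma>) (butlast (butlast \<sigma>b)) U1
      \<and> tab_rows [last \<sigma>] [] W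
     \<and> (U1 \<noteq> [] \<longrightarrow> linked (last (butlast \<sigma>b)) (last U1) (hd W)))"
    by (rule tab_rows_split_prefix) (use assms in auto)
  also have "\<dots> = (\<exists>U1 u. U = U1 @ [u] \<and> tab_rows (butlast \<sigma>) (butlast (butlast \<sigma>b)) U1 \<and>
     is_row (last \<sigma>) u \<and> (U1 \<noteq> [] \<longrightarrow> linked (last (butlast \<sigma>b)) (last U1) u))"
  proof
    assume "\<exists>U1 W. U = U1 @ W \<and> tab_rows (butlast \<sigma>) (butlast (butlast \<sigma>b)) U1 \<and> tab_rows [last \<sigma>] [] W
     \<and> (U1 \<noteq> [] \<longrightarrow> linked (last (butlast \<sigma>b)) (last U1) (hd W))"
    then obtain U1 W where h: "U = U1 @ W" "tab_rows (butlast \<sigma>) (butlast (butlast \<sigma>b)) U1"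
        "tab_rows [last \<sigma>] [] W"
      "U1 \<noteq> [] \<longrightarrow> linked (last (butlast \<sigma>b)) (last U1) (hd W)" by blast
    obtain u where "W = [u]" "is_row (last \<sigma>) u" using h(3) by (auto simp: tab_rows_single)
    then show "\<exists>U1 u. U = U1 @ [u] \<and> tab_rows (butlast \<sigma>) (butlast (butlast \<sigma>b)) U1 \<and>
     is_row (last \<sigma>) u \<and> (U1 \<noteq> [] \<longrightarrow> linked (last (butlast \<sigma>b)) (last U1) u)" using h by auto
  next
    assume "\<exists>U1 u. U = U1 @ [u] \<and> tab_rows (butlast \<sigma>) (butlast (butlast \<sigma>b)) U1 \<and>
     is_row (last \<sigma>) u \<and> (U1 \<noteq> [] \<longrightarrow> linked (last (butlast \<sigma>b)) (last U1) u)"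
    then obtain U1 u where h: "U = U1 @ [u]" "tab_rows (butlast \<sigma>) (butlast (butlast \<sigma>b)) U1"
      "is_row (last \<sigma>) u" "U1 \<noteq> [] \<longrightarrow> linked (last (butlast \<sigma>b)) (last U1) u" by blast
    then have "U = U1 @ [u] \<and> tab_rows (butlast \<sigma>) (butlast (butlast \<sigma>b)) U1 \<and> tab_rows [last \<sigma>] [] [u]
     \<and> (U1 \<noteq> [] \<longrightarrow> linked (last (butlast \<sigma>b)) (last U1) (hd [u]))" by (simp add: tab_rows_single)
    then show "\<exists>U1 W. U = U1 @ W \<and> tab_rows (butlast \<sigma>) (butlast (butlast \<sigma>b)) U1 \<and> tab_rows [last \<sigma>] [] W
     \<and> (U1 \<noteq> [] \<longrightarrow> linked (last (butlast \<sigma>b)) (last U1) (hd W))" by blast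
  qed
  finally show ?thesis .
qed

lemma tab_rows_cons:
  assumes "\<tau> \<noteq> []" "length \<tau>b = length \<tau>"
  shows "tab_rows \<tau> (tl \<tau>b) V \<longleftrightarrow> (\<exists>v V1. V = v # V1 \<and> is_row (hd \<tau>) v \<and> tab_rows (tl \<tau>) (tl (tl \<tau>b)) V1 \<and>
     (V1 \<noteq> [] \<longrightarrow> linked (hd (tl \<tau>b)) v (hd V1)))"
proof -
  have e: "tab_rows \<tau> (tl \<tau>b) V = tab_rows ([hd \<tau>] @ tl \<tau>) ([] @ tl \<tau>b) V"
    using assms by simp
  also have "\<dots> = (\<exists>W V1. V = W @ V1 \<and> tab_rows [hd \<tau>] [] W \<and> tab_rows (tl \<tau>) (tl (tl \<tau>b)) V1
     \<and> (V1 \<noteq> [] \<longrightarrow> linked (hd (tl \<tau>b)) (last W) (hd V1)))"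
    by (rule tab_rows_split_suffix) (use assms in auto)
  also have "\<dots> = (\<exists>v V1. V = v # V1 \<and> is_row (hd \<tau>) v \<and> tab_rows (tl \<tau>) (tl (tl \<tau>b)) V1 \<and>
     (V1 \<noteq> [] \<longrightarrow> linked (hd (tl \<tau>b)) v (hd V1)))"
  proof
    assume "\<exists>W V1. V = W @ V1 \<and> tab_rows [hd \<tau>] [] W \<and> tab_rows (tl \<tau>) (tl (tl \<tau>b)) V1
     \<and> (V1 \<noteq> [] \<longrightarrow> linked (hd (tl \<tau>b)) (last W) (hd V1))"
    then obtain W V1 where h: "V = W @ V1" "tab_rows [hd \<tau>] [] W" "tab_rows (tl \<tau>) (tl (tl \<tau>b)) V1"
     "V1 \<noteq> [] \<longrightarrow> linked (hd (tl \<tau>b)) (last W) (hd V1)" by blast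
    obtain v where "W = [v]" "is_row (hd \<tau>) v" using h(2) by (auto simp: tab_rows_single)
    then show "\<exists>v V1. V = v # V1 \<and> is_row (hd \<tau>) v \<and> tab_rows (tl \<tau>) (tl (tl \<tau>b)) V1 \<and>
     (V1 \<noteq> [] \<longrightarrow> linked (hd (tl \<tau>b)) v (hd V1))" using h by auto
  next
    assume "\<exists>v V1. V = v # V1 \<and> is_row (hd \<tau>) v \<and> tab_rows (tl \<tau>) (tl (tl \<tau>b)) V1 \<and>
     (V1 \<noteq> [] \<longrightarrow> linked (hd (tl \<tau>b)) v (hd V1))"
    then obtain v V1 where h: "V = v # V1" "is_row (hd \<tau>) v" "tab_rows (tl \<tau>) (tl (tl \<tau>b)) V1"
     "V1 \<noteq> [] \<longrightarrow> linked (hd (tl \<tau>b)) v (hd V1)" by blast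
    then have "V = [v] @ V1 \<and> tab_rows [hd \<tau>] [] [v] \<and> tab_rows (tl \<tau>) (tl (tl \<tau>b)) V1
     \<and> (V1 \<noteq> [] \<longrightarrow> linked (hd (tl \<tau>b)) (last [v]) (hd V1))" by (simp add: tab_rows_single)
    then show "\<exists>W V1. V = W @ V1 \<and> tab_rows [hd \<tau>] [] W \<and> tab_rows (tl \<tau>) (tl (tl \<tau>b)) V1
     \<and> (V1 \<noteq> [] \<longrightarrow> linked (hd (tl \<tau>b)) (last W) (hd V1))" by blast
  qed
  finally show ?thesis .
qed

lemma ex2_conj_cong:
  assumes "\<And>U W. P2 U W \<Longrightarrow> P3 U W \<Longrightarrow> B U W = C U W"
  shows "(\<exists>U W. P1 U W \<and> P2 U W \<and> P3 U W \<and> B U W) = (\<exists>U W. P1 U W \<and> P2 U W \<and> P3 U W \<and> C U W)"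
  using assms by blast

(* Since the last overlap of sigma is 1, attaching the sigma rows above a row list W only
   compares the first entry of the last sigma row with the last entry of the first row of W. *)
lemma tab_rows_top_plain:
  assumes sigmab_length: "length \<sigma>b = length \<sigma>" and l1: "\<sigma> \<noteq> [] \<Longrightarrow> last \<sigma>b = 1" and pos: "\<forall>k\<in>set \<sigma>. 1 \<le> k"
    and k0: "1 \<le> k0"
  shows "tab_rows (\<sigma> @ k0 # \<alpha>2) (\<sigma>b @ \<beta>2) ws \<longleftrightarrow> (\<exists>U W. ws = U @ W \<and> tab_rows \<sigma> (butlast \<sigma>b) U \<and>
     tab_rows (k0 # \<alpha>2) \<beta>2 W \<and> (U \<noteq> [] \<longrightarrow> hd (last U) < last (hd W)))"
proof -
  have "tab_rows (\<sigma> @ k0 # \<alpha>2) (\<sigma>b @ \<beta>2) ws \<longleftrightarrow> (\<exists>U W. ws = U @ W \<and> tab_rows \<sigma> (butlast \<sigma>b) U \<and>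
     tab_rows (k0 # \<alpha>2) \<beta>2 W \<and> (U \<noteq> [] \<longrightarrow> linked (last \<sigma>b) (last U) (hd W)))"
    by (rule tab_rows_split_prefix[OF sigmab_length]) simp
  also have "\<dots> = (\<exists>U W. ws = U @ W \<and> tab_rows \<sigma> (butlast \<sigma>b) U \<and>
     tab_rows (k0 # \<alpha>2) \<beta>2 W \<and> (U \<noteq> [] \<longrightarrow> hd (last U) < last (hd W)))"
  proof (rule ex2_conj_cong)
    fix U W assume hU: "tab_rows \<sigma> (butlast \<sigma>b) U" and hW: "tab_rows (k0 # \<alpha>2) \<beta>2 W"
    show "(U \<noteq> [] \<longrightarrow> linked (last \<sigma>b) (last U) (hd W)) = (U \<noteq> [] \<longrightarrow> hd (last U) < last (hd W))"
    proof (cases "U = []")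
      case False
      then have sne: "\<sigma> \<noteq> []" using tab_rows_len[OF hU] by auto
      have "is_row (last \<sigma>) (last U)" using tab_rows_last[OF hU False] .
      moreover have "1 \<le> last \<sigma>" using pos sne by simp
      ultimately have "last U \<noteq> []" by (rule is_row_ne)
      moreover have "W \<noteq> []" using tab_rows_len[OF hW] by auto
      then have "is_row k0 (hd W)" using tab_rows_hd[OF hW] by simp
      then have "hd W \<noteq> []" using k0 by (rule is_row_ne)
      ultimately show ?thesis using l1[OF sne] linked_one by simp
    qed simp
  qed
  finally show ?thesis .
qed

(* Likewise, since the first overlap of tau is 1, for the tau rows below a row list. *)
lemma tab_rows_bot_plain:
  assumes taub_length: "length \<tau>b = length \<tau>" and h1: "\<tau> \<noteq> [] \<Longrightarrow> hd \<tau>b = 1" and pos: "\<forall>k\<in>set \<tau>. 1 \<le> k"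
    and lb: "length \<beta>1 + 1 = length \<alpha>1" and k0: "1 \<le> last \<alpha>1"
  shows "tab_rows (\<alpha>1 @ \<tau>) (\<beta>1 @ \<tau>b) W \<longleftrightarrow> (\<exists>W' V. W = W' @ V \<and> tab_rows \<alpha>1 \<beta>1 W' \<and>
     tab_rows \<tau> (tl \<tau>b) V \<and> (V \<noteq> [] \<longrightarrow> hd (last W') < last (hd V)))"
proof -
  have "tab_rows (\<alpha>1 @ \<tau>) (\<beta>1 @ \<tau>b) W \<longleftrightarrow> (\<exists>W' V. W = W' @ V \<and> tab_rows \<alpha>1 \<beta>1 W' \<and>
     tab_rows \<tau> (tl \<tau>b) V \<and> (V \<noteq> [] \<longrightarrow> linked (hd \<tau>b) (last W') (hd V)))"
    by (rule tab_rows_split_suffix[OF taub_length lb])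
  also have "\<dots> = (\<exists>W' V. W = W' @ V \<and> tab_rows \<alpha>1 \<beta>1 W' \<and>
     tab_rows \<tau> (tl \<tau>b) V \<and> (V \<noteq> [] \<longrightarrow> hd (last W') < last (hd V)))"
  proof (rule ex2_conj_cong)
    fix W' V assume hW: "tab_rows \<alpha>1 \<beta>1 W'" and hV: "tab_rows \<tau> (tl \<tau>b) V"
    show "(V \<noteq> [] \<longrightarrow> linked (hd \<tau>b) (last W') (hd V)) = (V \<noteq> [] \<longrightarrow> hd (last W') < last (hd V))"
    proof (cases "V = []")
      case False
      then have tne: "\<tau> \<noteq> []" using tab_rows_len[OF hV] by auto
      have "is_row (hd \<tau>) (hd V)" using tab_rows_hd[OF hV False] .
      moreover have "1 \<le> hd \<tau>" using pos tne by simp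
      ultimately have "hd V \<noteq> []" by (rule is_row_ne)
      moreover have "W' \<noteq> []" using tab_rows_len[OF hW] lb by auto
      then have "is_row (last \<alpha>1) (last W')" using tab_rows_last[OF hW] by simp
      then have "last W' \<noteq> []" using k0 by (rule is_row_ne)
      ultimately show ?thesis using h1[OF tne] linked_one by simp
    qed simp
  qed
  finally show ?thesis .
qed

lemma tab_rows_top_merged:
  assumes sigmab_length: "length \<sigma>b = length \<sigma>" and sne: "\<sigma> \<noteq> []" and pos: "\<forall>k\<in>set \<sigma>. 1 \<le> k"
    and bnd: "2 \<le> length \<sigma> \<Longrightarrow> last (butlast \<sigma>b) \<le> last \<sigma>" and m1: "1 \<le> m"
  shows "tab_rows (butlast \<sigma> @ (m + last \<sigma>) # \<alpha>2) (butlast \<sigma>b @ \<beta>2) ws \<longleftrightarrow>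
    (\<exists>U a W. U \<noteq> [] \<and> ws = butlast U @ (a @ last U) # W \<and> tab_rows \<sigma> (butlast \<sigma>b) U \<and> is_row m a \<and>
       last a \<le> hd (last U) \<and> tab_rows ((m + last \<sigma>) # \<alpha>2) \<beta>2 ((a @ last U) # W))"
proof -
  have lb: "length (butlast \<sigma>b) = length (butlast \<sigma>)" using sigmab_length by simp
  have ls: "1 \<le> last \<sigma>" using pos sne by simp
  note PA' = tab_rows_split_prefix[OF lb, of "(m + last \<sigma>) # \<alpha>2" \<beta>2 ws, simplified]
  note SL = tab_rows_snoc[OF sne sigmab_length]
  show ?thesis
  proof
    assume "tab_rows (butlast \<sigma> @ (m + last \<sigma>) # \<alpha>2) (butlast \<sigma>b @ \<beta>2) ws"
    then obtain U1 W0 where h: "ws = U1 @ W0" "tab_rows (butlast \<sigma>) (butlast (butlast \<sigma>b)) U1"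
      "tab_rows ((m + last \<sigma>) # \<alpha>2) \<beta>2 W0" "U1 \<noteq> [] \<longrightarrow> linked (last (butlast \<sigma>b)) (last U1) (hd W0)"
      using PA' by blast
    have "W0 \<noteq> []" using tab_rows_len[OF h(3)] by auto
    then obtain w W where W0: "W0 = w # W" by (cases W0) auto
    have "is_row (m + last \<sigma>) w" using tab_rows_hd[OF h(3)] W0 by simp
    then obtain a u where au: "w = a @ u" "is_row m a" "is_row (last \<sigma>) u" "a \<noteq> [] \<longrightarrow> u \<noteq> [] \<longrightarrow> last a \<le> hd u"
      using is_row_append by blast
    have ane: "a \<noteq> []" using is_row_ne[OF au(2) m1] .
    have une: "u \<noteq> []" using is_row_ne[OF au(3) ls] .
    have lk: "U1 \<noteq> [] \<longrightarrow> linked (last (butlast \<sigma>b)) (last U1) u"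
    proof
      assume "U1 \<noteq> []"
      then have "0 < length U1" by simp
      then have "2 \<le> length \<sigma>" using tab_rows_len[OF h(2)] by simp
      then have "last (butlast \<sigma>b) \<le> length u" using bnd au(3) by (simp add: is_row_def)
      then show "linked (last (butlast \<sigma>b)) (last U1) u"
        using h(4) \<open>U1 \<noteq> []\<close> W0 au(1) linked_app_right by simp
    qed
    have rU: "tab_rows \<sigma> (butlast \<sigma>b) (U1 @ [u])" using SL h(2) au(3) lk by blast
    show "\<exists>U a W. U \<noteq> [] \<and> ws = butlast U @ (a @ last U) # W \<and> tab_rows \<sigma> (butlast \<sigma>b) U \<and> is_row m a \<and>
       last a \<le> hd (last U) \<and> tab_rows ((m + last \<sigma>) # \<alpha>2) \<beta>2 ((a @ last U) # W)"
      using rU h(1,3) W0 au ane une by (intro exI[of _ "U1 @ [u]"] exI[of _ a] exI[of _ W]) auto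
  next
    assume "\<exists>U a W. U \<noteq> [] \<and> ws = butlast U @ (a @ last U) # W \<and> tab_rows \<sigma> (butlast \<sigma>b) U \<and> is_row m a \<and>
       last a \<le> hd (last U) \<and> tab_rows ((m + last \<sigma>) # \<alpha>2) \<beta>2 ((a @ last U) # W)"
    then obtain U a W where h: "U \<noteq> []" "ws = butlast U @ (a @ last U) # W" "tab_rows \<sigma> (butlast \<sigma>b) U"
      "is_row m a" "tab_rows ((m + last \<sigma>) # \<alpha>2) \<beta>2 ((a @ last U) # W)" by blast
    obtain U1 u where s: "U = U1 @ [u]" "tab_rows (butlast \<sigma>) (butlast (butlast \<sigma>b)) U1" "is_row (last \<sigma>) u"
      "U1 \<noteq> [] \<longrightarrow> linked (last (butlast \<sigma>b)) (last U1) u" using SL h(3) by blast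
    have lk: "U1 \<noteq> [] \<longrightarrow> linked (last (butlast \<sigma>b)) (last U1) (hd ((a @ u) # W))"
    proof
      assume "U1 \<noteq> []"
      then have "0 < length U1" by simp
      then have "2 \<le> length \<sigma>" using tab_rows_len[OF s(2)] by simp
      then have "last (butlast \<sigma>b) \<le> length u" using bnd s(3) by (simp add: is_row_def)
      then show "linked (last (butlast \<sigma>b)) (last U1) (hd ((a @ u) # W))"
        using s(4) \<open>U1 \<noteq> []\<close> linked_app_right by simp
    qed
    have "ws = U1 @ ((a @ u) # W)" using h(2) s(1) by simp
    moreover have "tab_rows ((m + last \<sigma>) # \<alpha>2) \<beta>2 ((a @ u) # W)" using h(5) s(1) by simp
    ultimately show "tab_rows (butlast \<sigma> @ (m + last \<sigma>) # \<alpha>2) (butlast \<sigma>b @ \<beta>2) ws"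
      using PA' s(2) lk by blast
  qed
qed

lemma tab_rows_bot_merged:
  assumes taub_length: "length \<tau>b = length \<tau>" and tne: "\<tau> \<noteq> []" and pos: "\<forall>k\<in>set \<tau>. 1 \<le> k"
    and bnd: "2 \<le> length \<tau> \<Longrightarrow> hd (tl \<tau>b) \<le> hd \<tau>" and lb: "length \<beta>1 = length \<alpha>1" and k1: "1 \<le> k"
  shows "tab_rows ((\<alpha>1 @ [k + hd \<tau>]) @ tl \<tau>) (\<beta>1 @ tl \<tau>b) W \<longleftrightarrow>
    (\<exists>W' b V. V \<noteq> [] \<and> W = W' @ (hd V @ b) # tl V \<and> tab_rows \<tau> (tl \<tau>b) V \<and> is_row k b \<and>
       last (hd V) \<le> hd b \<and> tab_rows (\<alpha>1 @ [k + hd \<tau>]) \<beta>1 (W' @ [hd V @ b]))"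
proof -
  have lt: "length (tl \<tau>b) = length (tl \<tau>)" using taub_length by simp
  have lb': "length \<beta>1 + 1 = length (\<alpha>1 @ [k + hd \<tau>])" using lb by simp
  have ht: "1 \<le> hd \<tau>" using pos tne by simp
  note SA' = tab_rows_split_suffix[OF lt lb', of W]
  note SH = tab_rows_cons[OF tne taub_length]
  show ?thesis
  proof
    assume "tab_rows ((\<alpha>1 @ [k + hd \<tau>]) @ tl \<tau>) (\<beta>1 @ tl \<tau>b) W"
    then obtain W0 V1 where h: "W = W0 @ V1" "tab_rows (\<alpha>1 @ [k + hd \<tau>]) \<beta>1 W0"
        "tab_rows (tl \<tau>) (tl (tl \<tau>b)) V1"
      "V1 \<noteq> [] \<longrightarrow> linked (hd (tl \<tau>b)) (last W0) (hd V1)" using SA' by blast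
    have W0ne: "W0 \<noteq> []" using tab_rows_len[OF h(2)] by auto
    have "is_row (k + hd \<tau>) (last W0)" using tab_rows_last[OF h(2) W0ne] by simp
    then have "is_row (hd \<tau> + k) (last W0)" by (simp add: add.commute)
    then obtain v b where vb: "last W0 = v @ b" "is_row (hd \<tau>) v" "is_row k b"
        "v \<noteq> [] \<longrightarrow> b \<noteq> [] \<longrightarrow> last v \<le> hd b"
      using is_row_append by blast
    have vne: "v \<noteq> []" using is_row_ne[OF vb(2) ht] .
    have bne: "b \<noteq> []" using is_row_ne[OF vb(3) k1] .
    have lk: "V1 \<noteq> [] \<longrightarrow> linked (hd (tl \<tau>b)) v (hd V1)"
    proof
      assume "V1 \<noteq> []"
      then have "0 < length V1" by simp
      then have "2 \<le> length \<tau>" using tab_rows_len[OF h(3)] by simp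
      then have "hd (tl \<tau>b) \<le> length v" using bnd vb(2) by (simp add: is_row_def)
      then show "linked (hd (tl \<tau>b)) v (hd V1)"
        using h(4) \<open>V1 \<noteq> []\<close> vb(1) linked_app_left by metis
    qed
    have rV: "tab_rows \<tau> (tl \<tau>b) (v # V1)" using SH h(3) vb(2) lk by blast
    have W0e: "W0 = butlast W0 @ [v @ b]" using W0ne vb(1) by (metis append_butlast_last_id)
    show "\<exists>W' b V. V \<noteq> [] \<and> W = W' @ (hd V @ b) # tl V \<and> tab_rows \<tau> (tl \<tau>b) V \<and> is_row k b \<and>
       last (hd V) \<le> hd b \<and> tab_rows (\<alpha>1 @ [k + hd \<tau>]) \<beta>1 (W' @ [hd V @ b])"
    proof (rule exI[of _ "butlast W0"], rule exI[of _ b], rule exI[of _ "v # V1"], intro conjI)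
      show "W = butlast W0 @ (hd (v # V1) @ b) # tl (v # V1)" using h(1) W0e
          by (metis append.assoc append_Cons append_Nil list.sel(1) list.sel(3))
      show "tab_rows (\<alpha>1 @ [k + hd \<tau>]) \<beta>1 (butlast W0 @ [hd (v # V1) @ b])" using h(2) W0e by simp
    qed (use rV vb vne bne in auto)
  next
    assume "\<exists>W' b V. V \<noteq> [] \<and> W = W' @ (hd V @ b) # tl V \<and> tab_rows \<tau> (tl \<tau>b) V \<and> is_row k b \<and>
       last (hd V) \<le> hd b \<and> tab_rows (\<alpha>1 @ [k + hd \<tau>]) \<beta>1 (W' @ [hd V @ b])"
    then obtain W' b V where h: "V \<noteq> []" "W = W' @ (hd V @ b) # tl V" "tab_rows \<tau> (tl \<tau>b) V"
      "tab_rows (\<alpha>1 @ [k + hd \<tau>]) \<beta>1 (W' @ [hd V @ b])" by blast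
    obtain v V1 where s: "V = v # V1" "is_row (hd \<tau>) v" "tab_rows (tl \<tau>) (tl (tl \<tau>b)) V1"
      "V1 \<noteq> [] \<longrightarrow> linked (hd (tl \<tau>b)) v (hd V1)" using SH h(3) by blast
    have lk: "V1 \<noteq> [] \<longrightarrow> linked (hd (tl \<tau>b)) (last (W' @ [v @ b])) (hd V1)"
    proof
      assume "V1 \<noteq> []"
      then have "0 < length V1" by simp
      then have "2 \<le> length \<tau>" using tab_rows_len[OF s(3)] by simp
      then have "hd (tl \<tau>b) \<le> length v" using bnd s(2) by (simp add: is_row_def)
      then show "linked (hd (tl \<tau>b)) (last (W' @ [v @ b])) (hd V1)"
        using s(4) \<open>V1 \<noteq> []\<close> linked_app_left by simp
    qed
    have "W = (W' @ [v @ b]) @ V1" using h(2) s(1) by simp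
    moreover have "tab_rows (\<alpha>1 @ [k + hd \<tau>]) \<beta>1 (W' @ [v @ b])" using h(4) s(1) by simp
    ultimately show "tab_rows ((\<alpha>1 @ [k + hd \<tau>]) @ tl \<tau>) (\<beta>1 @ tl \<tau>b) W"
      using SA' s(3) lk by blast
  qed
qed

section \<open>Switching initial segments of two rows\<close>

(* The switch exchanges the first i entries of a row a with the first g + i entries of a row b,
   at the least i in the window [lo, hi) where the two rows cross.  switch_stop holds at
   crossing points of (a, b), unswitch_stop at crossing points of the image; the guards
   handle the left end of the window. *)
definition switch_stop :: "nat \<Rightarrow> nat \<Rightarrow> nat \<Rightarrow> nat list \<Rightarrow> nat list \<Rightarrow> nat \<Rightarrow> bool" where
  "switch_stop g lo hi a b i \<longleftrightarrow> lo \<le> i \<and> i < hi \<and> b!(g+i-1) \<le> a!i"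

definition unswitch_stop :: "nat \<Rightarrow> nat \<Rightarrow> nat \<Rightarrow> nat list \<Rightarrow> nat list \<Rightarrow> nat \<Rightarrow> bool" where
  "unswitch_stop g lo hi a b i \<longleftrightarrow> lo \<le> i \<and> i < hi \<and> (i < length b \<longrightarrow> a!(g+i-1) \<le> b!i)"

definition switch_guard :: "nat \<Rightarrow> nat \<Rightarrow> nat list \<Rightarrow> nat list \<Rightarrow> bool" where
  "switch_guard g lo a b \<longleftrightarrow> (0 < lo \<and> g + lo < length b \<longrightarrow> a!(lo-1) \<le> b!(g+lo))"

definition unswitch_guard :: "nat \<Rightarrow> nat \<Rightarrow> nat list \<Rightarrow> nat list \<Rightarrow> bool" where
  "unswitch_guard g lo a b \<longleftrightarrow> (0 < lo \<longrightarrow> b!(lo-1) \<le> a!(g+lo))"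

definition switch_swap :: "nat \<Rightarrow> nat \<Rightarrow> nat list \<Rightarrow> nat list \<Rightarrow> nat list \<times> nat list" where
  "switch_swap g i a b = (take (g+i) b @ drop i a, take i a @ drop (g+i) b)"

definition unswitch_swap :: "nat \<Rightarrow> nat \<Rightarrow> nat list \<Rightarrow> nat list \<Rightarrow> nat list \<times> nat list" where
  "unswitch_swap g i a b = (take i b @ drop (g+i) a, take (g+i) a @ drop i b)"

definition switch :: "nat \<Rightarrow> nat \<Rightarrow> nat \<Rightarrow> nat list \<times> nat list \<Rightarrow> nat list \<times> nat list" where
  "switch g lo hi p = switch_swap g (LEAST i. switch_stop g lo hi (fst p) (snd p) i) (fst p) (snd p)"

definition unswitch :: "nat \<Rightarrow> nat \<Rightarrow> nat \<Rightarrow> nat list \<times> nat list \<Rightarrow> nat list \<times> nat list" where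
  "unswitch g lo hi p = unswitch_swap g (LEAST i. unswitch_stop g lo hi (fst p) (snd p) i) (fst p) (snd p)"

locale row_switch =
  fixes g lo hi m n :: nat
  assumes gap_pos: "1 \<le> g + lo" and window_ne: "lo < hi"
    and window_le_m: "hi \<le> m" and window_le_n: "g + hi \<le> Suc n"
begin

definition switch_dom :: "(nat list \<times> nat list) set" where
  "switch_dom = {(a,b). is_row m a \<and> is_row n b \<and> (\<exists>i. switch_stop g lo hi a b i)
     \<and> switch_guard g lo a b}"

definition unswitch_dom :: "(nat list \<times> nat list) set" where
  "unswitch_dom = {(a,b). is_row (g+m) a \<and> is_row (n-g) b \<and> (\<exists>i. unswitch_stop g lo hi a b i)
     \<and> unswitch_guard g lo a b}"

lemma switch_step_rows:
  assumes ra: "is_row m a" and rb: "is_row n b" and ci: "switch_stop g lo hi a b i"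
    and mn: "\<And>k. lo \<le> k \<Longrightarrow> k < i \<Longrightarrow> a!k < b!(g+k-1)"
    and hf: "switch_guard g lo a b"
    and sw: "switch_swap g i a b = (a', b')"
  shows "is_row (g+m) a'" "is_row (n-g) b'"
proof -
  have la: "length a = m" and sa: "sorted a" and pa: "\<forall>y\<in>set a. 1 \<le> y" using ra by (auto simp: is_row_def)
  have lb: "length b = n" and sb: "sorted b" and pb: "\<forall>y\<in>set b. 1 \<le> y" using rb by (auto simp: is_row_def)
  have i1: "lo \<le> i" "i < hi" and cfi: "b!(g+i-1) \<le> a!i" using ci by (auto simp: switch_stop_def)
  have gi: "g + i \<le> n" "1 \<le> g + i" "i < m" using i1 gap_pos window_le_m window_le_n by auto
  have a'd: "a' = take (g+i) b @ drop i a" and b'd: "b' = take i a @ drop (g+i) b"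
    using sw by (auto simp: switch_swap_def)
  have la': "length a' = g + m" using a'd gi la lb by auto
  have lb': "length b' = n - g" using b'd gi la lb by auto
  show "is_row (g+m) a'"
    unfolding is_row_def
  proof (intro conjI)
    show "length a' = g + m" by fact
    show "sorted a'" unfolding a'd
    proof (rule sorted_app)
      show "sorted (take (g + i) b)" using sb by simp
      show "sorted (drop i a)" using sa by simp
      assume "take (g + i) b \<noteq> []" "drop i a \<noteq> []"
      have "last (take (g+i) b) = b!(g+i-1)" using gi lb
        by (intro last_take_nth) auto
      moreover have "hd (drop i a) = a!i" using gi la by (simp add: hd_drop_conv_nth)
      ultimately show "last (take (g + i) b) \<le> hd (drop i a)" using cfi by simp
    qed
    show "\<forall>y\<in>set a'. 1 \<le> y" using pa pb a'd by (auto dest: in_set_takeD in_set_dropD)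
  qed
  show "is_row (n-g) b'"
    unfolding is_row_def
  proof (intro conjI)
    show "length b' = n - g" by fact
    show "sorted b'" unfolding b'd
    proof (rule sorted_app)
      show "sorted (take i a)" using sa by simp
      show "sorted (drop (g+i) b)" using sb by simp
      assume ne: "take i a \<noteq> []" "drop (g+i) b \<noteq> []"
      then have i0: "0 < i" and gin: "g + i < n" using lb by auto
      have "last (take i a) = a!(i-1)" using gi la i0 by (intro last_take_nth) auto
      moreover have "hd (drop (g+i) b) = b!(g+i)" using gin lb by (simp add: hd_drop_conv_nth)
      moreover have "a!(i-1) \<le> b!(g+i)"
      proof (cases "lo \<le> i - 1")
        case True
        then have "a!(i-1) < b!(g+(i-1)-1)" using mn[of "i-1"] i0 by auto
        also have "b!(g+(i-1)-1) \<le> b!(g+i)" using sb gin lb by (intro sorted_nth_mono) auto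
        finally show ?thesis by simp
      next
        case False
        then have "i = lo" using i1 by auto
        then show ?thesis using hf i0 gin lb by (auto simp: switch_guard_def)
      qed
      ultimately show "last (take i a) \<le> hd (drop (g+i) b)" by simp
    qed
    show "\<forall>y\<in>set b'. 1 \<le> y" using pa pb b'd by (auto dest: in_set_takeD in_set_dropD)
  qed
qed

lemma switch_step:
  assumes ra: "is_row m a" and rb: "is_row n b" and ci: "switch_stop g lo hi a b i"
    and mn: "\<And>k. lo \<le> k \<Longrightarrow> k < i \<Longrightarrow> a!k < b!(g+k-1)"
    and hf: "switch_guard g lo a b"
    and sw: "switch_swap g i a b = (a', b')"
  shows "is_row (g+m) a'" "is_row (n-g) b'" "unswitch_stop g lo hi a' b' i"
    "\<And>k. lo \<le> k \<Longrightarrow> k < i \<Longrightarrow> k < length b' \<and> b'!k < a'!(g+k-1)"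
    "unswitch_guard g lo a' b'" "unswitch_swap g i a' b' = (a, b)"
proof -
  show "is_row (g+m) a'" "is_row (n-g) b'"
    using switch_step_rows[OF ra rb ci mn hf sw] by auto
  have la: "length a = m" and sa: "sorted a" using ra by (auto simp: is_row_def)
  have lb: "length b = n" and sb: "sorted b" using rb by (auto simp: is_row_def)
  have i1: "lo \<le> i" "i < hi" and cfi: "b!(g+i-1) \<le> a!i" using ci by (auto simp: switch_stop_def)
  have gi: "g + i \<le> n" "1 \<le> g + i" "i < m" using i1 gap_pos window_le_m window_le_n by auto
  have a'd: "a' = take (g+i) b @ drop i a" and b'd: "b' = take i a @ drop (g+i) b"
    using sw by (auto simp: switch_swap_def)
  have la': "length a' = g + m" using a'd gi la lb by auto
  have lb': "length b' = n - g" using b'd gi la lb by auto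
  have a'1: "\<And>t. t < g + i \<Longrightarrow> a'!t = b!t" using a'd gi lb by (simp add: nth_append)
  have a'2: "\<And>t. g + i \<le> t \<Longrightarrow> t < g + m \<Longrightarrow> a'!t = a!(t - g)" using a'd gi lb la
    by (simp add: nth_append)
  have b'1: "\<And>t. t < i \<Longrightarrow> b'!t = a!t" using b'd gi la by (simp add: nth_append)
  have b'2: "\<And>t. i \<le> t \<Longrightarrow> t < n - g \<Longrightarrow> b'!t = b!(t + g)" using b'd gi lb la
    by (simp add: nth_append add.commute)
  show "unswitch_stop g lo hi a' b' i"
    unfolding unswitch_stop_def
  proof (intro conjI impI)
    show "lo \<le> i" "i < hi" by fact+
    assume "i < length b'"
    then have "g + i < n" using lb' by simp
    have "a'!(g+i-1) = b!(g+i-1)" using a'1 gi by simp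
    moreover have "b'!i = b!(i+g)" using b'2 \<open>i < length b'\<close> lb' by simp
    moreover have "b!(g+i-1) \<le> b!(i+g)" using sb \<open>g+i<n\<close> lb by (intro sorted_nth_mono) auto
    ultimately show "a'!(g+i-1) \<le> b'!i" by simp
  qed
  show "\<And>k. lo \<le> k \<Longrightarrow> k < i \<Longrightarrow> k < length b' \<and> b'!k < a'!(g+k-1)"
  proof -
    fix k assume k: "lo \<le> k" "k < i"
    have "k < length b'" using k gi lb' by simp
    moreover have "b'!k = a!k" using b'1 k by simp
    moreover have "a'!(g+k-1) = b!(g+k-1)" using a'1 k gap_pos by simp
    ultimately show "k < length b' \<and> b'!k < a'!(g+k-1)" using mn[OF k] by simp
  qed
  show "unswitch_guard g lo a' b'"
    unfolding unswitch_guard_def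
  proof
    assume l0: "0 < lo"
    have "b'!(lo-1) = a!(lo-1)" using b'1 l0 i1 by simp
    show "b'!(lo-1) \<le> a'!(g+lo)"
    proof (cases "lo < i")
      case True
      then have "a'!(g+lo) = b!(g+lo)" using a'1 by simp
      moreover have "a!(lo-1) \<le> b!(g+lo)" using hf l0 True gi lb by (auto simp: switch_guard_def)
      ultimately show ?thesis using \<open>b'!(lo-1) = a!(lo-1)\<close> by simp
    next
      case False
      then have "i = lo" using i1 by simp
      then have "a'!(g+lo) = a!lo" using a'2[of "g+lo"] gi by simp
      moreover have "a!(lo-1) \<le> a!lo" using sa gi \<open>i = lo\<close> la by (intro sorted_nth_mono) auto
      ultimately show ?thesis using \<open>b'!(lo-1) = a!(lo-1)\<close> by simp
    qed
  qed
  show "unswitch_swap g i a' b' = (a, b)"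
    using gi la lb a'd b'd by (simp add: unswitch_swap_def)
qed

lemma unswitch_step_rows:
  assumes ra: "is_row (g+m) a'" and rb: "is_row (n-g) b'" and ci: "unswitch_stop g lo hi a' b' i"
    and mn: "\<And>k. lo \<le> k \<Longrightarrow> k < i \<Longrightarrow> k < length b' \<and> b'!k < a'!(g+k-1)"
    and hb: "unswitch_guard g lo a' b'"
    and sw: "unswitch_swap g i a' b' = (a, b)"
  shows "is_row m a" "is_row n b"
proof -
  have la': "length a' = g + m" and sa: "sorted a'" and pa: "\<forall>y\<in>set a'. 1 \<le> y" using ra
      by (auto simp: is_row_def)
  have lb': "length b' = n - g" and sb: "sorted b'" and pb: "\<forall>y\<in>set b'. 1 \<le> y" using rb
      by (auto simp: is_row_def)
  have i1: "lo \<le> i" "i < hi" and cbi: "i < length b' \<Longrightarrow> a'!(g+i-1) \<le> b'!i" using ci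
      by (auto simp: unswitch_stop_def)
  have gi: "g + i \<le> n" "1 \<le> g + i" "i < m" using i1 gap_pos window_le_m window_le_n by auto
  have ad: "a = take i b' @ drop (g+i) a'" and bd: "b = take (g+i) a' @ drop i b'"
    using sw by (auto simp: unswitch_swap_def)
  have la: "length a = m" using ad gi la' lb' by auto
  have lb: "length b = n" using bd gi la' lb' by auto
  show "is_row m a"
    unfolding is_row_def
  proof (intro conjI)
    show "length a = m" by fact
    show "sorted a" unfolding ad
    proof (rule sorted_app)
      show "sorted (take i b')" using sb by simp
      show "sorted (drop (g+i) a')" using sa by simp
      assume ne: "take i b' \<noteq> []" "drop (g+i) a' \<noteq> []"
      then have i0: "0 < i" by auto
      have "last (take i b') = b'!(i-1)" using gi lb' i0 by (intro last_take_nth) auto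
      moreover have "hd (drop (g+i) a') = a'!(g+i)" using gi la' by (simp add: hd_drop_conv_nth)
      moreover have "b'!(i-1) \<le> a'!(g+i)"
      proof (cases "lo \<le> i - 1")
        case True
        then have "b'!(i-1) < a'!(g+(i-1)-1)" using mn[of "i-1"] i0 by auto
        also have "a'!(g+(i-1)-1) \<le> a'!(g+i)" using sa gi la' by (intro sorted_nth_mono) auto
        finally show ?thesis by simp
      next
        case False
        then have "i = lo" using i1 by auto
        then show ?thesis using hb i0 by (auto simp: unswitch_guard_def)
      qed
      ultimately show "last (take i b') \<le> hd (drop (g+i) a')" by simp
    qed
    show "\<forall>y\<in>set a. 1 \<le> y" using pa pb ad by (auto dest: in_set_takeD in_set_dropD)
  qed
  show "is_row n b"
    unfolding is_row_def
  proof (intro conjI)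
    show "length b = n" by fact
    show "sorted b" unfolding bd
    proof (rule sorted_app)
      show "sorted (take (g+i) a')" using sa by simp
      show "sorted (drop i b')" using sb by simp
      assume ne: "take (g+i) a' \<noteq> []" "drop i b' \<noteq> []"
      then have il: "i < length b'" by auto
      have "last (take (g+i) a') = a'!(g+i-1)" using gi la' by (intro last_take_nth) auto
      moreover have "hd (drop i b') = b'!i" using il by (simp add: hd_drop_conv_nth)
      ultimately show "last (take (g+i) a') \<le> hd (drop i b')" using cbi il by simp
    qed
    show "\<forall>y\<in>set b. 1 \<le> y" using pa pb bd by (auto dest: in_set_takeD in_set_dropD)
  qed
qed

lemma unswitch_step:
  assumes ra: "is_row (g+m) a'" and rb: "is_row (n-g) b'" and ci: "unswitch_stop g lo hi a' b' i"
    and mn: "\<And>k. lo \<le> k \<Longrightarrow> k < i \<Longrightarrow> k < length b' \<and> b'!k < a'!(g+k-1)"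
    and hb: "unswitch_guard g lo a' b'"
    and sw: "unswitch_swap g i a' b' = (a, b)"
  shows "is_row m a" "is_row n b" "switch_stop g lo hi a b i"
    "\<And>k. lo \<le> k \<Longrightarrow> k < i \<Longrightarrow> a!k < b!(g+k-1)"
    "switch_guard g lo a b" "switch_swap g i a b = (a', b')"
proof -
  show "is_row m a" "is_row n b"
    using unswitch_step_rows[OF ra rb ci mn hb sw] by auto
  have la': "length a' = g + m" and sa: "sorted a'" using ra by (auto simp: is_row_def)
  have lb': "length b' = n - g" and sb: "sorted b'" using rb by (auto simp: is_row_def)
  have i1: "lo \<le> i" "i < hi" and cbi: "i < length b' \<Longrightarrow> a'!(g+i-1) \<le> b'!i" using ci
      by (auto simp: unswitch_stop_def)
  have gi: "g + i \<le> n" "1 \<le> g + i" "i < m" using i1 gap_pos window_le_m window_le_n by auto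
  have ad: "a = take i b' @ drop (g+i) a'" and bd: "b = take (g+i) a' @ drop i b'"
    using sw by (auto simp: unswitch_swap_def)
  have la: "length a = m" using ad gi la' lb' by auto
  have lb: "length b = n" using bd gi la' lb' by auto
  have a1: "\<And>t. t < i \<Longrightarrow> a!t = b'!t" using ad gi lb' by (simp add: nth_append)
  have a2: "\<And>t. i \<le> t \<Longrightarrow> t < m \<Longrightarrow> a!t = a'!(t + g)" using ad gi lb' la'
    by (simp add: nth_append add.commute)
  have b1: "\<And>t. t < g + i \<Longrightarrow> b!t = a'!t" using bd gi la' by (simp add: nth_append)
  have b2: "\<And>t. g + i \<le> t \<Longrightarrow> t < n \<Longrightarrow> b!t = b'!(t - g)" using bd gi lb' la'
    by (simp add: nth_append)
  show "switch_stop g lo hi a b i"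
    unfolding switch_stop_def
  proof (intro conjI)
    show "lo \<le> i" "i < hi" by fact+
    have "b!(g+i-1) = a'!(g+i-1)" using b1 gi by simp
    moreover have "a!i = a'!(i+g)" using a2 gi by simp
    moreover have "a'!(g+i-1) \<le> a'!(i+g)" using sa gi la' by (intro sorted_nth_mono) auto
    ultimately show "b!(g+i-1) \<le> a!i" by simp
  qed
  show "\<And>k. lo \<le> k \<Longrightarrow> k < i \<Longrightarrow> a!k < b!(g+k-1)"
  proof -
    fix k assume k: "lo \<le> k" "k < i"
    have "a!k = b'!k" using a1 k by simp
    moreover have "b!(g+k-1) = a'!(g+k-1)" using b1 k gap_pos by simp
    ultimately show "a!k < b!(g+k-1)" using mn[OF k] by simp
  qed
  show "switch_guard g lo a b"
    unfolding switch_guard_def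
  proof
    assume l0: "0 < lo \<and> g + lo < length b"
    have "lo - 1 < i" using l0 i1 by linarith
    then have e1: "a!(lo-1) = b'!(lo-1)" using a1 by blast
    show "a!(lo-1) \<le> b!(g+lo)"
    proof (cases "lo < i")
      case True
      then have "b!(g+lo) = a'!(g+lo)" using b1 by simp
      then show ?thesis using hb l0 e1 by (simp add: unswitch_guard_def)
    next
      case False
      then have "i = lo" using i1 by simp
      then have "b!(g+lo) = b'!lo" using b2[of "g+lo"] gi l0 lb by simp
      moreover have "b'!(lo-1) \<le> b'!lo" using sb l0 lb lb' \<open>i = lo\<close> by (intro sorted_nth_mono) auto
      ultimately show ?thesis using e1 by simp
    qed
  qed
  show "switch_swap g i a b = (a', b')"
    using gi la' lb' ad bd by (simp add: switch_swap_def)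
qed

lemma switch_dom_least:
  assumes "(a,b) \<in> switch_dom"
  shows "switch_stop g lo hi a b (LEAST i. switch_stop g lo hi a b i)"
    "\<And>k. lo \<le> k \<Longrightarrow> k < (LEAST i. switch_stop g lo hi a b i) \<Longrightarrow> a!k < b!(g+k-1)"
proof -
  from assms obtain j where "switch_stop g lo hi a b j" by (auto simp: switch_dom_def)
  then show c: "switch_stop g lo hi a b (LEAST i. switch_stop g lo hi a b i)" by (rule LeastI)
  fix k assume k: "lo \<le> k" "k < (LEAST i. switch_stop g lo hi a b i)"
  from k(2) have "\<not> switch_stop g lo hi a b k" by (rule not_less_Least)
  moreover have "k < hi" using k c by (auto simp: switch_stop_def)
  ultimately show "a!k < b!(g+k-1)" using k by (auto simp: switch_stop_def)
qed

lemma unswitch_dom_least: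
  assumes "(a,b) \<in> unswitch_dom"
  shows "unswitch_stop g lo hi a b (LEAST i. unswitch_stop g lo hi a b i)"
    "\<And>k. lo \<le> k \<Longrightarrow> k < (LEAST i. unswitch_stop g lo hi a b i) \<Longrightarrow> k < length b \<and> b!k < a!(g+k-1)"
proof -
  from assms obtain j where "unswitch_stop g lo hi a b j" by (auto simp: unswitch_dom_def)
  then show c: "unswitch_stop g lo hi a b (LEAST i. unswitch_stop g lo hi a b i)" by (rule LeastI)
  fix k assume k: "lo \<le> k" "k < (LEAST i. unswitch_stop g lo hi a b i)"
  from k(2) have "\<not> unswitch_stop g lo hi a b k" by (rule not_less_Least)
  moreover have "k < hi" using k c by (auto simp: unswitch_stop_def)
  ultimately show "k < length b \<and> b!k < a!(g+k-1)" using k by (auto simp: unswitch_stop_def)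
qed

lemma switch_in:
  assumes p: "p \<in> switch_dom"
  shows "switch g lo hi p \<in> unswitch_dom" "unswitch g lo hi (switch g lo hi p) = p"
proof -
  obtain a b where pab: "p = (a,b)" by (cases p)
  define i where "i = (LEAST i. switch_stop g lo hi a b i)"
  obtain a' b' where sw: "switch_swap g i a b = (a',b')" by (cases "switch_swap g i a b")
  have fw: "switch g lo hi p = (a',b')" using sw pab by (simp add: switch_def i_def)
  have ab: "(a,b) \<in> switch_dom" using p pab by simp
  then have ra: "is_row m a" and rb: "is_row n b" and hf: "switch_guard g lo a b"
      by (auto simp: switch_dom_def)
  note least = switch_dom_least[OF ab, folded i_def]
  note step = switch_step[OF ra rb least(1) least(2) hf sw]
  have lst: "(LEAST k. unswitch_stop g lo hi a' b' k) = i"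
  proof (rule Least_equality)
    show "unswitch_stop g lo hi a' b' i" by (rule step(3))
    fix k assume ck: "unswitch_stop g lo hi a' b' k"
    show "i \<le> k"
    proof (rule ccontr)
      assume "\<not> i \<le> k"
      then have "k < i" by simp
      moreover have "lo \<le> k" using ck by (simp add: unswitch_stop_def)
      ultimately have "k < length b' \<and> b'!k < a'!(g+k-1)" using step(4) by blast
      then show False using ck by (auto simp: unswitch_stop_def)
    qed
  qed
  show "switch g lo hi p \<in> unswitch_dom" using fw step(1,2,3,5) by (auto simp: unswitch_dom_def)
  show "unswitch g lo hi (switch g lo hi p) = p" using fw lst step(6) pab by (simp add: unswitch_def)
qed

lemma unswitch_in:
  assumes p: "p \<in> unswitch_dom"
  shows "unswitch g lo hi p \<in> switch_dom" "switch g lo hi (unswitch g lo hi p) = p"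
proof -
  obtain a' b' where pab: "p = (a',b')" by (cases p)
  define i where "i = (LEAST i. unswitch_stop g lo hi a' b' i)"
  obtain a b where sw: "unswitch_swap g i a' b' = (a,b)" by (cases "unswitch_swap g i a' b'")
  have bw: "unswitch g lo hi p = (a,b)" using sw pab by (simp add: unswitch_def i_def)
  have ab: "(a',b') \<in> unswitch_dom" using p pab by simp
  then have ra: "is_row (g+m) a'" and rb: "is_row (n-g) b'" and hb: "unswitch_guard g lo a' b'"
      by (auto simp: unswitch_dom_def)
  note least = unswitch_dom_least[OF ab, folded i_def]
  note step = unswitch_step[OF ra rb least(1) least(2) hb sw]
  have lst: "(LEAST k. switch_stop g lo hi a b k) = i"
  proof (rule Least_equality)
    show "switch_stop g lo hi a b i" by (rule step(3))
    fix k assume ck: "switch_stop g lo hi a b k"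
    show "i \<le> k"
    proof (rule ccontr)
      assume "\<not> i \<le> k"
      then have "k < i" by simp
      moreover have "lo \<le> k" using ck by (simp add: switch_stop_def)
      ultimately have "a!k < b!(g+k-1)" using step(4) by blast
      then show False using ck by (auto simp: switch_stop_def)
    qed
  qed
  show "unswitch g lo hi p \<in> switch_dom" using bw step(1,2,3,5) by (auto simp: switch_dom_def)
  show "switch g lo hi (unswitch g lo hi p) = p" using bw lst step(6) pab by (simp add: switch_def)
qed

lemma mset_take_drop: "mset (take k xs) + mset (drop k xs) = mset xs"
  by (metis append_take_drop_id mset_append)

lemma switch_props:
  assumes p: "(a,b) \<in> switch_dom" and fw: "switch g lo hi (a,b) = (a',b')"
  shows "mset a' + mset b' = mset a + mset b" "hd a' = hd b" "last a' = last a"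
    "0 < lo \<Longrightarrow> hd b' = hd a" "g + hi \<le> n \<Longrightarrow> last b' = last b"
proof -
  define i where "i = (LEAST i. switch_stop g lo hi a b i)"
  have ra: "is_row m a" and rb: "is_row n b" using p by (auto simp: switch_dom_def)
  have la: "length a = m" and lb: "length b = n" using ra rb by (auto simp: is_row_def)
  have ci: "switch_stop g lo hi a b i" using switch_dom_least[OF p] by (simp add: i_def)
  then have i1: "lo \<le> i" "i < hi" by (auto simp: switch_stop_def)
  have gi: "g + i \<le> n" "1 \<le> g + i" "i < m" using i1 gap_pos window_le_m window_le_n by auto
  have a'd: "a' = take (g+i) b @ drop i a" and b'd: "b' = take i a @ drop (g+i) b"
    using fw by (auto simp: switch_def switch_swap_def i_def)
  have "mset a' + mset b' = (mset (take (g+i) b) + mset (drop (g+i) b))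
      + (mset (take i a) + mset (drop i a))"
    using a'd b'd by (simp add: ac_simps)
  also have "\<dots> = mset a + mset b" using mset_take_drop[of "g+i" b] mset_take_drop[of i a]
      by (simp add: add.commute)
  finally show "mset a' + mset b' = mset a + mset b" .
  have "take (g+i) b \<noteq> []" using gi lb by auto
  then show "hd a' = hd b" using a'd gi lb by (cases b) auto
  have "drop i a \<noteq> []" using gi la by auto
  then show "last a' = last a" using a'd by simp
  show "0 < lo \<Longrightarrow> hd b' = hd a"
  proof -
    assume "0 < lo"
    then have "take i a \<noteq> []" using i1 gi la by auto
    then show "hd b' = hd a" using b'd i1 by (cases a) auto
  qed
  show "g + hi \<le> n \<Longrightarrow> last b' = last b"
  proof -
    assume "g + hi \<le> n"
    then have "drop (g+i) b \<noteq> []" using i1 lb by auto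
    then show "last b' = last b" using b'd by simp
  qed
qed

end

section \<open>Counting identities for frames with two free rows\<close>

(* An environment e has content env_content e; its upper part may
   accept a row directly below it (L e y, with y the last entry of that row; upward closed) and its
   lower part a row directly above it (H e y, with y the first entry; downward closed).
   pairs P k l is the set of environments with rows of lengths k and l satisfying P, of total
   content c. *)
locale pair_count =
  fixes E :: "'e set" and env_content :: "'e \<Rightarrow> nat multiset" and c :: "nat \<Rightarrow> nat"
    and L H :: "'e \<Rightarrow> nat \<Rightarrow> bool"
  assumes Lmono: "\<And>e y y'. L e y \<Longrightarrow> y \<le> y' \<Longrightarrow> L e y'"
    and Hmono: "\<And>e y y'. H e y' \<Longrightarrow> y \<le> y' \<Longrightarrow> H e y"
    and fin: "\<And>k l. finite {(e,a,b). e \<in> E \<and> is_row k a \<and> is_row l b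
        \<and> count (env_content e + mset a + mset b) = c}"
begin

definition pairs :: "('e \<Rightarrow> nat list \<Rightarrow> nat list \<Rightarrow> bool) \<Rightarrow> nat \<Rightarrow> nat \<Rightarrow> ('e \<times> nat list \<times> nat list) set" where
  "pairs P k l = {(e,a,b). e \<in> E \<and> is_row k a \<and> is_row l b \<and> P e a b
      \<and> count (env_content e + mset a + mset b) = c}"

lemma finite_pairs: "finite (pairs P k l)"
  by (rule finite_subset[OF _ fin[of k l]]) (auto simp: pairs_def)

lemma card_split:
  "card (pairs P k l) = card (pairs (\<lambda>e a b. P e a b \<and> Q e a b) k l)
      + card (pairs (\<lambda>e a b. P e a b \<and> \<not> Q e a b) k l)"
proof -
  have "pairs P k l = pairs (\<lambda>e a b. P e a b \<and> Q e a b) k l \<union> pairs (\<lambda>e a b. P e a b \<and> \<not> Q e a b) k l"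
    by (auto simp: pairs_def)
  moreover have "pairs (\<lambda>e a b. P e a b \<and> Q e a b) k l \<inter> pairs (\<lambda>e a b. P e a b \<and> \<not> Q e a b) k l = {}"
    by (auto simp: pairs_def)
  ultimately show ?thesis by (simp add: card_Un_disjoint finite_pairs)
qed

lemma pairs_cong:
  assumes "\<And>e a b. e \<in> E \<Longrightarrow> is_row k a \<Longrightarrow> is_row l b \<Longrightarrow> P e a b = P' e a b"
  shows "pairs P k l = pairs P' k l"
  using assms by (auto simp: pairs_def)

lemma card_pairs_swap: "card (pairs P k l) = card (pairs (\<lambda>e a b. P e b a) l k)"
proof (rule bij_betw_same_card)
  show "bij_betw (\<lambda>(e,a,b). (e,b,a)) (pairs P k l) (pairs (\<lambda>e a b. P e b a) l k)"
    by (rule bij_betw_byWitness[where f'="\<lambda>(e,a,b). (e,b,a)"]) (auto simp: pairs_def ac_simps)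
qed

lemma card_switch:
  assumes sw: "row_switch g lo hi k l"
    and PF: "\<And>e a b. e \<in> E \<Longrightarrow> is_row k a \<Longrightarrow> is_row l b \<Longrightarrow> P e a b \<Longrightarrow> (a,b) \<in> row_switch.switch_dom g lo hi k l"
    and PB: "\<And>e a b. e \<in> E \<Longrightarrow> is_row (g+k) a \<Longrightarrow> is_row (l-g) b \<Longrightarrow> P' e a b
        \<Longrightarrow> (a,b) \<in> row_switch.unswitch_dom g lo hi k l"
    and eq: "\<And>e a b a' b'. e \<in> E \<Longrightarrow> (a,b) \<in> row_switch.switch_dom g lo hi k l
        \<Longrightarrow> switch g lo hi (a,b) = (a',b') \<Longrightarrow> P e a b = P' e a' b'"
  shows "card (pairs P k l) = card (pairs P' (g+k) (l-g))"
proof (rule bij_betw_same_card)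
  interpret row_switch g lo hi k l by (rule sw)
  show "bij_betw (\<lambda>(e,p). (e, switch g lo hi p)) (pairs P k l) (pairs P' (g+k) (l-g))"
  proof (rule bij_betw_byWitness[where f'="\<lambda>(e,p). (e, unswitch g lo hi p)"])
    show "\<forall>x\<in>pairs P k l. (\<lambda>(e,p). (e, unswitch g lo hi p)) ((\<lambda>(e,p). (e, switch g lo hi p)) x) = x"
      using PF by (auto simp: pairs_def switch_in)
    show "\<forall>y\<in>pairs P' (g+k) (l-g).
        (\<lambda>(e,p). (e, switch g lo hi p)) ((\<lambda>(e,p). (e, unswitch g lo hi p)) y) = y"
      using PB by (auto simp: pairs_def unswitch_in)
    show "(\<lambda>(e,p). (e, switch g lo hi p)) ` pairs P k l \<subseteq> pairs P' (g+k) (l-g)"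
    proof
      fix y assume "y \<in> (\<lambda>(e,p). (e, switch g lo hi p)) ` pairs P k l"
      then obtain e a b where x: "(e,a,b) \<in> pairs P k l" and y: "y = (e, switch g lo hi (a,b))" by auto
      obtain a' b' where f: "switch g lo hi (a,b) = (a',b')" by (cases "switch g lo hi (a,b)")
      have e: "e \<in> E" and r: "is_row k a" "is_row l b" and p: "P e a b"
        and cc: "count (env_content e + mset a + mset b) = c" using x by (auto simp: pairs_def)
      have v: "(a,b) \<in> switch_dom" using PF[OF e r p] .
      have "(a',b') \<in> unswitch_dom" using switch_in(1)[OF v] f by simp
      then have r': "is_row (g+k) a'" "is_row (l-g) b'" by (auto simp: unswitch_dom_def)
      have "P' e a' b'" using eq[OF e v f] p by simp
      moreover have "mset a' + mset b' = mset a + mset b" using switch_props(1)[OF v f] .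
      then have "count (env_content e + mset a' + mset b') = c" using cc by (simp add: add.assoc)
      ultimately show "y \<in> pairs P' (g+k) (l-g)" using y f e r' by (simp add: pairs_def)
    qed
    show "(\<lambda>(e,p). (e, unswitch g lo hi p)) ` pairs P' (g+k) (l-g) \<subseteq> pairs P k l"
    proof
      fix y assume "y \<in> (\<lambda>(e,p). (e, unswitch g lo hi p)) ` pairs P' (g+k) (l-g)"
      then obtain e a' b' where x: "(e,a',b') \<in> pairs P' (g+k) (l-g)" and y:
          "y = (e, unswitch g lo hi (a',b'))" by auto
      obtain a b where f: "unswitch g lo hi (a',b') = (a,b)" by (cases "unswitch g lo hi (a',b')")
      have e: "e \<in> E" and r: "is_row (g+k) a'" "is_row (l-g) b'" and p: "P' e a' b'"
        and cc: "count (env_content e + mset a' + mset b') = c" using x by (auto simp: pairs_def)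
      have v: "(a',b') \<in> unswitch_dom" using PB[OF e r p] .
      have vf: "(a,b) \<in> switch_dom" using unswitch_in(1)[OF v] f by simp
      have ff: "switch g lo hi (a,b) = (a',b')" using unswitch_in(2)[OF v] f by simp
      have r': "is_row k a" "is_row l b" using vf by (auto simp: switch_dom_def)
      have "P e a b" using eq[OF e vf ff] p by simp
      moreover have "mset a' + mset b' = mset a + mset b" using switch_props(1)[OF vf ff] .
      then have "count (env_content e + mset a + mset b) = c" using cc by (simp add: add.assoc)
      ultimately show "y \<in> pairs P k l" using y f e r' by (simp add: pairs_def)
    qed
  qed
qed

(* The configurations counted by K: joined is the generic one (a accepted by the upper part,
   b by the lower part), joined_first has both parts accept the first row a; the defects describe
   the degenerate cases x = m + 1, x = n + 1 and x = m + 1 = n + 1. *)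
definition joined :: "'e \<Rightarrow> nat list \<Rightarrow> nat list \<Rightarrow> bool" where
  "joined e a b \<longleftrightarrow> L e (last a) \<and> H e (hd b)"

definition joined_first :: "'e \<Rightarrow> nat list \<Rightarrow> nat list \<Rightarrow> bool" where
  "joined_first e a b \<longleftrightarrow> L e (last a) \<and> H e (hd a)"

definition defect_top :: "nat \<Rightarrow> nat \<Rightarrow> 'e \<Rightarrow> nat list \<Rightarrow> nat list \<Rightarrow> bool" where
  "defect_top m n e a b \<longleftrightarrow>
     \<not> L e (last a) \<and> L e (last b) \<and> H e (hd b) \<and> (\<forall>j<m. a!j < b!(n-m-1+j))"

definition defect_bot :: "nat \<Rightarrow> 'e \<Rightarrow> nat list \<Rightarrow> nat list \<Rightarrow> bool" where
  "defect_bot n e a b \<longleftrightarrow>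
     L e (last a) \<and> H e (hd a) \<and> \<not> H e (hd b) \<and> (\<forall>j. 1 \<le> j \<and> j < n+1 \<longrightarrow> a!j < b!(j-1))"

definition defect_both :: "nat \<Rightarrow> 'e \<Rightarrow> nat list \<Rightarrow> nat list \<Rightarrow> bool" where
  "defect_both m e a b \<longleftrightarrow> \<not> L e (last a) \<and> L e (last b) \<and> H e (hd a) \<and> \<not> H e (hd b)
     \<and> (\<forall>j. 1 \<le> j \<and> j < m \<longrightarrow> a!j < b!(j-1))"

(* Case x <= m, n: the joined configurations violating the overlap x correspond, by a switch,
   to configurations joined at the first row, of lengths (m + n + 1 - x, x - 1). *)
lemma card_joined_unlinked:
  assumes x: "1 \<le> x" "x \<le> m" "x \<le> n"
  shows "card (pairs joined m n) = card (pairs (\<lambda>e a b. joined e a b \<and> linked x a b) m n)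
      + card (pairs joined_first (m+n+1-x) (x-1))"
proof -
  have split_link: "card (pairs joined m n) = card (pairs (\<lambda>e a b. joined e a b \<and> linked x a b) m n)
      + card (pairs (\<lambda>e a b. joined e a b \<and> \<not> linked x a b) m n)"
    by (rule card_split)
  define g where "g = n - x + 1"
  have swq: "row_switch g 0 x m n" unfolding g_def by unfold_locales (use x in auto)
  interpret q: row_switch g 0 x m n by (rule swq)
  have "card (pairs (\<lambda>e a b. joined e a b \<and> \<not> linked x a b) m n) = card (pairs joined_first (g+m) (n-g))"
  proof (rule card_switch[OF swq])
    fix e a b assume r: "is_row m a" "is_row n b" and p: "joined e a b \<and> \<not> linked x a b"
    then obtain j where j: "j < x" "\<not> a!j < b!(n-x+j)" using is_row_len[OF r(2)] by (auto simp: linked_def)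
    then have "switch_stop g 0 x a b j" using x by (simp add: switch_stop_def g_def)
    then show "(a,b) \<in> q.switch_dom" using r by (auto simp: q.switch_dom_def switch_guard_def)
  next
    fix e a b assume r: "is_row (g+m) a" "is_row (n-g) b"
    have "length b = x - 1" using is_row_len[OF r(2)] x by (simp add: g_def)
    then have "unswitch_stop g 0 x a b (x-1)" using x by (simp add: unswitch_stop_def)
    then show "(a,b) \<in> q.unswitch_dom" using r by (auto simp: q.unswitch_dom_def unswitch_guard_def)
  next
    fix e a b a' b' assume v: "(a,b) \<in> q.switch_dom" and f: "switch g 0 x (a,b) = (a',b')"
    have p: "last a' = last a" "hd a' = hd b" using q.switch_props[OF v f] by auto
    from v obtain j where "switch_stop g 0 x a b j" and "is_row n b" by (auto simp: q.switch_dom_def)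
    then have "\<not> linked x a b" using x by (auto simp: linked_def switch_stop_def g_def is_row_len)
    then show "(joined e a b \<and> \<not> linked x a b) = joined_first e a' b'" using p
        by (simp add: joined_def joined_first_def)
  qed
  moreover have "g + m = m+n+1-x" "n - g = x - 1" using x by (auto simp: g_def)
  ultimately show ?thesis using split_link by simp
qed

lemma L_less: "\<not> L e y \<Longrightarrow> L e y' \<Longrightarrow> y < y'"
  using Lmono by (meson not_le)

lemma H_less: "H e y \<Longrightarrow> \<not> H e y' \<Longrightarrow> y < y'"
  using Hmono by (meson not_le)

lemma card_joined_first_top:
  assumes x: "1 \<le> m" "m + 1 \<le> n"
  shows "card (pairs joined_first n m) = card (pairs joined m n) + card (pairs (defect_top m n) m n)"
proof -
  have split_last_b: "card (pairs joined_first n m)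
      = card (pairs (\<lambda>e a b. joined_first e a b \<and> L e (last b)) n m)
          + card (pairs (\<lambda>e a b. joined_first e a b \<and> \<not> L e (last b)) n m)"
    by (rule card_split)
  have last_b_accepted: "card (pairs (\<lambda>e a b. joined_first e a b \<and> L e (last b)) n m)
      = card (pairs (\<lambda>e a b. joined e a b \<and> L e (last b)) m n)"
    by (subst card_pairs_swap) (auto simp: joined_first_def joined_def intro!: arg_cong[where f=card] pairs_cong)
  define Y where "Y = (\<lambda>e a b. L e (last b) \<and> H e (hd b) \<and> \<not> L e (last a))"
  have last_b_rejected: "card (pairs (\<lambda>e a b. joined_first e a b \<and> \<not> L e (last b)) n m)
      = card (pairs Y m n)"
    by (subst card_pairs_swap) (auto simp: joined_first_def Y_def intro!: arg_cong[where f=card] pairs_cong)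
  define g where "g = n - m"
  have split_cross: "card (pairs Y m n) = card
      (pairs (\<lambda>e a b. Y e a b \<and> (\<exists>i. switch_stop g 0 m a b i)) m n)
          + card (pairs (\<lambda>e a b. Y e a b \<and> \<not> (\<exists>i. switch_stop g 0 m a b i)) m n)"
    by (rule card_split)
  have no_cross: "pairs (\<lambda>e a b. Y e a b \<and> \<not> (\<exists>i. switch_stop g 0 m a b i)) m n
      = pairs (defect_top m n) m n"
  proof (rule pairs_cong)
    fix e a b
    have "(\<not> (\<exists>i. switch_stop g 0 m a b i)) = (\<forall>j<m. a!j < b!(n-m-1+j))"
      using x by (auto simp: switch_stop_def g_def not_le)
    then show "(Y e a b \<and> \<not> (\<exists>i. switch_stop g 0 m a b i)) = defect_top m n e a b"
      by (auto simp: Y_def defect_top_def)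
  qed
  have swq: "row_switch g 0 m m n" unfolding g_def by unfold_locales (use x in auto)
  interpret q: row_switch g 0 m m n by (rule swq)
  define P' where "P' = (\<lambda>e a b. \<not> L e (last a) \<and> H e (hd a) \<and> L e (last b))"
  have cross_switched: "card (pairs (\<lambda>e a b. Y e a b \<and> (\<exists>i. switch_stop g 0 m a b i)) m n)
      = card (pairs P' (g+m) (n-g))"
  proof (rule card_switch[OF swq])
    fix e a b assume r: "is_row m a" "is_row n b" and p: "Y e a b \<and> (\<exists>i. switch_stop g 0 m a b i)"
    then show "(a,b) \<in> q.switch_dom" by (auto simp: q.switch_dom_def switch_guard_def)
  next
    fix e a b assume r: "is_row (g+m) a" "is_row (n-g) b" and p: "P' e a b"
    have la: "length a = n" and lb: "length b = m" using is_row_len[OF r(1)] is_row_len[OF r(2)] x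
      by (auto simp: g_def)
    have "last a < last b" using L_less p by (auto simp: P'_def)
    moreover have "a!(n-2) \<le> a!(n-1)" using is_row_sorted[OF r(1)] la x by (intro sorted_nth_mono) auto
    moreover have "last a = a!(n-1)" "last b = b!(m-1)"
        using is_row_last_nth[OF r(1)] is_row_last_nth[OF r(2)] x
      by (auto simp: g_def)
    ultimately have "a!(n-2) \<le> b!(m-1)" by (metis order.strict_trans1 less_imp_le)
    moreover have idx: "g+(m-1)-1 = n-2" using x by (simp add: g_def)
    ultimately have "a!(g+(m-1)-1) \<le> b!(m-1)" by (simp only: idx)
    then have "unswitch_stop g 0 m a b (m-1)" using x by (simp add: unswitch_stop_def)
    then show "(a,b) \<in> q.unswitch_dom" using r by (auto simp: q.unswitch_dom_def unswitch_guard_def)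
  next
    fix e a b a' b' assume v: "(a,b) \<in> q.switch_dom" and f: "switch g 0 m (a,b) = (a',b')"
    have p: "last a' = last a" "hd a' = hd b" "last b' = last b" using q.switch_props[OF v f] x
      by (auto simp: g_def)
    from v have "\<exists>i. switch_stop g 0 m a b i" by (auto simp: q.switch_dom_def)
    then show "(Y e a b \<and> (\<exists>i. switch_stop g 0 m a b i)) = P' e a' b'" using p by (auto simp: Y_def P'_def)
  qed
  have lengths: "g + m = n" "n - g = m" using x by (auto simp: g_def)
  have switched_swap: "card (pairs P' n m) = card (pairs (\<lambda>e a b. joined e a b \<and> \<not> L e (last b)) m n)"
    by (subst card_pairs_swap) (auto simp: P'_def joined_def intro!: arg_cong[where f=card] pairs_cong)
  have joined_split: "card (pairs joined m n) = card (pairs (\<lambda>e a b. joined e a b \<and> L e (last b)) m n)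
      + card (pairs (\<lambda>e a b. joined e a b \<and> \<not> L e (last b)) m n)"
    by (rule card_split)
  show ?thesis using split_last_b last_b_accepted last_b_rejected split_cross no_cross cross_switched
      switched_swap joined_split lengths by simp
qed

lemma no_switch_stop_diagonal: "(\<not> (\<exists>i. switch_stop 0 1 h a b i)) = (\<forall>j. 1 \<le> j \<and> j < h \<longrightarrow> a!j < b!(j-1))"
proof (intro iffI allI impI notI)
  fix j assume "\<not> (\<exists>i. switch_stop 0 1 h a b i)" "1 \<le> j \<and> j < h"
  then show "a!j < b!(j-1)" by (auto simp: switch_stop_def not_le)
next
  assume A: "\<forall>j. 1 \<le> j \<and> j < h \<longrightarrow> a!j < b!(j-1)" and "\<exists>i. switch_stop 0 1 h a b i"
  then obtain i where "1 \<le> i" "i < h" "b!(i-1) \<le> a!i" by (auto simp: switch_stop_def)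
  then show False using A by (meson not_le)
qed

lemma card_switch_head:
  assumes hi: "2 \<le> hi" "hi \<le> m" "hi \<le> n + 1"
  shows "card (pairs (\<lambda>e a b. joined_first e a b \<and> \<not> H e (hd b) \<and> (\<exists>i. switch_stop 0 1 hi a b i)) m n)
       = card (pairs (\<lambda>e a b. joined e a b \<and> \<not> H e (hd a) \<and> (\<exists>i. unswitch_stop 0 1 hi a b i)) m n)"
proof -
  have swq: "row_switch 0 1 hi m n" by unfold_locales (use hi in auto)
  interpret q: row_switch 0 1 hi m n by (rule swq)
  have "card (pairs (\<lambda>e a b. joined_first e a b \<and> \<not> H e (hd b) \<and> (\<exists>i. switch_stop 0 1 hi a b i)) m n)
      = card (pairs (\<lambda>e a b. joined e a b \<and> \<not> H e (hd a) \<and> (\<exists>i. unswitch_stop 0 1 hi a b i)) (0+m) (n-0))"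
  proof (rule card_switch[OF swq])
    fix e a b
    assume r: "is_row m a" "is_row n b"
      and p: "joined_first e a b \<and> \<not> H e (hd b) \<and> (\<exists>i. switch_stop 0 1 hi a b i)"
    have "hd a < hd b" using H_less p by (auto simp: joined_first_def)
    then have "a!0 < b!0" using is_row_hd_nth[OF r(1)] is_row_hd_nth[OF r(2)] hi by simp
    moreover have "1 < n \<Longrightarrow> b!0 \<le> b!1" using is_row_sorted[OF r(2)] is_row_len[OF r(2)]
      by (intro sorted_nth_mono) auto
    ultimately have "switch_guard 0 1 a b" using is_row_len[OF r(2)] by (auto simp: switch_guard_def)
    then show "(a,b) \<in> q.switch_dom" unfolding q.switch_dom_def using r p by auto
  next
    fix e a b
    assume r: "is_row (0+m) a" "is_row (n-0) b"
      and p: "joined e a b \<and> \<not> H e (hd a) \<and> (\<exists>i. unswitch_stop 0 1 hi a b i)"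
    have "hd b < hd a" using H_less p by (auto simp: joined_def)
    then have "b!0 < a!0" using is_row_hd_nth[OF r(1)] is_row_hd_nth[OF r(2)] hi by simp
    moreover have "a!0 \<le> a!1" using is_row_sorted[OF r(1)] is_row_len[OF r(1)] hi
      by (intro sorted_nth_mono) auto
    ultimately have "unswitch_guard 0 1 a b" by (auto simp: unswitch_guard_def)
    then show "(a,b) \<in> q.unswitch_dom" unfolding q.unswitch_dom_def using r p by auto
  next
    fix e a b a' b' assume v: "(a,b) \<in> q.switch_dom" and f: "switch 0 1 hi (a,b) = (a',b')"
    have p: "last a' = last a" "hd a' = hd b" "hd b' = hd a" using q.switch_props[OF v f] by auto
    have "(a',b') \<in> q.unswitch_dom" using q.switch_in(1)[OF v] f by simp
    then have "\<exists>i. unswitch_stop 0 1 hi a' b' i" unfolding q.unswitch_dom_def by auto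
    moreover from v have "\<exists>i. switch_stop 0 1 hi a b i" unfolding q.switch_dom_def by auto
    ultimately show "(joined_first e a b \<and> \<not> H e (hd b) \<and> (\<exists>i. switch_stop 0 1 hi a b i))
      = (joined e a' b' \<and> \<not> H e (hd a') \<and> (\<exists>i. unswitch_stop 0 1 hi a' b' i))"
      using p by (auto simp: joined_first_def joined_def)
  qed
  then show ?thesis by simp
qed

lemma card_joined_first_bot:
  assumes x: "1 \<le> n" "n + 1 \<le> m"
  shows "card (pairs joined_first m n) = card (pairs joined m n) + card (pairs (defect_bot n) m n)"
proof -
  have split_hd_b: "card (pairs joined_first m n)
      = card (pairs (\<lambda>e a b. joined_first e a b \<and> H e (hd b)) m n)
      + card (pairs (\<lambda>e a b. joined_first e a b \<and> \<not> H e (hd b)) m n)"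
    by (rule card_split)
  have hd_b_accepted: "pairs (\<lambda>e a b. joined_first e a b \<and> H e (hd b)) m n
      = pairs (\<lambda>e a b. joined e a b \<and> H e (hd a)) m n"
    by (rule pairs_cong) (auto simp: joined_first_def joined_def)
  define X where "X = (\<lambda>e a b. joined_first e a b \<and> \<not> H e (hd b))"
  have split_cross: "card (pairs X m n) = card
      (pairs (\<lambda>e a b. X e a b \<and> (\<exists>i. switch_stop 0 1 (n+1) a b i)) m n)
      + card (pairs (\<lambda>e a b. X e a b \<and> \<not> (\<exists>i. switch_stop 0 1 (n+1) a b i)) m n)"
    by (rule card_split)
  have no_cross: "pairs (\<lambda>e a b. X e a b \<and> \<not> (\<exists>i. switch_stop 0 1 (n+1) a b i)) m n
      = pairs (defect_bot n) m n"
    unfolding X_def no_switch_stop_diagonal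
    by (rule pairs_cong) (auto simp: joined_first_def defect_bot_def)
  have cross_switched: "card (pairs (\<lambda>e a b. X e a b \<and> (\<exists>i. switch_stop 0 1 (n+1) a b i)) m n)
      = card (pairs (\<lambda>e a b. joined e a b \<and> \<not> H e (hd a) \<and> (\<exists>i. unswitch_stop 0 1 (n+1) a b i)) m n)"
    using card_switch_head[of "n+1" m n] x by (simp add: X_def conj_assoc)
  have switched_simp: "pairs (\<lambda>e a b. joined e a b \<and> \<not> H e (hd a) \<and> (\<exists>i. unswitch_stop 0 1 (n+1) a b i)) m n
      = pairs (\<lambda>e a b. joined e a b \<and> \<not> H e (hd a)) m n"
  proof (rule pairs_cong)
    fix e a b assume "is_row n b"
    then have "unswitch_stop 0 1 (n+1) a b n" using x by (auto simp: unswitch_stop_def is_row_def)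
    then show "(joined e a b \<and> \<not> H e (hd a) \<and> (\<exists>i. unswitch_stop 0 1 (n+1) a b i))
      = (joined e a b \<and> \<not> H e (hd a))" by blast
  qed
  have joined_split: "card (pairs joined m n) = card (pairs (\<lambda>e a b. joined e a b \<and> H e (hd a)) m n)
      + card (pairs (\<lambda>e a b. joined e a b \<and> \<not> H e (hd a)) m n)"
    by (rule card_split)
  show ?thesis using split_hd_b hd_b_accepted split_cross no_cross cross_switched switched_simp
      joined_split by (simp add: X_def)
qed

lemma card_joined_square:
  assumes x: "1 \<le> m"
  shows "card (pairs joined m m) = card (pairs (defect_both m) m m) + card (pairs joined_first m m)"
proof -
  have joined_split: "card (pairs joined m m) = card (pairs (\<lambda>e a b. joined e a b \<and> H e (hd a)) m m)
      + card (pairs (\<lambda>e a b. joined e a b \<and> \<not> H e (hd a)) m m)"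
    by (rule card_split)
  have hd_accepted: "pairs (\<lambda>e a b. joined e a b \<and> H e (hd a)) m m
      = pairs (\<lambda>e a b. joined_first e a b \<and> H e (hd b)) m m"
    by (rule pairs_cong) (auto simp: joined_first_def joined_def)
  have first_split: "card (pairs joined_first m m)
      = card (pairs (\<lambda>e a b. joined_first e a b \<and> H e (hd b)) m m)
          + card (pairs (\<lambda>e a b. joined_first e a b \<and> \<not> H e (hd b)) m m)"
    by (rule card_split)
  define X where "X = (\<lambda>e a b. joined_first e a b \<and> \<not> H e (hd b))"
  define Y where "Y = (\<lambda>e a b. joined e a b \<and> \<not> H e (hd a))"
  have first_split_cross: "card (pairs X m m)
      = card (pairs (\<lambda>e a b. X e a b \<and> (\<exists>i. switch_stop 0 1 m a b i)) m m)
          + card (pairs (\<lambda>e a b. X e a b \<and> \<not> (\<exists>i. switch_stop 0 1 m a b i)) m m)"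
    by (rule card_split)
  have joined_split_cross: "card (pairs Y m m)
      = card (pairs (\<lambda>e a b. Y e a b \<and> (\<exists>i. unswitch_stop 0 1 m a b i)) m m)
          + card (pairs (\<lambda>e a b. Y e a b \<and> \<not> (\<exists>i. unswitch_stop 0 1 m a b i)) m m)"
    by (rule card_split)
  have cross_switched: "card (pairs (\<lambda>e a b. X e a b \<and> (\<exists>i. switch_stop 0 1 m a b i)) m m)
      = card (pairs (\<lambda>e a b. Y e a b \<and> (\<exists>i. unswitch_stop 0 1 m a b i)) m m)"
  proof (cases "m = 1")
    case True
    then show ?thesis by (simp add: switch_stop_def unswitch_stop_def)
  next
    case False
    then show ?thesis using card_switch_head[of m m m] x by (simp add: X_def Y_def conj_assoc)
  qed
  define Z where "Z = (\<lambda>e a b. L e (last b) \<and> \<not> H e (hd b) \<and> H e (hd a)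
      \<and> (\<forall>j. 1 \<le> j \<and> j < m \<longrightarrow> a!j < b!(j-1)))"
  have no_cross_swap: "card (pairs (\<lambda>e a b. Y e a b \<and> \<not> (\<exists>i. unswitch_stop 0 1 m a b i)) m m)
      = card (pairs Z m m)"
  proof (subst card_pairs_swap, rule arg_cong[where f=card], rule pairs_cong)
    fix e a b assume r: "is_row m a" "is_row m b"
    have la: "length a = m" using is_row_len[OF r(1)] .
    have "(\<not> (\<exists>i. unswitch_stop 0 1 m b a i)) = (\<not> (\<exists>i. switch_stop 0 1 m a b i))"
      using la by (auto simp: unswitch_stop_def switch_stop_def)
    then have "(\<not> (\<exists>i. unswitch_stop 0 1 m b a i)) = (\<forall>j. 1 \<le> j \<and> j < m \<longrightarrow> a!j < b!(j-1))"
      by (simp only: no_switch_stop_diagonal)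
    then show "(Y e b a \<and> \<not> (\<exists>i. unswitch_stop 0 1 m b a i)) = Z e a b"
      by (auto simp: Y_def joined_def Z_def)
  qed
  have split_last_a: "card (pairs Z m m) = card (pairs (\<lambda>e a b. Z e a b \<and> L e (last a)) m m)
      + card (pairs (\<lambda>e a b. Z e a b \<and> \<not> L e (last a)) m m)"
    by (rule card_split)
  have defect: "pairs (\<lambda>e a b. Z e a b \<and> \<not> L e (last a)) m m = pairs (defect_both m) m m"
    by (rule pairs_cong) (auto simp: Z_def defect_both_def)
  have no_cross_first: "pairs (\<lambda>e a b. Z e a b \<and> L e (last a)) m m
      = pairs (\<lambda>e a b. X e a b \<and> \<not> (\<exists>i. switch_stop 0 1 m a b i)) m m"
  proof (rule pairs_cong)
    fix e a b assume r: "is_row m a" "is_row m b"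
    have la: "length a = m" and lb: "length b = m" using r by (auto simp: is_row_len)
    have key: "L e (last b)" if h: "L e (last a)" "H e (hd a)" "\<not> H e (hd b)"
      "\<forall>j. 1 \<le> j \<and> j < m \<longrightarrow> a!j < b!(j-1)"
    proof (cases "m = 1")
      case True
      then have "last a = hd a" "last b = hd b"
        using is_row_last_nth[OF r(1)] is_row_hd_nth[OF r(1)] is_row_last_nth[OF r(2)]
            is_row_hd_nth[OF r(2)] by auto
      moreover have "hd a < hd b" using H_less h by auto
      ultimately show ?thesis using Lmono h(1) by simp
    next
      case False
      then have "1 \<le> m-1 \<and> m-1 < m" using x by auto
      then have "a!(m-1) < b!(m-1-1)" using h(4) by blast
      moreover have "b!(m-1-1) \<le> b!(m-1)" using is_row_sorted[OF r(2)] lb x by (intro sorted_nth_mono) auto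
      moreover have "last a = a!(m-1)" "last b = b!(m-1)"
          using is_row_last_nth[OF r(1)] is_row_last_nth[OF r(2)] x by auto
      ultimately have "last a \<le> last b" by simp
      then show ?thesis using Lmono h(1) by blast
    qed
    show "(Z e a b \<and> L e (last a)) = (X e a b \<and> \<not> (\<exists>i. switch_stop 0 1 m a b i))"
      using key unfolding no_switch_stop_diagonal by (auto simp: Z_def X_def joined_first_def)
  qed
  show ?thesis using joined_split hd_accepted first_split first_split_cross joined_split_cross
      cross_switched no_cross_swap split_last_a defect no_cross_first by (simp add: X_def Y_def)
qed

end

section \<open>Frames built from sigma and tau\<close>

(* A frame: row lists U for sigma and V for tau, whose junction overlaps 1 (the last of sigma-bar
   and the first of tau-bar) are left to the middle rows. *)
definition frames :: "nat list \<Rightarrow> nat list \<Rightarrow> nat list \<Rightarrow> nat list \<Rightarrow> (nat list list \<times> nat list list) set" where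
  "frames \<sigma> \<tau> \<sigma>b \<tau>b = {(U,V). tab_rows \<sigma> (butlast \<sigma>b) U \<and> tab_rows \<tau> (tl \<tau>b) V}"

definition frame_content :: "nat list list \<times> nat list list \<Rightarrow> nat multiset" where
  "frame_content e = mset (concat (fst e)) + mset (concat (snd e))"

definition top_fits :: "nat list list \<times> nat list list \<Rightarrow> nat \<Rightarrow> bool" where
  "top_fits e y \<longleftrightarrow> fst e = [] \<or> hd (last (fst e)) < y"

definition bot_fits :: "nat list list \<times> nat list list \<Rightarrow> nat \<Rightarrow> bool" where
  "bot_fits e y \<longleftrightarrow> snd e = [] \<or> y < last (hd (snd e))"

(* Frames form an instance of the counting setting; finiteness holds because all entries
   belong to the finite support of the fixed content c. *)
lemma pair_count_inst: "pair_count (frames \<sigma> \<tau> \<sigma>b \<tau>b) frame_content c top_fits bot_fits"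
proof
  show "\<And>e y y'. top_fits e y \<Longrightarrow> y \<le> y' \<Longrightarrow> top_fits e y'" by (auto simp: top_fits_def)
  show "\<And>e y y'. bot_fits e y' \<Longrightarrow> y \<le> y' \<Longrightarrow> bot_fits e y" by (auto simp: bot_fits_def)
  fix k l
  define X where "X = {(e,a,b). e \<in> frames \<sigma> \<tau> \<sigma>b \<tau>b \<and> is_row k a \<and> is_row l b
      \<and> count (frame_content e + mset a + mset b) = c}"
  show "finite X"
  proof (cases "X = {}")
    case True then show ?thesis by simp
  next
    case False
    then obtain e0 a0 b0 where x0: "(e0,a0,b0) \<in> X" by auto
    define M0 where "M0 = frame_content e0 + mset a0 + mset b0"
    have cM: "count M0 = c" using x0 by (simp add: X_def M0_def)
    define A where "A = set_mset M0"
    define N where "N = k + l + sum_list \<sigma> + sum_list \<tau>"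
    define F where "F = {w. set w \<subseteq> A \<and> length w \<le> N}"
    define G where "G = {Us. set Us \<subseteq> F \<and> length Us \<le> length \<sigma> + length \<tau>}"
    have fF: "finite F" unfolding F_def A_def by (rule finite_lists_length_le) simp
    have fG: "finite G" unfolding G_def by (rule finite_lists_length_le[OF fF])
    have "X \<subseteq> (G \<times> G) \<times> F \<times> F"
    proof
      fix x assume "x \<in> X"
      then obtain U V a b where x: "x = ((U,V),a,b)" and hU: "tab_rows \<sigma> (butlast \<sigma>b) U" and hV:
          "tab_rows \<tau> (tl \<tau>b) V"
        and ra: "is_row k a" and rb: "is_row l b" and cc:
            "count (frame_content (U,V) + mset a + mset b) = c"
        by (auto simp: X_def frames_def)
      have eqM: "frame_content (U,V) + mset a + mset b = M0" using cc cM by (intro multiset_eqI) simp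
      have sU: "set (concat U) \<subseteq> A" and sV: "set (concat V) \<subseteq> A" and sa: "set a \<subseteq> A" and sb: "set b \<subseteq> A"
        using eqM by (auto simp: A_def frame_content_def)
      have "set U \<subseteq> F"
      proof
        fix w assume w: "w \<in> set U"
        then have "set w \<subseteq> A" using sU by auto
        moreover have "length w \<le> N" using tab_rows_row_len[OF hU w] by (simp add: N_def)
        ultimately show "w \<in> F" by (simp add: F_def)
      qed
      moreover have "set V \<subseteq> F"
      proof
        fix w assume w: "w \<in> set V"
        then have "set w \<subseteq> A" using sV by auto
        moreover have "length w \<le> N" using tab_rows_row_len[OF hV w] by (simp add: N_def)
        ultimately show "w \<in> F" by (simp add: F_def)
      qed
      moreover have "length U \<le> length \<sigma> + length \<tau>" "length V \<le> length \<sigma> + length \<tau>"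
        using tab_rows_len[OF hU] tab_rows_len[OF hV] by auto
      moreover have "a \<in> F" "b \<in> F" using sa sb ra rb by (auto simp: F_def N_def is_row_def)
      ultimately show "x \<in> (G \<times> G) \<times> F \<times> F" using x by (simp add: G_def)
    qed
    then show ?thesis by (rule finite_subset) (use fF fG in simp)
  qed
qed

locale standing =
  fixes \<sigma> \<tau> \<sigma>b \<tau>b :: "nat list" and c :: "nat \<Rightarrow> nat"
  assumes sh: "standing_hyp \<sigma> \<tau> \<sigma>b \<tau>b"

sublocale standing \<subseteq> pair_count "frames \<sigma> \<tau> \<sigma>b \<tau>b" frame_content c top_fits bot_fits
    by (rule pair_count_inst)

context standing begin

lemma sigmab_length: "length \<sigma>b = length \<sigma>" and taub_length: "length \<tau>b = length \<tau>"
  and sigma_pos: "\<forall>k\<in>set \<sigma>. 1 \<le> k" and tau_pos: "\<forall>k\<in>set \<tau>. 1 \<le> k"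
  and sigmab_last: "\<sigma> \<noteq> [] \<Longrightarrow> last \<sigma>b = 1" and taub_hd: "\<tau> \<noteq> [] \<Longrightarrow> hd \<tau>b = 1"
  and sigmab_le: "\<And>i. i + 1 < length \<sigma> \<Longrightarrow> \<sigma>b ! i \<le> \<sigma> ! i \<and> \<sigma>b ! i \<le> \<sigma> ! (i+1)"
  and taub_le: "\<And>i. 0 < i \<Longrightarrow> i < length \<tau> \<Longrightarrow> \<tau>b ! i \<le> \<tau> ! i \<and> \<tau>b ! i \<le> \<tau> ! (i-1)"
  using sh by (auto simp: standing_hyp_def)

lemma sigma_overlap_bound: "2 \<le> length \<sigma> \<Longrightarrow> last (butlast \<sigma>b) \<le> last \<sigma>"
proof -
  assume l: "2 \<le> length \<sigma>"
  have ne: "butlast \<sigma>b \<noteq> []" using l sigmab_length by (cases \<sigma>b rule: rev_cases) auto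
  have "last (butlast \<sigma>b) = butlast \<sigma>b ! (length (butlast \<sigma>b) - 1)" using ne by (rule last_conv_nth)
  also have "\<dots> = \<sigma>b ! (length \<sigma> - 2)" using l sigmab_length by (simp add: nth_butlast numeral_2_eq_2)
  finally have "last (butlast \<sigma>b) = \<sigma>b ! (length \<sigma> - 2)" .
  also have "\<dots> \<le> \<sigma> ! (length \<sigma> - 2 + 1)" using sigmab_le[of "length \<sigma> - 2"] l by simp
  also have "\<sigma> ! (length \<sigma> - 2 + 1) = last \<sigma>"
  proof -
    have e: "length \<sigma> - 2 + 1 = length \<sigma> - 1" using l by simp
    have "\<sigma> \<noteq> []" using l by auto
    then show ?thesis using e by (metis last_conv_nth)
  qed
  finally show ?thesis .
qed

lemma tau_overlap_bound: "2 \<le> length \<tau> \<Longrightarrow> hd (tl \<tau>b) \<le> hd \<tau>"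
proof -
  assume l: "2 \<le> length \<tau>"
  have "hd (tl \<tau>b) = \<tau>b ! 1" using l taub_length by (cases \<tau>b; cases "tl \<tau>b") auto
  also have "\<dots> \<le> \<tau> ! 0" using taub_le[of 1] l by simp
  also have "\<tau> ! 0 = hd \<tau>" using l by (cases \<tau>) auto
  finally show ?thesis .
qed

lemma card_by_frames:
  fixes f :: "nat list list \<Rightarrow> nat list \<Rightarrow> nat list \<Rightarrow> nat list list \<Rightarrow> nat list list"
  assumes char: "\<And>ws. tab_rows \<alpha>s \<beta>s ws \<longleftrightarrow> (\<exists>U a b V. ws = f U a b V \<and> (U,V) \<in> frames \<sigma> \<tau> \<sigma>b \<tau>b
      \<and> is_row m a \<and> is_row n b \<and> P (U,V) a b)"
    and inj: "\<And>U a b V U' a' b' V'. (U,V) \<in> frames \<sigma> \<tau> \<sigma>b \<tau>b \<Longrightarrow> is_row m a \<Longrightarrow> is_row n b \<Longrightarrow> P (U,V) a b \<Longrightarrow>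
       (U',V') \<in> frames \<sigma> \<tau> \<sigma>b \<tau>b \<Longrightarrow> is_row m a' \<Longrightarrow> is_row n b' \<Longrightarrow> P (U',V') a' b' \<Longrightarrow>
       f U a b V = f U' a' b' V' \<Longrightarrow> U = U' \<and> a = a' \<and> b = b' \<and> V = V'"
    and cont: "\<And>U a b V. (U,V) \<in> frames \<sigma> \<tau> \<sigma>b \<tau>b \<Longrightarrow> is_row m a \<Longrightarrow> is_row n b \<Longrightarrow> P (U,V) a b \<Longrightarrow>
       mset (concat (f U a b V)) = frame_content (U,V) + mset a + mset b"
  shows "card {ws. tab_rows \<alpha>s \<beta>s ws \<and> count (mset (concat ws)) = c} = card (pairs P m n)"
proof -
  define g where "g = (\<lambda>((U,V),a,b). f U a b V)"
  have "{ws. tab_rows \<alpha>s \<beta>s ws \<and> count (mset (concat ws)) = c} = g ` pairs P m n"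
  proof (rule set_eqI)
    fix ws
    show "ws \<in> {ws. tab_rows \<alpha>s \<beta>s ws \<and> count (mset (concat ws)) = c} \<longleftrightarrow> ws \<in> g ` pairs P m n"
    proof
      assume "ws \<in> {ws. tab_rows \<alpha>s \<beta>s ws \<and> count (mset (concat ws)) = c}"
      then have r: "tab_rows \<alpha>s \<beta>s ws" and cc: "count (mset (concat ws)) = c" by auto
      obtain U a b V where h: "ws = f U a b V" "(U,V) \<in> frames \<sigma> \<tau> \<sigma>b \<tau>b" "is_row m a" "is_row n b"
          "P (U,V) a b"
        using r char by blast
      have "((U,V),a,b) \<in> pairs P m n" using h cc cont[OF h(2-5)] by (simp add: pairs_def)
      then show "ws \<in> g ` pairs P m n" using h(1)
          by (auto simp: g_def intro!: image_eqI[where x="((U,V),a,b)"])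
    next
      assume "ws \<in> g ` pairs P m n"
      then obtain U V a b where x: "((U,V),a,b) \<in> pairs P m n" and ws: "ws = f U a b V"
          by (auto simp: g_def)
      have h: "(U,V) \<in> frames \<sigma> \<tau> \<sigma>b \<tau>b" "is_row m a" "is_row n b" "P (U,V) a b"
        and cc: "count (frame_content (U,V) + mset a + mset b) = c" using x by (auto simp: pairs_def)
      have "tab_rows \<alpha>s \<beta>s ws" using char ws h by blast
      moreover have "count (mset (concat ws)) = c" using ws cont[OF h] cc by simp
      ultimately show "ws \<in> {ws. tab_rows \<alpha>s \<beta>s ws \<and> count (mset (concat ws)) = c}" by simp
    qed
  qed
  moreover have "inj_on g (pairs P m n)"
  proof (rule inj_onI)
    fix x y assume x: "x \<in> pairs P m n" and y: "y \<in> pairs P m n" and e: "g x = g y"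
    obtain U V a b where xx: "x = ((U,V),a,b)" by (cases x) auto
    obtain U' V' a' b' where yy: "y = ((U',V'),a',b')" by (cases y) auto
    have h: "(U,V) \<in> frames \<sigma> \<tau> \<sigma>b \<tau>b" "is_row m a" "is_row n b" "P (U,V) a b" using x xx
        by (auto simp: pairs_def)
    have h': "(U',V') \<in> frames \<sigma> \<tau> \<sigma>b \<tau>b" "is_row m a'" "is_row n b'" "P (U',V') a' b'" using y yy
        by (auto simp: pairs_def)
    have "f U a b V = f U' a' b' V'" using e xx yy by (simp add: g_def)
    then show "x = y" using inj[OF h h'] xx yy by simp
  qed
  ultimately show ?thesis by (simp add: card_image)
qed

lemma frames_len: "(U,V) \<in> frames \<sigma> \<tau> \<sigma>b \<tau>b \<Longrightarrow> length U = length \<sigma> \<and> length V = length \<tau>"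
  by (auto simp: frames_def tab_rows_len)

lemma frames_decomp_plain:
  assumes m1: "1 \<le> m" and n1: "1 \<le> n"
  shows "tab_rows (\<sigma>@[m,n]@\<tau>) (\<sigma>b@[x]@\<tau>b) ws \<longleftrightarrow> (\<exists>U a b V. ws = U @ [a,b] @ V \<and> (U,V) \<in> frames \<sigma> \<tau> \<sigma>b \<tau>b \<and>
     is_row m a \<and> is_row n b \<and> (joined (U,V) a b \<and> linked x a b))"
proof -
  have e1: "\<sigma>@[m,n]@\<tau> = \<sigma> @ m # (n # \<tau>)" "\<sigma>b@[x]@\<tau>b = \<sigma>b @ ([x]@\<tau>b)" by simp_all
  note T = tab_rows_top_plain[OF sigmab_length sigmab_last sigma_pos m1, of "n # \<tau>" "[x]@\<tau>b" ws]
  have B: "tab_rows ([m,n] @ \<tau>) ([x] @ \<tau>b) W \<longleftrightarrow> (\<exists>W' V. W = W' @ V \<and> tab_rows [m,n] [x] W' \<and>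
     tab_rows \<tau> (tl \<tau>b) V \<and> (V \<noteq> [] \<longrightarrow> hd (last W') < last (hd V)))" for W
    by (rule tab_rows_bot_plain[OF taub_length taub_hd tau_pos]) (use n1 in auto)
  show ?thesis
  proof
    assume "tab_rows (\<sigma>@[m,n]@\<tau>) (\<sigma>b@[x]@\<tau>b) ws"
    then obtain U W where h1: "ws = U @ W" "tab_rows \<sigma> (butlast \<sigma>b) U" "tab_rows (m # n # \<tau>) ([x]@\<tau>b) W"
      "U \<noteq> [] \<longrightarrow> hd (last U) < last (hd W)" using T e1 by auto
    obtain W' V where h2: "W = W' @ V" "tab_rows [m,n] [x] W'" "tab_rows \<tau> (tl \<tau>b) V"
      "V \<noteq> [] \<longrightarrow> hd (last W') < last (hd V)" using B[of W] h1(3) by auto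
    obtain a b where h3: "W' = [a,b]" "is_row m a" "is_row n b" "linked x a b" using h2(2) tab_rows_two
        by blast
    have "joined (U,V) a b" using h1(4) h2(4) h1(1) h2(1) h3(1)
        by (auto simp: joined_def top_fits_def bot_fits_def)
    then show "\<exists>U a b V. ws = U @ [a,b] @ V \<and> (U,V) \<in> frames \<sigma> \<tau> \<sigma>b \<tau>b \<and>
     is_row m a \<and> is_row n b \<and> (joined (U,V) a b \<and> linked x a b)"
      using h1 h2 h3 by (auto simp: frames_def)
  next
    assume "\<exists>U a b V. ws = U @ [a,b] @ V \<and> (U,V) \<in> frames \<sigma> \<tau> \<sigma>b \<tau>b \<and>
     is_row m a \<and> is_row n b \<and> (joined (U,V) a b \<and> linked x a b)"
    then obtain U a b V where h: "ws = U @ [a,b] @ V" "(U,V) \<in> frames \<sigma> \<tau> \<sigma>b \<tau>b" "is_row m a" "is_row n b"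
      "joined (U,V) a b" "linked x a b" by blast
    have rW': "tab_rows [m,n] [x] [a,b]" using h tab_rows_two by blast
    have rV: "tab_rows \<tau> (tl \<tau>b) V" and rU: "tab_rows \<sigma> (butlast \<sigma>b) U" using h(2)
        by (auto simp: frames_def)
    have "\<exists>W' V'. [a,b] @ V = W' @ V' \<and> tab_rows [m,n] [x] W' \<and>
     tab_rows \<tau> (tl \<tau>b) V' \<and> (V' \<noteq> [] \<longrightarrow> hd (last W') < last (hd V'))"
      by (rule exI[of _ "[a,b]"], rule exI[of _ V])
          (use rW' rV h(5) in \<open>auto simp: joined_def bot_fits_def\<close>)
    then have "tab_rows ([m,n] @ \<tau>) ([x] @ \<tau>b) ([a,b] @ V)" using B by blast
    then have "tab_rows (m # n # \<tau>) ([x]@\<tau>b) ([a,b] @ V)" by simp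
    then have "\<exists>U' W. ws = U' @ W \<and> tab_rows \<sigma> (butlast \<sigma>b) U' \<and> tab_rows (m # n # \<tau>) ([x]@\<tau>b) W \<and>
      (U' \<noteq> [] \<longrightarrow> hd (last U') < last (hd W))"
      by (intro exI[of _ U] exI[of _ "[a,b]@V"])
          (use h(1) rU h(5) in \<open>auto simp: joined_def top_fits_def\<close>)
    then have "tab_rows (\<sigma> @ m # (n # \<tau>)) (\<sigma>b @ ([x]@\<tau>b)) ws" using T by blast
    then show "tab_rows (\<sigma>@[m,n]@\<tau>) (\<sigma>b@[x]@\<tau>b) ws" by simp
  qed
qed

lemma count_plain:
  assumes m1: "1 \<le> m" and n1: "1 \<le> n"
  shows "card {ws. tab_rows (\<sigma>@[m,n]@\<tau>) (\<sigma>b@[x]@\<tau>b) ws \<and> count (mset (concat ws)) = c}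
       = card (pairs (\<lambda>e a b. joined e a b \<and> linked x a b) m n)"
proof (rule card_by_frames[where f = "\<lambda>U a b V. U @ [a,b] @ V", OF frames_decomp_plain[OF m1 n1]])
  fix U a b V U' a' b' V'
  assume "(U,V) \<in> frames \<sigma> \<tau> \<sigma>b \<tau>b" "(U',V') \<in> frames \<sigma> \<tau> \<sigma>b \<tau>b" and e: "U @ [a,b] @ V = U' @ [a',b'] @ V'"
  then have "length U = length U'" by (auto dest!: frames_len)
  then show "U = U' \<and> a = a' \<and> b = b' \<and> V = V'" using e by auto
next
  fix U a b V
  show "mset (concat (U @ [a,b] @ V)) = frame_content (U,V) + mset a + mset b"
      by (simp add: frame_content_def ac_simps)
qed

lemma frame_last_row: "(U,V) \<in> frames \<sigma> \<tau> \<sigma>b \<tau>b \<Longrightarrow> U \<noteq> [] \<Longrightarrow> is_row (last \<sigma>) (last U) \<and> last U \<noteq> []"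
proof -
  assume h: "(U,V) \<in> frames \<sigma> \<tau> \<sigma>b \<tau>b" "U \<noteq> []"
  then have r: "tab_rows \<sigma> (butlast \<sigma>b) U" by (simp add: frames_def)
  then have "\<sigma> \<noteq> []" using h(2) tab_rows_len by fastforce
  then have "1 \<le> last \<sigma>" using sigma_pos by simp
  moreover have "is_row (last \<sigma>) (last U)" using tab_rows_last[OF r h(2)] .
  ultimately show ?thesis using is_row_ne by blast
qed

lemma frame_first_row: "(U,V) \<in> frames \<sigma> \<tau> \<sigma>b \<tau>b \<Longrightarrow> V \<noteq> [] \<Longrightarrow> is_row (hd \<tau>) (hd V) \<and> hd V \<noteq> []"
proof -
  assume h: "(U,V) \<in> frames \<sigma> \<tau> \<sigma>b \<tau>b" "V \<noteq> []"
  then have r: "tab_rows \<tau> (tl \<tau>b) V" by (simp add: frames_def)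
  then have "\<tau> \<noteq> []" using h(2) tab_rows_len by fastforce
  then have "1 \<le> hd \<tau>" using tau_pos by simp
  moreover have "is_row (hd \<tau>) (hd V)" using tab_rows_hd[OF r h(2)] .
  ultimately show ?thesis using is_row_ne by blast
qed

lemma frames_decomp_top:
  assumes sne: "\<sigma> \<noteq> []" and m1: "1 \<le> m" and mn: "m + 1 \<le> n"
  shows "tab_rows (butlast \<sigma> @ [m + last \<sigma>, n] @ \<tau>) (butlast \<sigma>b @ [m+1] @ \<tau>b) ws \<longleftrightarrow>
    (\<exists>U a b V. ws = butlast U @ [a @ last U, b] @ V \<and> (U,V) \<in> frames \<sigma> \<tau> \<sigma>b \<tau>b \<and>
     is_row m a \<and> is_row n b \<and> defect_top m n (U,V) a b)"
proof -
  have n1: "1 \<le> n" using mn by simp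
  have ls: "1 \<le> last \<sigma>" using sigma_pos sne by simp
  have e1: "butlast \<sigma> @ [m + last \<sigma>, n] @ \<tau> = butlast \<sigma> @ (m + last \<sigma>) # (n # \<tau>)"
    "butlast \<sigma>b @ [m+1] @ \<tau>b = butlast \<sigma>b @ ([m+1] @ \<tau>b)" by simp_all
  note T = tab_rows_top_merged[OF sigmab_length sne sigma_pos sigma_overlap_bound m1, of "n # \<tau>"
      "[m+1] @ \<tau>b" ws]
  have B: "tab_rows ([m + last \<sigma>, n] @ \<tau>) ([m+1] @ \<tau>b) W
      \<longleftrightarrow> (\<exists>W' V. W = W' @ V \<and> tab_rows [m + last \<sigma>, n] [m+1] W' \<and>
     tab_rows \<tau> (tl \<tau>b) V \<and> (V \<noteq> [] \<longrightarrow> hd (last W') < last (hd V)))" for W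
    by (rule tab_rows_bot_plain[OF taub_length taub_hd tau_pos]) (use n1 in auto)
  show ?thesis
  proof
    assume "tab_rows (butlast \<sigma> @ [m + last \<sigma>, n] @ \<tau>) (butlast \<sigma>b @ [m+1] @ \<tau>b) ws"
    then have "tab_rows (butlast \<sigma> @ (m + last \<sigma>) # (n # \<tau>)) (butlast \<sigma>b @ ([m+1] @ \<tau>b)) ws" by simp
    then obtain U a W where h1: "U \<noteq> []" "ws = butlast U @ (a @ last U) # W" "tab_rows \<sigma> (butlast \<sigma>b) U"
      "is_row m a" "last a \<le> hd (last U)" "tab_rows ((m + last \<sigma>) # n # \<tau>) ([m+1] @ \<tau>b) ((a @ last U) # W)"
      using T by blast
    have "tab_rows ([m + last \<sigma>, n] @ \<tau>) ([m+1] @ \<tau>b) ((a @ last U) # W)" using h1(6) by simp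
    then obtain W' V where h2: "(a @ last U) # W = W' @ V" "tab_rows [m + last \<sigma>, n] [m+1] W'"
      "tab_rows \<tau> (tl \<tau>b) V" "V \<noteq> [] \<longrightarrow> hd (last W') < last (hd V)" using B by blast
    obtain w b where h3: "W' = [w,b]" "is_row (m + last \<sigma>) w" "is_row n b" "linked (m+1) w b"
        using h2(2) tab_rows_two by blast
    have wW: "w = a @ last U" "W = b # V" using h2(1) h3(1) by auto
    have frame_UV: "(U,V) \<in> frames \<sigma> \<tau> \<sigma>b \<tau>b" using h1(3) h2(3) by (simp add: frames_def)
    have une: "last U \<noteq> []" using frame_last_row[OF frame_UV h1(1)] by simp
    have la: "length a = m" "length b = n" using h1(4) h3(3) by (auto simp: is_row_def)
    have lk: "(\<forall>j<m. a!j < b!(n-m-1+j)) \<and> hd (last U) < last b"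
      using h3(4) wW(1) linked_merged_top[OF la(1) une la(2) mn] by simp
    have "defect_top m n (U,V) a b" using h1(1,5) lk h2(4) h3(1)
      by (auto simp: defect_top_def top_fits_def bot_fits_def)
    then show "\<exists>U a b V. ws = butlast U @ [a @ last U, b] @ V \<and> (U,V) \<in> frames \<sigma> \<tau> \<sigma>b \<tau>b \<and>
     is_row m a \<and> is_row n b \<and> defect_top m n (U,V) a b"
      using h1(2,4) h3(3) wW frame_UV by auto
  next
    assume "\<exists>U a b V. ws = butlast U @ [a @ last U, b] @ V \<and> (U,V) \<in> frames \<sigma> \<tau> \<sigma>b \<tau>b \<and>
     is_row m a \<and> is_row n b \<and> defect_top m n (U,V) a b"
    then obtain U a b V where h: "ws = butlast U @ [a @ last U, b] @ V" "(U,V) \<in> frames \<sigma> \<tau> \<sigma>b \<tau>b"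
        "is_row m a" "is_row n b"
      "defect_top m n (U,V) a b" by blast
    have une0: "U \<noteq> []" using h(5) by (auto simp: defect_top_def top_fits_def)
    have une: "last U \<noteq> []" and rl: "is_row (last \<sigma>) (last U)" using frame_last_row[OF h(2) une0] by auto
    have la: "length a = m" "length b = n" using h(3,4) by (auto simp: is_row_def)
    have conds: "last a \<le> hd (last U)" "hd (last U) < last b" "\<forall>j<m. a!j < b!(n-m-1+j)"
        "V \<noteq> [] \<longrightarrow> hd b < last (hd V)"
      using h(5) une0 by (auto simp: defect_top_def top_fits_def bot_fits_def)
    have rw: "is_row (m + last \<sigma>) (a @ last U)" using is_row_append h(3) rl conds(1) by blast
    have lk: "linked (m+1) (a @ last U) b" using linked_merged_top[OF la(1) une la(2) mn] conds by simp
    have rW': "tab_rows [m + last \<sigma>, n] [m+1] [a @ last U, b]" using tab_rows_two rw h(4) lk by blast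
    have rV: "tab_rows \<tau> (tl \<tau>b) V" and rU: "tab_rows \<sigma> (butlast \<sigma>b) U" using h(2)
        by (auto simp: frames_def)
    have "\<exists>W' V'. [a @ last U, b] @ V = W' @ V' \<and> tab_rows [m + last \<sigma>, n] [m+1] W' \<and>
     tab_rows \<tau> (tl \<tau>b) V' \<and> (V' \<noteq> [] \<longrightarrow> hd (last W') < last (hd V'))"
      by (rule exI[of _ "[a @ last U, b]"], rule exI[of _ V]) (use rW' rV conds(4) in auto)
    then have "tab_rows ([m + last \<sigma>, n] @ \<tau>) ([m+1] @ \<tau>b) ([a @ last U, b] @ V)" using B by blast
    then have r2: "tab_rows ((m + last \<sigma>) # n # \<tau>) ([m+1] @ \<tau>b) ((a @ last U) # b # V)" by simp
    have "\<exists>U' a' W. U' \<noteq> [] \<and> ws = butlast U' @ (a' @ last U') # W \<and> tab_rows \<sigma> (butlast \<sigma>b) U'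
        \<and> is_row m a' \<and> last a' \<le> hd (last U') \<and> tab_rows ((m + last \<sigma>) # n # \<tau>) ([m+1] @ \<tau>b) ((a' @ last U') # W)"
      by (rule exI[of _ U], rule exI[of _ a], rule exI[of _ "b # V"]) (use une0 h(1,3) rU conds(1) r2 in auto)
    then have "tab_rows (butlast \<sigma> @ (m + last \<sigma>) # (n # \<tau>)) (butlast \<sigma>b @ ([m+1] @ \<tau>b)) ws" using T
        by blast
    then show "tab_rows (butlast \<sigma> @ [m + last \<sigma>, n] @ \<tau>) (butlast \<sigma>b @ [m+1] @ \<tau>b) ws" by simp
  qed
qed

lemma count_top_merged:
  assumes sne: "\<sigma> \<noteq> []" and m1: "1 \<le> m" and mn: "m + 1 \<le> n"
  shows "card {ws. tab_rows (butlast \<sigma> @ [m + last \<sigma>, n] @ \<tau>) (butlast \<sigma>b @ [m+1] @ \<tau>b) ws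
      \<and> count (mset (concat ws)) = c}
       = card (pairs (defect_top m n) m n)"
proof (rule card_by_frames[where f = "\<lambda>U a b V. butlast U @ [a @ last U, b] @ V", OF
    frames_decomp_top[OF sne m1 mn]])
  fix U a b V U' a' b' V'
  assume h: "(U,V) \<in> frames \<sigma> \<tau> \<sigma>b \<tau>b" "is_row m a" "defect_top m n (U,V) a b"
      "(U',V') \<in> frames \<sigma> \<tau> \<sigma>b \<tau>b" "is_row m a'"
    "defect_top m n (U',V') a' b'" and e: "butlast U @ [a @ last U, b] @ V
        = butlast U' @ [a' @ last U', b'] @ V'"
  have ne: "U \<noteq> []" "U' \<noteq> []" using h(3,6) by (auto simp: defect_top_def top_fits_def)
  have "length U = length U'" using h(1,4) by (auto dest!: frames_len)
  then have "length (butlast U) = length (butlast U')" by simp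
  then have e2: "butlast U = butlast U'" "a @ last U = a' @ last U'" "b = b'" "V = V'" using e by auto
  have "length a = length a'" using h(2,5) by (simp add: is_row_def)
  then have "a = a'" "last U = last U'" using e2(2) by auto
  then have "U = U'" using e2(1) ne by (metis append_butlast_last_id)
  then show "U = U' \<and> a = a' \<and> b = b' \<and> V = V'" using e2 \<open>a = a'\<close> by simp
next
  fix U a b V
  assume "defect_top m n (U,V) a b"
  then have ne: "U \<noteq> []" by (auto simp: defect_top_def top_fits_def)
  have "mset (concat U) = mset (concat (butlast U)) + mset (last U)"
    using append_butlast_last_id[OF ne] by (metis concat_append concat.simps mset_append append_Nil2)
  then show "mset (concat (butlast U @ [a @ last U, b] @ V)) = frame_content (U,V) + mset a + mset b"
    by (simp add: frame_content_def ac_simps)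
qed

lemma frames_decomp_bot:
  assumes tne: "\<tau> \<noteq> []" and n1: "1 \<le> n" and nm: "n + 1 \<le> m"
  shows "tab_rows (\<sigma> @ [m, n + hd \<tau>] @ tl \<tau>) (\<sigma>b @ [n+1] @ tl \<tau>b) ws \<longleftrightarrow>
    (\<exists>U a b V. ws = U @ [a, hd V @ b] @ tl V \<and> (U,V) \<in> frames \<sigma> \<tau> \<sigma>b \<tau>b \<and>
     is_row m a \<and> is_row n b \<and> defect_bot n (U,V) a b)"
proof -
  have m1: "1 \<le> m" using nm by simp
  note T = tab_rows_top_plain[OF sigmab_length sigmab_last sigma_pos m1, of "(n + hd \<tau>) # tl \<tau>"
      "[n+1] @ tl \<tau>b" ws]
  have B: "tab_rows (([m] @ [n + hd \<tau>]) @ tl \<tau>) ([n+1] @ tl \<tau>b) W \<longleftrightarrow>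
    (\<exists>W' b V. V \<noteq> [] \<and> W = W' @ (hd V @ b) # tl V \<and> tab_rows \<tau> (tl \<tau>b) V \<and> is_row n b \<and>
       last (hd V) \<le> hd b \<and> tab_rows ([m] @ [n + hd \<tau>]) [n+1] (W' @ [hd V @ b]))" for W
    by (rule tab_rows_bot_merged[OF taub_length tne tau_pos tau_overlap_bound]) (use n1 in auto)
  show ?thesis
  proof
    assume "tab_rows (\<sigma> @ [m, n + hd \<tau>] @ tl \<tau>) (\<sigma>b @ [n+1] @ tl \<tau>b) ws"
    then have "tab_rows (\<sigma> @ m # ((n + hd \<tau>) # tl \<tau>)) (\<sigma>b @ ([n+1] @ tl \<tau>b)) ws" by simp
    then obtain U W where h1: "ws = U @ W" "tab_rows \<sigma> (butlast \<sigma>b) U"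
        "tab_rows (m # (n + hd \<tau>) # tl \<tau>) ([n+1] @ tl \<tau>b) W"
      "U \<noteq> [] \<longrightarrow> hd (last U) < last (hd W)" using T by blast
    have "tab_rows (([m] @ [n + hd \<tau>]) @ tl \<tau>) ([n+1] @ tl \<tau>b) W" using h1(3) by simp
    then obtain W' b V where h2: "V \<noteq> []" "W = W' @ (hd V @ b) # tl V" "tab_rows \<tau> (tl \<tau>b) V" "is_row n b"
       "last (hd V) \<le> hd b" "tab_rows ([m] @ [n + hd \<tau>]) [n+1] (W' @ [hd V @ b])" using B by blast
    have "tab_rows [m, n + hd \<tau>] [n+1] (W' @ [hd V @ b])" using h2(6) by simp
    then obtain a z where h3: "W' @ [hd V @ b] = [a, z]" "is_row m a" "is_row (n + hd \<tau>) z"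
        "linked (n+1) a z"
      using tab_rows_two by blast
    have W': "W' = [a]" "z = hd V @ b" using h3(1) by (cases W'; auto)+
    have frame_UV: "(U,V) \<in> frames \<sigma> \<tau> \<sigma>b \<tau>b" using h1(2) h2(3) by (simp add: frames_def)
    have vne: "hd V \<noteq> []" using frame_first_row[OF frame_UV h2(1)] by simp
    have la: "length a = m" "length b = n" using h3(2) h2(4) by (auto simp: is_row_def)
    have lk: "a!0 < last (hd V) \<and> (\<forall>j. 1 \<le> j \<and> j < n+1 \<longrightarrow> a!j < b!(j-1))"
      using h3(4) W'(2) linked_merged_bot[OF la(2) vne] la(1) nm by simp
    have ane: "a \<noteq> []" using la m1 by auto
    have "hd a = a!0" using ane by (simp add: hd_conv_nth)
    then have "defect_bot n (U,V) a b" using h1(1,4) lk h2(1,2,5) W'(1)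
      by (auto simp: defect_bot_def top_fits_def bot_fits_def)
    then show "\<exists>U a b V. ws = U @ [a, hd V @ b] @ tl V \<and> (U,V) \<in> frames \<sigma> \<tau> \<sigma>b \<tau>b \<and>
     is_row m a \<and> is_row n b \<and> defect_bot n (U,V) a b"
      using h1(1) h2(2,4) h3(2) W' frame_UV by auto
  next
    assume "\<exists>U a b V. ws = U @ [a, hd V @ b] @ tl V \<and> (U,V) \<in> frames \<sigma> \<tau> \<sigma>b \<tau>b \<and>
     is_row m a \<and> is_row n b \<and> defect_bot n (U,V) a b"
    then obtain U a b V where h: "ws = U @ [a, hd V @ b] @ tl V" "(U,V) \<in> frames \<sigma> \<tau> \<sigma>b \<tau>b" "is_row m a"
        "is_row n b"
      "defect_bot n (U,V) a b" by blast
    have vne0: "V \<noteq> []" using h(5) by (auto simp: defect_bot_def bot_fits_def)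
    have vne: "hd V \<noteq> []" and rl: "is_row (hd \<tau>) (hd V)" using frame_first_row[OF h(2) vne0] by auto
    have la: "length a = m" "length b = n" using h(3,4) by (auto simp: is_row_def)
    have ane: "a \<noteq> []" using la nm by auto
    have conds: "U \<noteq> [] \<longrightarrow> hd (last U) < last a" "a!0 < last (hd V)" "last (hd V) \<le> hd b"
      "\<forall>j. 1 \<le> j \<and> j < n+1 \<longrightarrow> a!j < b!(j-1)"
      using h(5) vne0 ane by (auto simp: defect_bot_def top_fits_def bot_fits_def hd_conv_nth)
    have "is_row (hd \<tau> + n) (hd V @ b)" using is_row_append rl h(4) conds(3) by blast
    then have rz: "is_row (n + hd \<tau>) (hd V @ b)" by (simp add: add.commute)
    have lk: "linked (n+1) a (hd V @ b)" using linked_merged_bot[OF la(2) vne] la(1) nm conds(2,4) by simp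
    have rW': "tab_rows [m, n + hd \<tau>] [n+1] ([a] @ [hd V @ b])" using tab_rows_two h(3) rz lk by auto
    have rV: "tab_rows \<tau> (tl \<tau>b) V" and rU: "tab_rows \<sigma> (butlast \<sigma>b) U" using h(2)
        by (auto simp: frames_def)
    have "\<exists>W' b' V'. V' \<noteq> [] \<and> [a] @ (hd V @ b) # tl V = W' @ (hd V' @ b') # tl V'
        \<and> tab_rows \<tau> (tl \<tau>b) V' \<and> is_row n b' \<and>
       last (hd V') \<le> hd b' \<and> tab_rows ([m] @ [n + hd \<tau>]) [n+1] (W' @ [hd V' @ b'])"
      by (rule exI[of _ "[a]"], rule exI[of _ b], rule exI[of _ V]) (use vne0 rV h(4) conds(3) rW' in auto)
    then have "tab_rows (([m] @ [n + hd \<tau>]) @ tl \<tau>) ([n+1] @ tl \<tau>b) ([a] @ (hd V @ b) # tl V)" using B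
        by blast
    then have r2: "tab_rows (m # (n + hd \<tau>) # tl \<tau>) ([n+1] @ tl \<tau>b) (a # (hd V @ b) # tl V)" by simp
    have "\<exists>U' W. ws = U' @ W \<and> tab_rows \<sigma> (butlast \<sigma>b) U'
        \<and> tab_rows (m # (n + hd \<tau>) # tl \<tau>) ([n+1] @ tl \<tau>b) W \<and>
      (U' \<noteq> [] \<longrightarrow> hd (last U') < last (hd W))"
      by (rule exI[of _ U], rule exI[of _ "a # (hd V @ b) # tl V"]) (use h(1) rU r2 conds(1) in auto)
    then have "tab_rows (\<sigma> @ m # ((n + hd \<tau>) # tl \<tau>)) (\<sigma>b @ ([n+1] @ tl \<tau>b)) ws" using T by blast
    then show "tab_rows (\<sigma> @ [m, n + hd \<tau>] @ tl \<tau>) (\<sigma>b @ [n+1] @ tl \<tau>b) ws" by simp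
  qed
qed

lemma count_bot_merged:
  assumes tne: "\<tau> \<noteq> []" and n1: "1 \<le> n" and nm: "n + 1 \<le> m"
  shows "card {ws. tab_rows (\<sigma> @ [m, n + hd \<tau>] @ tl \<tau>) (\<sigma>b @ [n+1] @ tl \<tau>b) ws
      \<and> count (mset (concat ws)) = c}
       = card (pairs (defect_bot n) m n)"
proof (rule card_by_frames[where f = "\<lambda>U a b V. U @ [a, hd V @ b] @ tl V", OF
    frames_decomp_bot[OF tne n1 nm]])
  fix U a b V U' a' b' V'
  assume h: "(U,V) \<in> frames \<sigma> \<tau> \<sigma>b \<tau>b" "is_row n b" "defect_bot n (U,V) a b"
      "(U',V') \<in> frames \<sigma> \<tau> \<sigma>b \<tau>b" "is_row n b'"
    "defect_bot n (U',V') a' b'" and e: "U @ [a, hd V @ b] @ tl V = U' @ [a', hd V' @ b'] @ tl V'"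
  have ne: "V \<noteq> []" "V' \<noteq> []" using h(3,6) by (auto simp: defect_bot_def bot_fits_def)
  have "length U = length U'" using h(1,4) by (auto dest!: frames_len)
  then have e2: "U = U'" "a = a'" "hd V @ b = hd V' @ b'" "tl V = tl V'" using e by auto
  have "length (hd V) = hd \<tau>" "length (hd V') = hd \<tau>"
    using frame_first_row[OF h(1) ne(1)] frame_first_row[OF h(4) ne(2)] by (auto simp: is_row_def)
  then have "hd V = hd V'" "b = b'" using e2(3) by auto
  then have "V = V'" using e2(4) ne by (metis list.collapse)
  then show "U = U' \<and> a = a' \<and> b = b' \<and> V = V'" using e2 \<open>b = b'\<close> by simp
next
  fix U a b V
  assume "defect_bot n (U,V) a b"
  then have ne: "V \<noteq> []" by (auto simp: defect_bot_def bot_fits_def)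
  have "mset (concat V) = mset (hd V) + mset (concat (tl V))"
    using ne by (metis concat.simps(2) list.collapse mset_append)
  then show "mset (concat (U @ [a, hd V @ b] @ tl V)) = frame_content (U,V) + mset a + mset b"
    by (simp add: frame_content_def ac_simps)
qed

lemma frames_decomp_both:
  assumes sne: "\<sigma> \<noteq> []" and tne: "\<tau> \<noteq> []" and m1: "1 \<le> m"
  shows "tab_rows (butlast \<sigma> @ [m + last \<sigma>, m + hd \<tau>] @ tl \<tau>) (butlast \<sigma>b @ [m+1] @ tl \<tau>b) ws \<longleftrightarrow>
    (\<exists>U a b V. ws = butlast U @ [a @ last U, hd V @ b] @ tl V \<and> (U,V) \<in> frames \<sigma> \<tau> \<sigma>b \<tau>b \<and>
     is_row m a \<and> is_row m b \<and> defect_both m (U,V) a b)"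
proof -
  note T = tab_rows_top_merged[OF sigmab_length sne sigma_pos sigma_overlap_bound m1, of
      "(m + hd \<tau>) # tl \<tau>" "[m+1] @ tl \<tau>b" ws]
  have B: "tab_rows (([m + last \<sigma>] @ [m + hd \<tau>]) @ tl \<tau>) ([m+1] @ tl \<tau>b) W \<longleftrightarrow>
    (\<exists>W' b V. V \<noteq> [] \<and> W = W' @ (hd V @ b) # tl V \<and> tab_rows \<tau> (tl \<tau>b) V \<and> is_row m b \<and>
       last (hd V) \<le> hd b \<and> tab_rows ([m + last \<sigma>] @ [m + hd \<tau>]) [m+1] (W' @ [hd V @ b]))" for W
    by (rule tab_rows_bot_merged[OF taub_length tne tau_pos tau_overlap_bound]) (use m1 in auto)
  show ?thesis
  proof
    assume "tab_rows (butlast \<sigma> @ [m + last \<sigma>, m + hd \<tau>] @ tl \<tau>) (butlast \<sigma>b @ [m+1] @ tl \<tau>b) ws"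
    then have "tab_rows (butlast \<sigma> @ (m + last \<sigma>) # ((m + hd \<tau>) # tl \<tau>))
        (butlast \<sigma>b @ ([m+1] @ tl \<tau>b)) ws" by simp
    then obtain U a W where h1: "U \<noteq> []" "ws = butlast U @ (a @ last U) # W" "tab_rows \<sigma> (butlast \<sigma>b) U"
      "is_row m a" "last a \<le> hd (last U)" "tab_rows ((m + last \<sigma>) # (m + hd \<tau>) # tl \<tau>) ([m+1] @ tl \<tau>b)
          ((a @ last U) # W)"
      using T by blast
    have "tab_rows (([m + last \<sigma>] @ [m + hd \<tau>]) @ tl \<tau>) ([m+1] @ tl \<tau>b) ((a @ last U) # W)" using h1(6)
        by simp
    then obtain W' b V where h2: "V \<noteq> []" "(a @ last U) # W = W' @ (hd V @ b) # tl V"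
        "tab_rows \<tau> (tl \<tau>b) V" "is_row m b"
       "last (hd V) \<le> hd b" "tab_rows ([m + last \<sigma>] @ [m + hd \<tau>]) [m+1] (W' @ [hd V @ b])" using B by blast
    have "tab_rows [m + last \<sigma>, m + hd \<tau>] [m+1] (W' @ [hd V @ b])" using h2(6) by simp
    then obtain w z where h3: "W' @ [hd V @ b] = [w, z]" "is_row (m + last \<sigma>) w" "is_row (m + hd \<tau>) z"
        "linked (m+1) w z"
      using tab_rows_two by blast
    have W': "W' = [w]" "z = hd V @ b" using h3(1) by (cases W'; auto)+
    have wW: "w = a @ last U" "W = (hd V @ b) # tl V" using h2(2) W'(1) by auto
    have frame_UV: "(U,V) \<in> frames \<sigma> \<tau> \<sigma>b \<tau>b" using h1(3) h2(3) by (simp add: frames_def)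
    have vne: "hd V \<noteq> []" using frame_first_row[OF frame_UV h2(1)] by simp
    have une: "last U \<noteq> []" using frame_last_row[OF frame_UV h1(1)] by simp
    have la: "length a = m" "length b = m" using h1(4) h2(4) by (auto simp: is_row_def)
    have lk: "a!0 < last (hd V) \<and> (\<forall>j. 1 \<le> j \<and> j < m \<longrightarrow> a!j < b!(j-1)) \<and> hd (last U) < last b"
      using h3(4) W'(2) wW(1) linked_merged_both[OF la m1 une vne] by simp
    have ane: "a \<noteq> []" using la m1 by auto
    have "hd a = a!0" using ane by (simp add: hd_conv_nth)
    then have "defect_both m (U,V) a b" using h1(1,5) lk h2(1,5)
      by (auto simp: defect_both_def top_fits_def bot_fits_def)
    then show "\<exists>U a b V. ws = butlast U @ [a @ last U, hd V @ b] @ tl V \<and> (U,V) \<in> frames \<sigma> \<tau> \<sigma>b \<tau>b \<and>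
     is_row m a \<and> is_row m b \<and> defect_both m (U,V) a b"
      using h1(2,4) h2(4) wW frame_UV by auto
  next
    assume "\<exists>U a b V. ws = butlast U @ [a @ last U, hd V @ b] @ tl V \<and> (U,V) \<in> frames \<sigma> \<tau> \<sigma>b \<tau>b \<and>
     is_row m a \<and> is_row m b \<and> defect_both m (U,V) a b"
    then obtain U a b V where h: "ws = butlast U @ [a @ last U, hd V @ b] @ tl V"
        "(U,V) \<in> frames \<sigma> \<tau> \<sigma>b \<tau>b" "is_row m a" "is_row m b"
      "defect_both m (U,V) a b" by blast
    have une0: "U \<noteq> []" using h(5) by (auto simp: defect_both_def top_fits_def)
    have vne0: "V \<noteq> []" using h(5) by (auto simp: defect_both_def bot_fits_def)
    have une: "last U \<noteq> []" and rl: "is_row (last \<sigma>) (last U)" using frame_last_row[OF h(2) une0] by auto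
    have vne: "hd V \<noteq> []" and rh: "is_row (hd \<tau>) (hd V)" using frame_first_row[OF h(2) vne0] by auto
    have la: "length a = m" "length b = m" using h(3,4) by (auto simp: is_row_def)
    have ane: "a \<noteq> []" using la m1 by auto
    have conds: "last a \<le> hd (last U)" "hd (last U) < last b" "a!0 < last (hd V)" "last (hd V) \<le> hd b"
      "\<forall>j. 1 \<le> j \<and> j < m \<longrightarrow> a!j < b!(j-1)"
      using h(5) une0 vne0 ane by (auto simp: defect_both_def top_fits_def bot_fits_def hd_conv_nth)
    have rw: "is_row (m + last \<sigma>) (a @ last U)" using is_row_append h(3) rl conds(1) by blast
    have "is_row (hd \<tau> + m) (hd V @ b)" using is_row_append rh h(4) conds(4) by blast
    then have rz: "is_row (m + hd \<tau>) (hd V @ b)" by (simp add: add.commute)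
    have lk: "linked (m+1) (a @ last U) (hd V @ b)" using linked_merged_both[OF la m1 une vne] conds by simp
    have rW': "tab_rows [m + last \<sigma>, m + hd \<tau>] [m+1] ([a @ last U] @ [hd V @ b])"
        using tab_rows_two rw rz lk by auto
    have rV: "tab_rows \<tau> (tl \<tau>b) V" and rU: "tab_rows \<sigma> (butlast \<sigma>b) U" using h(2)
        by (auto simp: frames_def)
    have "\<exists>W' b' V'. V' \<noteq> [] \<and> [a @ last U] @ (hd V @ b) # tl V = W' @ (hd V' @ b') # tl V'
        \<and> tab_rows \<tau> (tl \<tau>b) V' \<and> is_row m b' \<and>
       last (hd V') \<le> hd b' \<and> tab_rows ([m + last \<sigma>] @ [m + hd \<tau>]) [m+1] (W' @ [hd V' @ b'])"
      by (rule exI[of _ "[a @ last U]"], rule exI[of _ b], rule exI[of _ V])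
          (use vne0 rV h(4) conds(4) rW' in auto)
    then have "tab_rows (([m + last \<sigma>] @ [m + hd \<tau>]) @ tl \<tau>) ([m+1] @ tl \<tau>b)
        ([a @ last U] @ (hd V @ b) # tl V)" using B by blast
    then have r2: "tab_rows ((m + last \<sigma>) # (m + hd \<tau>) # tl \<tau>) ([m+1] @ tl \<tau>b)
        ((a @ last U) # (hd V @ b) # tl V)" by simp
    have "\<exists>U' a' W. U' \<noteq> [] \<and> ws = butlast U' @ (a' @ last U') # W \<and> tab_rows \<sigma> (butlast \<sigma>b) U'
        \<and> is_row m a' \<and> last a' \<le> hd (last U') \<and> tab_rows ((m + last \<sigma>) # (m + hd \<tau>) # tl \<tau>) ([m+1] @ tl \<tau>b)
           ((a' @ last U') # W)"
      by (rule exI[of _ U], rule exI[of _ a], rule exI[of _ "(hd V @ b) # tl V"])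
          (use une0 h(1,3) rU conds(1) r2 in auto)
    then have "tab_rows (butlast \<sigma> @ (m + last \<sigma>) # ((m + hd \<tau>) # tl \<tau>))
        (butlast \<sigma>b @ ([m+1] @ tl \<tau>b)) ws" using T by blast
    then show "tab_rows (butlast \<sigma> @ [m + last \<sigma>, m + hd \<tau>] @ tl \<tau>) (butlast \<sigma>b @ [m+1] @ tl \<tau>b) ws" by simp
  qed
qed

lemma count_both_merged:
  assumes sne: "\<sigma> \<noteq> []" and tne: "\<tau> \<noteq> []" and m1: "1 \<le> m"
  shows "card {ws. tab_rows (butlast \<sigma> @ [m + last \<sigma>, m + hd \<tau>] @ tl \<tau>) (butlast \<sigma>b @ [m+1] @ tl \<tau>b) ws
      \<and> count (mset (concat ws)) = c}
       = card (pairs (defect_both m) m m)"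
proof (rule card_by_frames[where f = "\<lambda>U a b V. butlast U @ [a @ last U, hd V @ b] @ tl V", OF
    frames_decomp_both[OF sne tne m1]])
  fix U a b V U' a' b' V'
  assume h: "(U,V) \<in> frames \<sigma> \<tau> \<sigma>b \<tau>b" "is_row m a" "is_row m b" "defect_both m (U,V) a b"
      "(U',V') \<in> frames \<sigma> \<tau> \<sigma>b \<tau>b" "is_row m a'" "is_row m b'"
    "defect_both m (U',V') a' b'" and e: "butlast U @ [a @ last U, hd V @ b] @ tl V
        = butlast U' @ [a' @ last U', hd V' @ b'] @ tl V'"
  have ne: "U \<noteq> []" "U' \<noteq> []" "V \<noteq> []" "V' \<noteq> []" using h(4,8)
      by (auto simp: defect_both_def top_fits_def bot_fits_def)
  have "length U = length U'" using h(1,5) by (auto dest!: frames_len)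
  then have "length (butlast U) = length (butlast U')" by simp
  then have e2: "butlast U = butlast U'" "a @ last U = a' @ last U'" "hd V @ b = hd V' @ b'"
      "tl V = tl V'" using e by auto
  have "length a = length a'" using h(2,6) by (simp add: is_row_def)
  then have "a = a'" "last U = last U'" using e2(2) by auto
  then have "U = U'" using e2(1) ne by (metis append_butlast_last_id)
  have "length (hd V) = hd \<tau>" "length (hd V') = hd \<tau>"
    using frame_first_row[OF h(1) ne(3)] frame_first_row[OF h(5) ne(4)] by (auto simp: is_row_def)
  then have "hd V = hd V'" "b = b'" using e2(3) by auto
  then have "V = V'" using e2(4) ne by (metis list.collapse)
  then show "U = U' \<and> a = a' \<and> b = b' \<and> V = V'" using \<open>U = U'\<close> \<open>a = a'\<close> \<open>b = b'\<close> by simp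
next
  fix U a b V
  assume "defect_both m (U,V) a b"
  then have ne: "U \<noteq> []" "V \<noteq> []" by (auto simp: defect_both_def top_fits_def bot_fits_def)
  have "mset (concat U) = mset (concat (butlast U)) + mset (last U)"
    using append_butlast_last_id[OF ne(1)] by (metis concat_append concat.simps mset_append append_Nil2)
  moreover have "mset (concat V) = mset (hd V) + mset (concat (tl V))"
    using ne by (metis concat.simps(2) list.collapse mset_append)
  ultimately show "mset (concat (butlast U @ [a @ last U, hd V @ b] @ tl V)) = frame_content (U,V)
      + mset a + mset b"
    by (simp add: frame_content_def ac_simps)
qed

section \<open>The formula for K and the theorem\<close>

lemma overlaps_sigma: "overlaps_ok \<sigma> (butlast \<sigma>b)"
proof -
  have "butlast \<sigma>b ! r \<le> \<sigma> ! r \<and> butlast \<sigma>b ! r \<le> \<sigma> ! Suc r" if r: "Suc r < length \<sigma>" for r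
  proof -
    have "butlast \<sigma>b ! r = \<sigma>b ! r" using sigmab_length r by (simp add: nth_butlast)
    then show ?thesis using sigmab_le[of r] r by simp
  qed
  then show ?thesis by (simp add: overlaps_ok_def chain_ok_def)
qed

lemma overlaps_tau: "overlaps_ok \<tau> (tl \<tau>b)"
proof -
  have "tl \<tau>b ! r \<le> \<tau> ! r \<and> tl \<tau>b ! r \<le> \<tau> ! Suc r" if r: "Suc r < length \<tau>" for r
  proof -
    have "tl \<tau>b ! r = \<tau>b ! Suc r" using taub_length r by (simp add: nth_tl)
    then show ?thesis using taub_le[of "Suc r"] r by simp
  qed
  then show ?thesis by (simp add: overlaps_ok_def chain_ok_def)
qed

lemma overlaps_sigma_butlast: "\<sigma> \<noteq> [] \<Longrightarrow> overlaps_ok (butlast \<sigma>) (butlast (butlast \<sigma>b)) \<and>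
   (butlast \<sigma> \<noteq> [] \<longrightarrow> last (butlast \<sigma>b) \<le> last (butlast \<sigma>) \<and> last (butlast \<sigma>b) \<le> last \<sigma>)"
proof -
  assume ne: "\<sigma> \<noteq> []"
  have l: "length (butlast \<sigma>b) = length (butlast \<sigma>)" using sigmab_length by simp
  have "overlaps_ok (butlast \<sigma> @ [last \<sigma>]) (butlast \<sigma>b @ [])" using overlaps_sigma ne by simp
  moreover have "overlaps_ok (butlast \<sigma> @ [last \<sigma>]) (butlast \<sigma>b @ [])
      = (overlaps_ok (butlast \<sigma>) (butlast (butlast \<sigma>b)) \<and>
     (butlast \<sigma> \<noteq> [] \<longrightarrow> last (butlast \<sigma>b) \<le> last (butlast \<sigma>) \<and> last (butlast \<sigma>b) \<le> last \<sigma>))"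
    unfolding overlaps_ok_def by (subst chain_ok_split_prefix[OF l]) auto
  ultimately show ?thesis by blast
qed

lemma overlaps_tau_tl: "\<tau> \<noteq> [] \<Longrightarrow> overlaps_ok (tl \<tau>) (tl (tl \<tau>b)) \<and>
   (tl \<tau> \<noteq> [] \<longrightarrow> hd (tl \<tau>b) \<le> hd \<tau> \<and> hd (tl \<tau>b) \<le> hd (tl \<tau>))"
proof -
  assume ne: "\<tau> \<noteq> []"
  have l: "length (tl \<tau>b) = length (tl \<tau>)" using taub_length by simp
  have "overlaps_ok ([hd \<tau>] @ tl \<tau>) ([] @ tl \<tau>b)" using overlaps_tau ne by simp
  moreover have "overlaps_ok ([hd \<tau>] @ tl \<tau>) ([] @ tl \<tau>b) = (overlaps_ok (tl \<tau>) (tl (tl \<tau>b)) \<and>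
     (tl \<tau> \<noteq> [] \<longrightarrow> hd (tl \<tau>b) \<le> hd \<tau> \<and> hd (tl \<tau>b) \<le> hd (tl \<tau>)))"
    unfolding overlaps_ok_def by (subst chain_ok_split_suffix[OF l]) auto
  ultimately show ?thesis by blast
qed

lemma K_plain:
  assumes m1: "1 \<le> m" and n1: "1 \<le> n" and x: "x \<le> m" "x \<le> n"
  shows "K \<sigma> \<tau> \<sigma>b \<tau>b m n x c = int (card (pairs (\<lambda>e a b. joined e a b \<and> linked x a b) m n))"
proof -
  have ok: "overlaps_ok (\<sigma> @ [m,n] @ \<tau>) (\<sigma>b @ [x] @ \<tau>b)"
  proof (rule overlaps_ok_middle[OF sigmab_length overlaps_sigma _ taub_length overlaps_tau _ x])
    assume "\<sigma> \<noteq> []" then show "last \<sigma>b \<le> last \<sigma> \<and> last \<sigma>b \<le> m" using sigmab_last sigma_pos m1 by simp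
  next
    assume "\<tau> \<noteq> []" then show "hd \<tau>b \<le> n \<and> hd \<tau>b \<le> hd \<tau>" using taub_hd tau_pos n1 by simp
  qed
  have "K \<sigma> \<tau> \<sigma>b \<tau>b m n x c = ov (\<sigma> @ [m,n] @ \<tau>) (\<sigma>b @ [x] @ \<tau>b) c" using x by (simp add: K_def)
  also have "\<dots> = int (card {ws. tab_rows (\<sigma> @ [m,n] @ \<tau>) (\<sigma>b @ [x] @ \<tau>b) ws 
      \<and> count (mset (concat ws)) = c})"
    by (rule ov_eq_card_rows[OF ok])
  also have "\<dots> = int (card (pairs (\<lambda>e a b. joined e a b \<and> linked x a b) m n))"
      using count_plain[OF m1 n1] by simp
  finally show ?thesis .
qed

lemma K_top:
  assumes m1: "1 \<le> m" and mn: "m + 1 \<le> n"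
  shows "K \<sigma> \<tau> \<sigma>b \<tau>b m n (m+1) c = - int (card (pairs (defect_top m n) m n))"
proof (cases "\<sigma> = []")
  case True
  have "pairs (defect_top m n) m n = {}" using True unfolding pairs_def
      by (auto simp: frames_def defect_top_def top_fits_def tab_rows_Nil)
  then show ?thesis using True mn by (simp add: K_def)
next
  case False
  have n1: "1 \<le> n" using mn by simp
  have ok: "overlaps_ok (butlast \<sigma> @ [m + last \<sigma>, n] @ \<tau>) (butlast \<sigma>b @ [m+1] @ \<tau>b)"
  proof (rule overlaps_ok_middle)
    show "length (butlast \<sigma>b) = length (butlast \<sigma>)" using sigmab_length by simp
    show "overlaps_ok (butlast \<sigma>) (butlast (butlast \<sigma>b))" using overlaps_sigma_butlast[OF False] by simp
    assume "butlast \<sigma> \<noteq> []" then show "last (butlast \<sigma>b) \<le> last (butlast \<sigma>)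
        \<and> last (butlast \<sigma>b) \<le> m + last \<sigma>"
      using overlaps_sigma_butlast[OF False] by auto
  next
    assume "\<tau> \<noteq> []" then show "hd \<tau>b \<le> n \<and> hd \<tau>b \<le> hd \<tau>" using taub_hd tau_pos n1 by simp
  next
    show "m + 1 \<le> m + last \<sigma>" using sigma_pos False by simp
  qed (use taub_length overlaps_tau mn in auto)
  have "K \<sigma> \<tau> \<sigma>b \<tau>b m n (m+1) c = - ov (butlast \<sigma> @ [m + last \<sigma>, n] @ \<tau>) (butlast \<sigma>b @ [m+1] @ \<tau>b) c"
    using mn False by (simp add: K_def)
  also have "\<dots> = - int (card {ws. tab_rows (butlast \<sigma> @ [m + last \<sigma>, n] @ \<tau>) (butlast \<sigma>b @ [m+1] @ \<tau>b)
      ws \<and> count (mset (concat ws)) = c})"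
    using ov_eq_card_rows[OF ok] by simp
  also have "\<dots> = - int (card (pairs (defect_top m n) m n))" using count_top_merged[OF False m1 mn] by simp
  finally show ?thesis .
qed

lemma K_bot:
  assumes n1: "1 \<le> n" and nm: "n + 1 \<le> m"
  shows "K \<sigma> \<tau> \<sigma>b \<tau>b m n (n+1) c = - int (card (pairs (defect_bot n) m n))"
proof (cases "\<tau> = []")
  case True
  have "pairs (defect_bot n) m n = {}" using True unfolding pairs_def
      by (auto simp: frames_def defect_bot_def bot_fits_def tab_rows_Nil)
  then show ?thesis using True nm by (simp add: K_def)
next
  case False
  have m1: "1 \<le> m" using nm by simp
  have ok: "overlaps_ok (\<sigma> @ [m, n + hd \<tau>] @ tl \<tau>) (\<sigma>b @ [n+1] @ tl \<tau>b)"
  proof (rule overlaps_ok_middle[OF sigmab_length overlaps_sigma])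
    assume "\<sigma> \<noteq> []" then show "last \<sigma>b \<le> last \<sigma> \<and> last \<sigma>b \<le> m" using sigmab_last sigma_pos m1 by simp
  next
    show "length (tl \<tau>b) = length (tl \<tau>)" using taub_length by simp
    show "overlaps_ok (tl \<tau>) (tl (tl \<tau>b))" using overlaps_tau_tl[OF False] by simp
    assume "tl \<tau> \<noteq> []" then show "hd (tl \<tau>b) \<le> n + hd \<tau> \<and> hd (tl \<tau>b) \<le> hd (tl \<tau>)"
      using overlaps_tau_tl[OF False] by auto
  next
    show "n + 1 \<le> n + hd \<tau>" using tau_pos False by simp
  qed (use nm in auto)
  have "K \<sigma> \<tau> \<sigma>b \<tau>b m n (n+1) c = - ov (\<sigma> @ [m, n + hd \<tau>] @ tl \<tau>) (\<sigma>b @ [n+1] @ tl \<tau>b) c"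
    using nm False by (simp add: K_def)
  also have "\<dots> = - int (card {ws. tab_rows (\<sigma> @ [m, n + hd \<tau>] @ tl \<tau>) (\<sigma>b @ [n+1] @ tl \<tau>b) ws
      \<and> count (mset (concat ws)) = c})"
    using ov_eq_card_rows[OF ok] by simp
  also have "\<dots> = - int (card (pairs (defect_bot n) m n))" using count_bot_merged[OF False n1 nm] by simp
  finally show ?thesis .
qed

lemma K_both:
  assumes m1: "1 \<le> m"
  shows "K \<sigma> \<tau> \<sigma>b \<tau>b m m (m+1) c = int (card (pairs (defect_both m) m m))"
proof (cases "\<sigma> = [] \<or> \<tau> = []")
  case True
  have "pairs (defect_both m) m m = {}" using True unfolding pairs_def
      by (auto simp: frames_def defect_both_def top_fits_def bot_fits_def tab_rows_Nil)
  then show ?thesis using True by (auto simp: K_def)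
next
  case False
  then have sne: "\<sigma> \<noteq> []" and tne: "\<tau> \<noteq> []" by auto
  have ok: "overlaps_ok (butlast \<sigma> @ [m + last \<sigma>, m + hd \<tau>] @ tl \<tau>) (butlast \<sigma>b @ [m+1] @ tl \<tau>b)"
  proof (rule overlaps_ok_middle)
    show "length (butlast \<sigma>b) = length (butlast \<sigma>)" using sigmab_length by simp
    show "overlaps_ok (butlast \<sigma>) (butlast (butlast \<sigma>b))" using overlaps_sigma_butlast[OF sne] by simp
    assume "butlast \<sigma> \<noteq> []" then show "last (butlast \<sigma>b) \<le> last (butlast \<sigma>)
        \<and> last (butlast \<sigma>b) \<le> m + last \<sigma>"
      using overlaps_sigma_butlast[OF sne] by auto
  next
    show "length (tl \<tau>b) = length (tl \<tau>)" using taub_length by simp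
    show "overlaps_ok (tl \<tau>) (tl (tl \<tau>b))" using overlaps_tau_tl[OF tne] by simp
    assume "tl \<tau> \<noteq> []" then show "hd (tl \<tau>b) \<le> m + hd \<tau> \<and> hd (tl \<tau>b) \<le> hd (tl \<tau>)"
      using overlaps_tau_tl[OF tne] by auto
  next
    show "m + 1 \<le> m + last \<sigma>" using sigma_pos sne by simp
    show "m + 1 \<le> m + hd \<tau>" using tau_pos tne by simp
  qed
  have "K \<sigma> \<tau> \<sigma>b \<tau>b m m (m+1) c = ov (butlast \<sigma> @ [m + last \<sigma>, m + hd \<tau>] @ tl \<tau>)
      (butlast \<sigma>b @ [m+1] @ tl \<tau>b) c"
    using sne tne by (simp add: K_def)
  also have "\<dots> = int (card {ws. tab_rows (butlast \<sigma> @ [m + last \<sigma>, m + hd \<tau>] @ tl \<tau>)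
      (butlast \<sigma>b @ [m+1] @ tl \<tau>b) ws \<and> count (mset (concat ws)) = c})"
    using ov_eq_card_rows[OF ok] by simp
  also have "\<dots> = int (card (pairs (defect_both m) m m))" using count_both_merged[OF sne tne m1] by simp
  finally show ?thesis .
qed

lemma K_formula:
  assumes m1: "1 \<le> m" and n1: "1 \<le> n" and xb: "x \<le> min m n + 1"
  shows "K \<sigma> \<tau> \<sigma>b \<tau>b m n x c = int (card (pairs joined m n)) -
      (if x = 0 then 0 else int (card (pairs joined_first (m+n+1-x) (x-1))))"
proof -
  consider (a) "x \<le> m" "x \<le> n" | (b) "x = m + 1" "x \<le> n" | (c) "x \<le> m" "x = n + 1"
    | (d) "x = m + 1" "x = n + 1"
    using xb by linarith
  then show ?thesis
  proof cases
    case a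
    show ?thesis
    proof (cases "x = 0")
      case True
      have "pairs (\<lambda>e a b. joined e a b \<and> linked x a b) m n = pairs joined m n" using True
          by (intro pairs_cong) (simp add: linked_def)
      then show ?thesis using K_plain[OF m1 n1 a] True by simp
    next
      case False
      then have "card (pairs joined m n) = card (pairs (\<lambda>e a b. joined e a b \<and> linked x a b) m n)
          + card (pairs joined_first (m+n+1-x) (x-1))"
        using card_joined_unlinked a by simp
      then show ?thesis using K_plain[OF m1 n1 a] False by simp
    qed
  next
    case b
    have "card (pairs joined_first n m) = card (pairs joined m n) + card (pairs (defect_top m n) m n)"
        using card_joined_first_top m1 b by simp
    moreover have "m+n+1-x = n" "x - 1 = m" using b by auto
    ultimately show ?thesis using K_top[OF m1] b by simp
  next
    case c
    have "card (pairs joined_first m n) = card (pairs joined m n) + card (pairs (defect_bot n) m n)"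
        using card_joined_first_bot n1 c by simp
    moreover have "m+n+1-x = m" "x - 1 = n" using c by auto
    ultimately show ?thesis using K_bot[OF n1] c by simp
  next
    case d
    then have mn: "m = n" by simp
    have "card (pairs joined m m) = card (pairs (defect_both m) m m) + card (pairs joined_first m m)"
        using card_joined_square m1 by simp
    moreover have "m+n+1-x = m" "x - 1 = m" using d by auto
    ultimately show ?thesis using K_both[OF m1] d mn by simp
  qed
qed

end

(* Both sides equal J(m,n) - J(m',n') coefficientwise, by K_formula and m + n = m' + n'. *)
theorem lemma2p3:
  fixes \<sigma> \<tau> \<sigma>b \<tau>b :: "nat list" and m n m' n' x x' :: nat
  assumes "standing_hyp \<sigma> \<tau> \<sigma>b \<tau>b"
    and "m \<ge> 1" "n \<ge> 1" "m' \<ge> 1" "n' \<ge> 1" "m + n = m' + n'"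
    and "x \<le> min (min m n) (min m' n') + 1"
    and "x' \<le> min (min m n) (min m' n') + 1"
  shows "K \<sigma> \<tau> \<sigma>b \<tau>b m n x - K \<sigma> \<tau> \<sigma>b \<tau>b m' n' x
       = K \<sigma> \<tau> \<sigma>b \<tau>b m n x' - K \<sigma> \<tau> \<sigma>b \<tau>b m' n' x'"
proof
  fix c
  interpret standing \<sigma> \<tau> \<sigma>b \<tau>b c by unfold_locales (rule assms(1))
  have x_bounds: "x \<le> min m n + 1" "x \<le> min m' n' + 1" "x' \<le> min m n + 1" "x' \<le> min m' n' + 1"
    using assms(7,8) by auto
  have same_size: "m' + n' + 1 - x = m + n + 1 - x" "m' + n' + 1 - x' = m + n + 1 - x'"
    using assms(6) by auto
  show "(K \<sigma> \<tau> \<sigma>b \<tau>b m n x - K \<sigma> \<tau> \<sigma>b \<tau>b m' n' x) c = (K \<sigma> \<tau> \<sigma>b \<tau>b m n x' - K \<sigma> \<tau> \<sigma>b \<tau>b m' n' x') c"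
    using K_formula[OF assms(2,3) x_bounds(1)] K_formula[OF assms(4,5) x_bounds(2)]
      K_formula[OF assms(2,3) x_bounds(3)] K_formula[OF assms(4,5) x_bounds(4)] same_size
    by simp
qed

end
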